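(* Let $\Sigma$ be a signature and $G=(G,\sigma,\theta):\mathcal F_\Sigma\to\mathcal C$ a cwf morphism (under the standing assumptions below). Let $S$ be a type symbol not declared in $\Sigma$ and $\Gamma_S$ a precontext with ($\Gamma_S$ context)$\in\mathcal J(\Sigma)$, so that $\Sigma'=\Sigma\cup\{(\Gamma_S,S)\}$ is a signature. Then for every $A\in\mathrm{Ty}_{\mathcal C}(G(\Gamma_S))$ there is a unique cwf morphism $G'=(G',\sigma',\theta'):\mathcal F_{\Sigma'}\to\mathcal C$ with $G'\circ E=G$ and $\sigma'(\Gamma_S,S(\mathrm{OV}(\Gamma_S)))=A$, where $E:\mathcal F_\Sigma\to\mathcal F_{\Sigma'}$ is the canonical embedding.
   Context: Standing assumptions: the variable set is $V=\{1,2,3,\ldots\}$ with $\mathsf{fr}(X)=\max(\{1\}\cup\{x+1:x\in X\})$ and $\varphi(X)=\{\mathsf{fr}(X)\}$ for finite $X\subseteq V$; all declarations of signatures are on standard form, written $(\Gamma,S)$ (type) and $(\Gamma,f,U)$ (function). Preelements are terms built from variables and function symbols; a pretype is $S(t_1,\ldots,t_n)$ with $S$ a type symbol and $t_i$ preelements; $\mathrm{V}(E)$ is the set of variables of $E$; $E[\bar a/\bar x]$ is simultaneous substitution. A precontext is $\Gamma=x_1:A_1,\ldots,x_n:A_n$ with $x_k=\mathsf{fr}(\{x_1,\ldots,x_{k-1}\})$ and $\mathrm{V}(A_k)\subseteq\{x_1,\ldots,x_{k-1}\}$; $\mathrm{OV}(\Gamma)=x_1,\ldots,x_n$; $\mathrm{fresh}(\Gamma)=\mathsf{fr}(\{x_1,\ldots,x_n\})$;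 $E[\bar a/\Gamma]=E[\bar a/x_1,\ldots,x_n]$. A presignature is a set of declarations $(\Gamma,S)$ ($S$ a type symbol) and $(\Gamma,f,U)$ ($f$ a function symbol, $U$ a pretype with $\mathrm{V}(U)\subseteq\mathrm{V}(\Gamma)$), each symbol declared at most once. $\mathcal{J}(\Sigma)$ is the smallest set of judgements ("$\Gamma$ context", "$A$ type $(\Gamma)$", "$a:A\ (\Gamma)$") closed under: (R1) $\langle\rangle$ context; (R2) from $\Gamma$ context and $A$ type $(\Gamma)$ infer $\Gamma,\mathrm{fresh}(\Gamma):A$ context; (R3) from $x_1:A_1,\ldots,x_n:A_n$ context infer $x_i:A_i\ (x_1:A_1,\ldots,x_n:A_n)$; (R4) if $(\Gamma,S)\in\Sigma$ and $\bar a:\Delta\to\Gamma$ infer $S(\bar a)$ type $(\Delta)$; (R5) if $(\Gamma,f,U)\in\Sigma$, $\bar a:\Delta\to\Gamma$ and $U[\bar a/\Gamma]$ type $(\Delta)$ infer $f(\bar a):U[\bar a/\Gamma]\ (\Delta)$; where, for $\Gamma=x_1:A_1,\ldots,x_n:A_n$, "$\bar a:\Delta\to\Gamma$" abbreviates the judgements $\Delta$ context, $\Gamma$ context, $a_k:A_k[a_1,\ldots,a_{k-1}/x_1,\ldots,x_{k-1}]\ (\Delta)$ ($k=1,\ldots,n$). $\Sigma$ is a signature if ($\Gamma$ context)$\in\mathcal{J}(\Sigma)$ for $(\Gamma,S)\in\Sigma$ and ($U$ type $(\Gamma)$)$\in\mathcal{J}(\Sigma)$ for $(\Gamma,f,U)\in\Sigma$.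 A category with families (cwf) consists of: a category $\mathcal C$ with a terminal object $\top$; for each object $\Gamma$ a class $\mathrm{Ty}(\Gamma)$, and for $f:\Delta\to\Gamma$ a function $A\mapsto A\{f\}:\mathrm{Ty}(\Gamma)\to\mathrm{Ty}(\Delta)$ with $A\{1\}=A$, $A\{f\circ g\}=A\{f\}\{g\}$; for $A\in\mathrm{Ty}(\Gamma)$ an object $\Gamma.A$ and a morphism $\mathrm{p}(A)=\mathrm{p}_\Gamma(A):\Gamma.A\to\Gamma$; for $A\in\mathrm{Ty}(\Gamma)$ a class $\mathrm{Tm}(\Gamma,A)$ and for $f:\Delta\to\Gamma$ a function $a\mapsto a\{f\}:\mathrm{Tm}(\Gamma,A)\to\mathrm{Tm}(\Delta,A\{f\})$ with $a\{1\}=a$, $a\{f\circ g\}=a\{f\}\{g\}$; for each $A\in\mathrm{Ty}(\Gamma)$ an element $\mathrm{v}_A\in\mathrm{Tm}(\Gamma.A,A\{\mathrm{p}(A)\})$; for $f:\Delta\to\Gamma$ and $a\in\mathrm{Tm}(\Delta,A\{f\})$ a morphism $\langle f,a\rangle_A:\Delta\to\Gamma.A$ such that $\mathrm{p}(A)\circ\langle f,a\rangle_A=f$, $\mathrm{v}_A\{\langle f,a\rangle_A\}=a$, $\langle\mathrm{p}(A)\circ h,\mathrm{v}_A\{h\}\rangle_A=h$ for every $h:\Delta\to\Gamma.A$, and $\langle f,a\rangle_A\circ g=\langle f\circ g,a\{g\}\rangle_A$. A cwf morphism $(F,\sigma,\theta):\mathcal C\to\mathcal C'$ consists of a functor $F$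 with $F(\top)=\top'$; functions $\sigma_\Gamma:\mathrm{Ty}(\Gamma)\to\mathrm{Ty}'(F\Gamma)$ with $\sigma_\Delta(A\{f\})=\sigma_\Gamma(A)\{Ff\}$ for $f:\Delta\to\Gamma$, such that $F(\Gamma.A)=F\Gamma.\sigma_\Gamma(A)$ and $F(\mathrm{p}_\Gamma(A))=\mathrm{p}_{F\Gamma}(\sigma_\Gamma(A))$; and functions $\theta_{\Gamma,A}:\mathrm{Tm}(\Gamma,A)\to\mathrm{Tm}'(F\Gamma,\sigma_\Gamma(A))$ with $\theta_{\Delta,A\{f\}}(a\{f\})=\theta_{\Gamma,A}(a)\{Ff\}$, $\theta_{\Gamma.A,A\{\mathrm{p}(A)\}}(\mathrm{v}_A)=\mathrm{v}_{\sigma_\Gamma(A)}$, and $F(\langle f,a\rangle_A)=\langle Ff,\theta_{\Delta,A\{f\}}(a)\rangle_{\sigma_\Gamma(A)}$ for $f:\Delta\to\Gamma$, $a\in\mathrm{Tm}(\Delta,A\{f\})$. The cwf $\mathcal F_\Sigma$: objects are precontexts $\Gamma$ with ($\Gamma$ context)$\in\mathcal{J}(\Sigma)$; morphisms $\Delta\to\Gamma$ are triples $(\Delta,\Gamma,\bar a)$ with $\bar a:\Delta\to\Gamma$ a context map in $\mathcal{J}(\Sigma)$; composition $(\Gamma,\Theta,\bar t)\circ(\Delta,\Gamma,\bar s)=(\Delta,\Theta,(t_1[\bar s/\Gamma],\ldots,t_k[\bar s/\Gamma]))$; identity $(\Gamma,\Gamma,\mathrm{OV}(\Gamma))$; terminal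 object $\langle\rangle$. $\mathrm{Ty}(\Gamma)=\{(\Gamma,A): (A\text{ type }(\Gamma))\in\mathcal{J}(\Sigma)\}$ with $(\Gamma,A)\{(\Delta,\Gamma,\bar a)\}=(\Delta,A[\bar a/\Gamma])$; $\mathrm{Tm}(\Gamma,(\Gamma,A))=\{((\Gamma,A),a): (a:A\ (\Gamma))\in\mathcal{J}(\Sigma)\}$ with $((\Gamma,A),a)\{(\Delta,\Gamma,\bar a)\}=((\Delta,A[\bar a/\Gamma]),a[\bar a/\Gamma])$; for $\mathrm S=(\Gamma,S)$: $\Gamma.\mathrm S=\langle\Gamma,\mathrm{fresh}(\Gamma):S\rangle$, $\mathrm{p}_\Gamma(\mathrm S)=(\Gamma.\mathrm S,\Gamma,\mathrm{OV}(\Gamma))$, $\mathrm{v}_{\mathrm S}=((\Gamma.\mathrm S,S),\mathrm{fresh}(\Gamma))$, $\langle(\Delta,\Gamma,\bar s),((\Delta,S[\bar s/\Gamma]),b)\rangle_{\mathrm S}=(\Delta,\Gamma.\mathrm S,(\bar s,b))$. For a cwf morphism $(F,\sigma,\theta)$ out of $\mathcal F_\Sigma$ write $\sigma(\Gamma,A)$ for $\sigma_\Gamma((\Gamma,A))$ and $\theta(\Gamma,A,a)$ for $\theta_{\Gamma,(\Gamma,A)}(((\Gamma,A),a))$. For signatures $\Sigma\subseteq\Sigma'$, the canonical embedding $E:\mathcal F_\Sigma\to\mathcal F_{\Sigma'}$ is the cwf morphism which is the identity on objects, morphisms, types and terms. *)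

theory Defs
  imports Main
begin

text \<open>Variables are natural numbers (the paper's V = {1,2,...}; the number 0 never
occurs in precontexts since fr yields values >= 1).  'f is the type of function
symbols, 's the type of type symbols.\<close>

datatype 'f pre = Var nat | App 'f "'f pre list"

datatype ('s, 'f) pty = PTy 's "'f pre list"

type_synonym ('s, 'f) ctx = "(nat \<times> ('s, 'f) pty) list"

fun varsP :: "'f pre \<Rightarrow> nat set" where
  "varsP (Var x) = {x}"
| "varsP (App f ts) = (\<Union>t\<in>set ts. varsP t)"

fun varsT :: "('s, 'f) pty \<Rightarrow> nat set" where
  "varsT (PTy S ts) = (\<Union>t\<in>set ts. varsP t)"

definition fr :: "nat set \<Rightarrow> nat" where
  "fr X = Max ({1} \<union> Suc ` X)"

definition OV :: "('s, 'f) ctx \<Rightarrow> nat list" where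
  "OV \<Gamma> = map fst \<Gamma>"

definition fresh :: "('s, 'f) ctx \<Rightarrow> nat" where
  "fresh \<Gamma> = fr (set (OV \<Gamma>))"

definition precontext :: "('s, 'f) ctx \<Rightarrow> bool" where
  "precontext \<Gamma> \<longleftrightarrow>
     (\<forall>k < length \<Gamma>. fst (\<Gamma> ! k) = fr (set (map fst (take k \<Gamma>)))
                    \<and> varsT (snd (\<Gamma> ! k)) \<subseteq> set (map fst (take k \<Gamma>)))"

definition smap :: "nat list \<Rightarrow> 'f pre list \<Rightarrow> nat \<Rightarrow> 'f pre" where
  "smap xs as x = (case map_of (zip xs as) x of None \<Rightarrow> Var x | Some t \<Rightarrow> t)"

fun substP :: "(nat \<Rightarrow> 'f pre) \<Rightarrow> 'f pre \<Rightarrow> 'f pre" where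
  "substP \<rho> (Var x) = \<rho> x"
| "substP \<rho> (App f ts) = App f (map (substP \<rho>) ts)"

fun substT :: "(nat \<Rightarrow> 'f pre) \<Rightarrow> ('s, 'f) pty \<Rightarrow> ('s, 'f) pty" where
  "substT \<rho> (PTy S ts) = PTy S (map (substP \<rho>) ts)"

abbreviation substPC :: "'f pre \<Rightarrow> 'f pre list \<Rightarrow> ('s, 'f) ctx \<Rightarrow> 'f pre" where
  "substPC t as \<Gamma> \<equiv> substP (smap (OV \<Gamma>) as) t"

abbreviation substTC :: "('s, 'f) pty \<Rightarrow> 'f pre list \<Rightarrow> ('s, 'f) ctx \<Rightarrow> ('s, 'f) pty" where
  "substTC A as \<Gamma> \<equiv> substT (smap (OV \<Gamma>) as) A"

datatype ('s, 'f) decl =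
    TDecl "('s, 'f) ctx" 's
  | FDecl "('s, 'f) ctx" 'f "('s, 'f) pty"

definition is_presig :: "('s, 'f) decl set \<Rightarrow> bool" where
  "is_presig Sig \<longleftrightarrow>
     (\<forall>\<Gamma> S. TDecl \<Gamma> S \<in> Sig \<longrightarrow> precontext \<Gamma>)
   \<and> (\<forall>\<Gamma> f U. FDecl \<Gamma> f U \<in> Sig \<longrightarrow> precontext \<Gamma> \<and> varsT U \<subseteq> set (OV \<Gamma>))
   \<and> (\<forall>\<Gamma> \<Gamma>' S. TDecl \<Gamma> S \<in> Sig \<longrightarrow> TDecl \<Gamma>' S \<in> Sig \<longrightarrow> \<Gamma> = \<Gamma>')
   \<and> (\<forall>\<Gamma> \<Gamma>' f U U'. FDecl \<Gamma> f U \<in> Sig \<longrightarrow> FDecl \<Gamma>' f U' \<in> Sig \<longrightarrow> \<Gamma> = \<Gamma>' \<and> U = U')"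

datatype ('s, 'f) judg =
    JCtx "('s, 'f) ctx"
  | JTy "('s, 'f) pty" "('s, 'f) ctx"
  | JTm "'f pre" "('s, 'f) pty" "('s, 'f) ctx"

definition cmap :: "('s, 'f) judg set \<Rightarrow> 'f pre list \<Rightarrow> ('s, 'f) ctx \<Rightarrow> ('s, 'f) ctx \<Rightarrow> bool" where
  "cmap J as \<Delta> \<Gamma> \<longleftrightarrow> JCtx \<Delta> \<in> J \<and> JCtx \<Gamma> \<in> J \<and> length as = length \<Gamma>
     \<and> (\<forall>k < length \<Gamma>. JTm (as ! k)
           (substT (smap (map fst (take k \<Gamma>)) (take k as)) (snd (\<Gamma> ! k))) \<Delta> \<in> J)"

inductive_set Jdg :: "('s, 'f) decl set \<Rightarrow> ('s, 'f) judg set" for Sig where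
  R1: "JCtx [] \<in> Jdg Sig"
| R2: "JCtx \<Gamma> \<in> Jdg Sig \<Longrightarrow> JTy A \<Gamma> \<in> Jdg Sig \<Longrightarrow> JCtx (\<Gamma> @ [(fresh \<Gamma>, A)]) \<in> Jdg Sig"
| R3: "JCtx \<Gamma> \<in> Jdg Sig \<Longrightarrow> i < length \<Gamma> \<Longrightarrow> JTm (Var (fst (\<Gamma> ! i))) (snd (\<Gamma> ! i)) \<Gamma> \<in> Jdg Sig"
| R4: "TDecl \<Gamma> S \<in> Sig \<Longrightarrow>
       JCtx \<Delta> \<in> Jdg Sig \<Longrightarrow> JCtx \<Gamma> \<in> Jdg Sig \<Longrightarrow> length as = length \<Gamma> \<Longrightarrow>
       (\<forall>k < length \<Gamma>. JTm (as ! k)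
           (substT (smap (map fst (take k \<Gamma>)) (take k as)) (snd (\<Gamma> ! k))) \<Delta> \<in> Jdg Sig) \<Longrightarrow>
       JTy (PTy S as) \<Delta> \<in> Jdg Sig"
| R5: "FDecl \<Gamma> f U \<in> Sig \<Longrightarrow>
       JCtx \<Delta> \<in> Jdg Sig \<Longrightarrow> JCtx \<Gamma> \<in> Jdg Sig \<Longrightarrow> length as = length \<Gamma> \<Longrightarrow>
       (\<forall>k < length \<Gamma>. JTm (as ! k)
           (substT (smap (map fst (take k \<Gamma>)) (take k as)) (snd (\<Gamma> ! k))) \<Delta> \<in> Jdg Sig) \<Longrightarrow>
       JTy (substTC U as \<Gamma>) \<Delta> \<in> Jdg Sig \<Longrightarrow>
       JTm (App f as) (substTC U as \<Gamma>) \<Delta> \<in> Jdg Sig"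

definition is_signature :: "('s, 'f) decl set \<Rightarrow> bool" where
  "is_signature Sig \<longleftrightarrow> is_presig Sig
     \<and> (\<forall>\<Gamma> S. TDecl \<Gamma> S \<in> Sig \<longrightarrow> JCtx \<Gamma> \<in> Jdg Sig)
     \<and> (\<forall>\<Gamma> f U. FDecl \<Gamma> f U \<in> Sig \<longrightarrow> JTy U \<Gamma> \<in> Jdg Sig)"

text \<open>Each morphism has a domain and
codomain; A{f} is tsub A f, a{f} (for a : A) is esub A a f, \<Gamma>.A is ext \<Gamma> A,
p(A) is pr \<Gamma> A, v_A is var \<Gamma> A and \<langle>f,a\<rangle>_A is pair A f a.\<close>

record ('o, 'm, 't, 'e) cwf =
  Ob :: "'o set"
  Arr :: "'m set"
  dm :: "'m \<Rightarrow> 'o"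
  cd :: "'m \<Rightarrow> 'o"
  cmp :: "'m \<Rightarrow> 'm \<Rightarrow> 'm"     (* cmp g f = g \<circ> f *)
  idm :: "'o \<Rightarrow> 'm"
  trm :: "'o"
  cTy :: "'o \<Rightarrow> 't set"
  tsub :: "'t \<Rightarrow> 'm \<Rightarrow> 't"
  ext :: "'o \<Rightarrow> 't \<Rightarrow> 'o"
  pr :: "'o \<Rightarrow> 't \<Rightarrow> 'm"
  cTm :: "'o \<Rightarrow> 't \<Rightarrow> 'e set"
  esub :: "'t \<Rightarrow> 'e \<Rightarrow> 'm \<Rightarrow> 'e"
  var :: "'o \<Rightarrow> 't \<Rightarrow> 'e"
  pair :: "'t \<Rightarrow> 'm \<Rightarrow> 'e \<Rightarrow> 'm"

definition Hom :: "('o, 'm, 't, 'e, 'z) cwf_scheme \<Rightarrow> 'o \<Rightarrow> 'o \<Rightarrow> 'm set" where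
  "Hom C \<Delta> \<Gamma> = {f \<in> Arr C. dm C f = \<Delta> \<and> cd C f = \<Gamma>}"

definition is_cwf :: "('o, 'm, 't, 'e, 'z) cwf_scheme \<Rightarrow> bool" where
  "is_cwf C \<longleftrightarrow>
   \<comment> \<open>category\<close>
     (\<forall>f \<in> Arr C. dm C f \<in> Ob C \<and> cd C f \<in> Ob C)
   \<and> (\<forall>\<Gamma> \<in> Ob C. idm C \<Gamma> \<in> Hom C \<Gamma> \<Gamma>)
   \<and> (\<forall>\<Delta> \<Gamma> \<Theta> f g. f \<in> Hom C \<Delta> \<Gamma> \<longrightarrow> g \<in> Hom C \<Gamma> \<Theta> \<longrightarrow> cmp C g f \<in> Hom C \<Delta> \<Theta>)
   \<and> (\<forall>f \<in> Arr C. cmp C (idm C (cd C f)) f = f \<and> cmp C f (idm C (dm C f)) = f)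
   \<and> (\<forall>f g h. f \<in> Arr C \<longrightarrow> g \<in> Arr C \<longrightarrow> h \<in> Arr C \<longrightarrow> cd C f = dm C g \<longrightarrow> cd C g = dm C h \<longrightarrow>
        cmp C h (cmp C g f) = cmp C (cmp C h g) f)
   \<comment> \<open>terminal object\<close>
   \<and> trm C \<in> Ob C \<and> (\<forall>\<Gamma> \<in> Ob C. \<exists>!f. f \<in> Hom C \<Gamma> (trm C))
   \<comment> \<open>types\<close>
   \<and> (\<forall>\<Delta> \<Gamma> f A. f \<in> Hom C \<Delta> \<Gamma> \<longrightarrow> A \<in> cTy C \<Gamma> \<longrightarrow> tsub C A f \<in> cTy C \<Delta>)
   \<and> (\<forall>\<Gamma> \<in> Ob C. \<forall>A \<in> cTy C \<Gamma>. tsub C A (idm C \<Gamma>) = A)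
   \<and> (\<forall>\<Theta> \<Delta> \<Gamma> f g A. f \<in> Hom C \<Delta> \<Gamma> \<longrightarrow> g \<in> Hom C \<Theta> \<Delta> \<longrightarrow> A \<in> cTy C \<Gamma> \<longrightarrow>
        tsub C A (cmp C f g) = tsub C (tsub C A f) g)
   \<comment> \<open>comprehension\<close>
   \<and> (\<forall>\<Gamma> \<in> Ob C. \<forall>A \<in> cTy C \<Gamma>. ext C \<Gamma> A \<in> Ob C \<and> pr C \<Gamma> A \<in> Hom C (ext C \<Gamma> A) \<Gamma>)
   \<comment> \<open>terms\<close>
   \<and> (\<forall>\<Delta> \<Gamma> f A a. f \<in> Hom C \<Delta> \<Gamma> \<longrightarrow> A \<in> cTy C \<Gamma> \<longrightarrow> a \<in> cTm C \<Gamma> A \<longrightarrow>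
        esub C A a f \<in> cTm C \<Delta> (tsub C A f))
   \<and> (\<forall>\<Gamma> \<in> Ob C. \<forall>A \<in> cTy C \<Gamma>. \<forall>a \<in> cTm C \<Gamma> A. esub C A a (idm C \<Gamma>) = a)
   \<and> (\<forall>\<Theta> \<Delta> \<Gamma> f g A a. f \<in> Hom C \<Delta> \<Gamma> \<longrightarrow> g \<in> Hom C \<Theta> \<Delta> \<longrightarrow> A \<in> cTy C \<Gamma> \<longrightarrow> a \<in> cTm C \<Gamma> A \<longrightarrow>
        esub C A a (cmp C f g) = esub C (tsub C A f) (esub C A a f) g)
   \<and> (\<forall>\<Gamma> \<in> Ob C. \<forall>A \<in> cTy C \<Gamma>. var C \<Gamma> A \<in> cTm C (ext C \<Gamma> A) (tsub C A (pr C \<Gamma> A)))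
   \<comment> \<open>pairing\<close>
   \<and> (\<forall>\<Delta> \<Gamma> f A a. f \<in> Hom C \<Delta> \<Gamma> \<longrightarrow> A \<in> cTy C \<Gamma> \<longrightarrow> a \<in> cTm C \<Delta> (tsub C A f) \<longrightarrow>
        pair C A f a \<in> Hom C \<Delta> (ext C \<Gamma> A)
      \<and> cmp C (pr C \<Gamma> A) (pair C A f a) = f
      \<and> esub C (tsub C A (pr C \<Gamma> A)) (var C \<Gamma> A) (pair C A f a) = a
      \<and> (\<forall>\<Theta> g. g \<in> Hom C \<Theta> \<Delta> \<longrightarrow>
           cmp C (pair C A f a) g = pair C A (cmp C f g) (esub C (tsub C A f) a g)))
   \<and> (\<forall>\<Delta> \<Gamma> A h. \<Gamma> \<in> Ob C \<longrightarrow> A \<in> cTy C \<Gamma> \<longrightarrow> h \<in> Hom C \<Delta> (ext C \<Gamma> A) \<longrightarrow>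
        pair C A (cmp C (pr C \<Gamma> A) h) (esub C (tsub C A (pr C \<Gamma> A)) (var C \<Gamma> A) h) = h)"

record ('o1, 'm1, 't1, 'e1, 'o2, 'm2, 't2, 'e2) cwf_mor =
  Fo :: "'o1 \<Rightarrow> 'o2"
  Fa :: "'m1 \<Rightarrow> 'm2"
  sg :: "'o1 \<Rightarrow> 't1 \<Rightarrow> 't2"
  th :: "'o1 \<Rightarrow> 't1 \<Rightarrow> 'e1 \<Rightarrow> 'e2"

definition cwf_morphism ::
  "('o1, 'm1, 't1, 'e1, 'z1) cwf_scheme \<Rightarrow> ('o2, 'm2, 't2, 'e2, 'z2) cwf_scheme \<Rightarrow>
   ('o1, 'm1, 't1, 'e1, 'o2, 'm2, 't2, 'e2) cwf_mor \<Rightarrow> bool" where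
  "cwf_morphism C D F \<longleftrightarrow>
   \<comment> \<open>functor preserving the terminal object\<close>
     (\<forall>\<Gamma> \<in> Ob C. Fo F \<Gamma> \<in> Ob D)
   \<and> (\<forall>\<Delta> \<Gamma> f. f \<in> Hom C \<Delta> \<Gamma> \<longrightarrow> Fa F f \<in> Hom D (Fo F \<Delta>) (Fo F \<Gamma>))
   \<and> (\<forall>\<Gamma> \<in> Ob C. Fa F (idm C \<Gamma>) = idm D (Fo F \<Gamma>))
   \<and> (\<forall>f g. f \<in> Arr C \<longrightarrow> g \<in> Arr C \<longrightarrow> cd C f = dm C g \<longrightarrow>
        Fa F (cmp C g f) = cmp D (Fa F g) (Fa F f))
   \<and> Fo F (trm C) = trm D
   \<comment> \<open>types\<close>
   \<and> (\<forall>\<Gamma> \<in> Ob C. \<forall>A \<in> cTy C \<Gamma>. sg F \<Gamma> A \<in> cTy D (Fo F \<Gamma>))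
   \<and> (\<forall>\<Delta> \<Gamma> f A. f \<in> Hom C \<Delta> \<Gamma> \<longrightarrow> A \<in> cTy C \<Gamma> \<longrightarrow>
        sg F \<Delta> (tsub C A f) = tsub D (sg F \<Gamma> A) (Fa F f))
   \<and> (\<forall>\<Gamma> \<in> Ob C. \<forall>A \<in> cTy C \<Gamma>.
        Fo F (ext C \<Gamma> A) = ext D (Fo F \<Gamma>) (sg F \<Gamma> A)
      \<and> Fa F (pr C \<Gamma> A) = pr D (Fo F \<Gamma>) (sg F \<Gamma> A))
   \<comment> \<open>terms\<close>
   \<and> (\<forall>\<Gamma> \<in> Ob C. \<forall>A \<in> cTy C \<Gamma>. \<forall>a \<in> cTm C \<Gamma> A. th F \<Gamma> A a \<in> cTm D (Fo F \<Gamma>) (sg F \<Gamma> A))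
   \<and> (\<forall>\<Delta> \<Gamma> f A a. f \<in> Hom C \<Delta> \<Gamma> \<longrightarrow> A \<in> cTy C \<Gamma> \<longrightarrow> a \<in> cTm C \<Gamma> A \<longrightarrow>
        th F \<Delta> (tsub C A f) (esub C A a f) = esub D (sg F \<Gamma> A) (th F \<Gamma> A a) (Fa F f))
   \<and> (\<forall>\<Gamma> \<in> Ob C. \<forall>A \<in> cTy C \<Gamma>.
        th F (ext C \<Gamma> A) (tsub C A (pr C \<Gamma> A)) (var C \<Gamma> A) = var D (Fo F \<Gamma>) (sg F \<Gamma> A))
   \<and> (\<forall>\<Delta> \<Gamma> f A a. f \<in> Hom C \<Delta> \<Gamma> \<longrightarrow> A \<in> cTy C \<Gamma> \<longrightarrow> a \<in> cTm C \<Delta> (tsub C A f) \<longrightarrow>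
        Fa F (pair C A f a) = pair D (sg F \<Gamma> A) (Fa F f) (th F \<Delta> (tsub C A f) a))"

definition mor_comp ::
  "('o2, 'm2, 't2, 'e2, 'o3, 'm3, 't3, 'e3) cwf_mor \<Rightarrow> ('o1, 'm1, 't1, 'e1, 'o2, 'm2, 't2, 'e2) cwf_mor \<Rightarrow>
   ('o1, 'm1, 't1, 'e1, 'o3, 'm3, 't3, 'e3) cwf_mor" where
  "mor_comp G F = \<lparr> Fo = Fo G \<circ> Fo F, Fa = Fa G \<circ> Fa F,
      sg = (\<lambda>\<Gamma> A. sg G (Fo F \<Gamma>) (sg F \<Gamma> A)),
      th = (\<lambda>\<Gamma> A a. th G (Fo F \<Gamma>) (sg F \<Gamma> A) (th F \<Gamma> A a)) \<rparr>"

text \<open>Equality of two cwf morphisms out of C: equality of all their components on the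
objects, morphisms, types and terms of C (values outside these are irrelevant junk).\<close>
definition mor_eq ::
  "('o1, 'm1, 't1, 'e1, 'z1) cwf_scheme \<Rightarrow>
   ('o1, 'm1, 't1, 'e1, 'o2, 'm2, 't2, 'e2) cwf_mor \<Rightarrow>
   ('o1, 'm1, 't1, 'e1, 'o2, 'm2, 't2, 'e2) cwf_mor \<Rightarrow> bool" where
  "mor_eq C F G \<longleftrightarrow>
     (\<forall>\<Gamma> \<in> Ob C. Fo F \<Gamma> = Fo G \<Gamma>)
   \<and> (\<forall>f \<in> Arr C. Fa F f = Fa G f)
   \<and> (\<forall>\<Gamma> \<in> Ob C. \<forall>A \<in> cTy C \<Gamma>. sg F \<Gamma> A = sg G \<Gamma> A)
   \<and> (\<forall>\<Gamma> \<in> Ob C. \<forall>A \<in> cTy C \<Gamma>. \<forall>a \<in> cTm C \<Gamma> A. th F \<Gamma> A a = th G \<Gamma> A a)"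

type_synonym ('s, 'f) fmor = "('s, 'f) ctx \<times> ('s, 'f) ctx \<times> 'f pre list"
type_synonym ('s, 'f) fty = "('s, 'f) ctx \<times> ('s, 'f) pty"
type_synonym ('s, 'f) ftm = "('s, 'f) fty \<times> 'f pre"

definition FOb :: "('s, 'f) decl set \<Rightarrow> ('s, 'f) ctx set" where
  "FOb Sig = {\<Gamma>. precontext \<Gamma> \<and> JCtx \<Gamma> \<in> Jdg Sig}"

definition FSig :: "('s, 'f) decl set \<Rightarrow>
    (('s, 'f) ctx, ('s, 'f) fmor, ('s, 'f) fty, ('s, 'f) ftm) cwf" where
  "FSig Sig = \<lparr>
     Ob = FOb Sig,
     Arr = {(\<Delta>, \<Gamma>, as). \<Delta> \<in> FOb Sig \<and> \<Gamma> \<in> FOb Sig \<and> cmap (Jdg Sig) as \<Delta> \<Gamma>},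
     dm = (\<lambda>(\<Delta>, \<Gamma>, as). \<Delta>),
     cd = (\<lambda>(\<Delta>, \<Gamma>, as). \<Gamma>),
     cmp = (\<lambda>(\<Gamma>, \<Theta>, ts) (\<Delta>, \<Gamma>', ss). (\<Delta>, \<Theta>, map (\<lambda>t. substPC t ss \<Gamma>') ts)),
     idm = (\<lambda>\<Gamma>. (\<Gamma>, \<Gamma>, map Var (OV \<Gamma>))),
     trm = [],
     cTy = (\<lambda>\<Gamma>. {(\<Gamma>', A). \<Gamma>' = \<Gamma> \<and> JTy A \<Gamma> \<in> Jdg Sig}),
     tsub = (\<lambda>(\<Gamma>, A) (\<Delta>, \<Gamma>', as). (\<Delta>, substTC A as \<Gamma>)),
     ext = (\<lambda>\<Gamma> (\<Gamma>', A). \<Gamma> @ [(fresh \<Gamma>, A)]),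
     pr = (\<lambda>\<Gamma> (\<Gamma>', A). (\<Gamma> @ [(fresh \<Gamma>, A)], \<Gamma>, map Var (OV \<Gamma>))),
     cTm = (\<lambda>\<Gamma> (\<Gamma>', A). {((\<Gamma>'', A'), a). \<Gamma>'' = \<Gamma> \<and> A' = A \<and> \<Gamma>' = \<Gamma> \<and> JTm a A \<Gamma> \<in> Jdg Sig}),
     esub = (\<lambda>(\<Gamma>, A) (_, a) (\<Delta>, \<Gamma>', as). ((\<Delta>, substTC A as \<Gamma>), substPC a as \<Gamma>)),
     var = (\<lambda>\<Gamma> (\<Gamma>', A). ((\<Gamma> @ [(fresh \<Gamma>, A)], A), Var (fresh \<Gamma>))),
     pair = (\<lambda>(\<Gamma>, A) (\<Delta>, \<Gamma>', ss) (_, b). (\<Delta>, \<Gamma> @ [(fresh \<Gamma>, A)], ss @ [b]))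
   \<rparr>"

definition Emb :: "(('s, 'f) ctx, ('s, 'f) fmor, ('s, 'f) fty, ('s, 'f) ftm,
                    ('s, 'f) ctx, ('s, 'f) fmor, ('s, 'f) fty, ('s, 'f) ftm) cwf_mor" where
  "Emb = \<lparr> Fo = id, Fa = id, sg = (\<lambda>\<Gamma> A. A), th = (\<lambda>\<Gamma> A a. a) \<rparr>"

end

theory Submission
  imports Defs
begin

text \<open>
  The extension is defined by recursion on raw syntax.  A type \<open>T(a\<^sub>1, \<dots>, a\<^sub>n)\<close> or term
  \<open>f(a\<^sub>1, \<dots>, a\<^sub>n)\<close> is sent to the semantic generic instance of the symbol (\<open>A\<close> for the new
  symbol \<open>S\<close>, the image under \<open>G\<close> of \<open>T(OV \<Gamma>)\<close> resp. \<open>f(OV \<Gamma>)\<close> for the old ones) substituted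
  along the iterated pairing \<open>\<langle>\<langle>!, \<lbrakk>a\<^sub>1\<rbrakk>\<rangle>, \<dots>, \<lbrakk>a\<^sub>n\<rbrakk>\<rangle>\<close>, and a context to the iterated comprehension
  of its interpreted types.  A simultaneous induction over the derivations of \<open>J(\<Sigma>')\<close> shows that
  this is well typed and commutes with every semantic substitution along an environment, which is
  exactly what a cwf morphism needs.  On \<open>\<Sigma>\<close>-judgements the interpretation coincides with \<open>G\<close>,
  because \<open>G\<close> itself commutes with substitution.

  Uniqueness holds because in the term model every morphism is an iterated pairing of terms
  and every context an iterated comprehension, so a cwf morphism out of it is determined by its
  values on the generic instances of the declared symbols; these are fixed by \<open>G' \<circ> E = G\<close>
  and by the value on \<open>S(OV \<Gamma>\<^sub>S)\<close>.
\<close>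

section \<open>Precontexts and substitution\<close>

lemma less_fr: "finite X \<Longrightarrow> x \<in> X \<Longrightarrow> x < fr X"
  unfolding fr_def by (rule less_le_trans[of _ "Suc x"]) (auto intro: Max_ge)

lemma fresh_notin_OV: "fresh \<Gamma> \<notin> set (OV \<Gamma>)"
  unfolding fresh_def using less_fr[of "set (OV \<Gamma>)"] by auto

lemma precontext_nth_fst: "precontext \<Gamma> \<Longrightarrow> k < length \<Gamma> \<Longrightarrow> fst (\<Gamma> ! k) = fresh (take k \<Gamma>)"
  unfolding precontext_def fresh_def OV_def by (simp add: take_map)

lemma distinct_OV_precontext: assumes "precontext \<Gamma>" shows "distinct (OV \<Gamma>)"
proof -
  have "\<And>i j. i < j \<Longrightarrow> j < length \<Gamma> \<Longrightarrow> fst (\<Gamma>!i) \<noteq> fst (\<Gamma>!j)"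
  proof -
    fix i j assume ij: "i < j" "j < length \<Gamma>"
    have "fst (\<Gamma>!i) \<in> set (OV (take j \<Gamma>))" using ij
      by (auto simp: OV_def in_set_conv_nth intro!: image_eqI[of _ fst "\<Gamma>!i"] exI[of _ i])
    then show "fst (\<Gamma>!i) \<noteq> fst (\<Gamma>!j)" using precontext_nth_fst[OF assms ij(2)] fresh_notin_OV by metis
  qed
  then show ?thesis unfolding OV_def distinct_conv_nth
    by (metis length_map linorder_neqE_nat nth_map)
qed

lemma precontext_take: "precontext \<Gamma> \<Longrightarrow> precontext (take k \<Gamma>)"
  unfolding precontext_def by (auto simp: min_def)

lemma take_Suc_precontext: "precontext \<Gamma> \<Longrightarrow> k < length \<Gamma> \<Longrightarrow>
   take (Suc k) \<Gamma> = take k \<Gamma> @ [(fresh (take k \<Gamma>), snd (\<Gamma>!k))]"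
  by (simp add: take_Suc_conv_app_nth precontext_nth_fst[symmetric])

lemma precontext_snoc: "precontext (\<Gamma> @ [(fresh \<Gamma>, B)]) \<longleftrightarrow> precontext \<Gamma> \<and> varsT B \<subseteq> set (OV \<Gamma>)"
proof -
  have a: "\<And>k. k < length \<Gamma> \<Longrightarrow> (\<Gamma> @ [(fresh \<Gamma>, B)]) ! k = \<Gamma> ! k" by (simp add: nth_append)
  show ?thesis
    unfolding precontext_def by (auto simp: a nth_append less_Suc_eq fresh_def OV_def)
qed

lemma smap_Var: "smap xs (map Var xs) x = Var x"
  unfolding smap_def by (simp add: map_of_zip_map)

lemma substP_ident: "(\<forall>x. \<rho> x = Var x) \<Longrightarrow> substP \<rho> t = t"
  by (induction t) (auto intro: map_idI)

lemma substT_ident: "(\<forall>x. \<rho> x = Var x) \<Longrightarrow> substT \<rho> B = B"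
  by (cases B) (auto intro: map_idI substP_ident)

lemma substP_smap_Var[simp]: "substP (smap xs (map Var xs)) t = t"
  by (rule substP_ident) (simp add: smap_Var)

lemma substT_smap_Var[simp]: "substT (smap xs (map Var xs)) B = B"
  by (rule substT_ident) (simp add: smap_Var)

lemma smap_nth: "distinct xs \<Longrightarrow> length as = length xs \<Longrightarrow> i < length xs \<Longrightarrow> smap xs as (xs!i) = as!i"
  unfolding smap_def by (simp add: map_of_zip_nth)

section \<open>Metatheory of the judgements\<close>

lemma Jdg_vars: "j \<in> Jdg X \<Longrightarrow> (case j of JCtx \<Gamma> \<Rightarrow> True
   | JTy B \<Gamma> \<Rightarrow> varsT B \<subseteq> set (OV \<Gamma>) | JTm a B \<Gamma> \<Rightarrow> varsP a \<subseteq> set (OV \<Gamma>))"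
proof (induction rule: Jdg.induct)
  case (R3 \<Gamma> i) then show ?case by (auto simp: OV_def)
next
  case (R4 \<Gamma> S \<Delta> as) then show ?case by (force simp: in_set_conv_nth)
next
  case (R5 \<Gamma> f U \<Delta> as) then show ?case by (force simp: in_set_conv_nth)
qed auto

lemma JTy_vars: "JTy B \<Gamma> \<in> Jdg X \<Longrightarrow> varsT B \<subseteq> set (OV \<Gamma>)"
  using Jdg_vars by fastforce

lemma Jdg_precontext: "j \<in> Jdg X \<Longrightarrow> (case j of JCtx \<Gamma> \<Rightarrow> precontext \<Gamma> | _ \<Rightarrow> True)"
proof (induction rule: Jdg.induct)
  case R1 then show ?case by (simp add: precontext_def)
next
  case (R2 \<Gamma> A) then show ?case by (simp add: precontext_snoc JTy_vars)
qed auto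

lemma JCtx_precontext: "JCtx \<Gamma> \<in> Jdg X \<Longrightarrow> precontext \<Gamma>"
  using Jdg_precontext by fastforce

lemma Jdg_presupposition: "j \<in> Jdg X \<Longrightarrow> (case j of JCtx \<Gamma> \<Rightarrow> True
   | JTy B \<Gamma> \<Rightarrow> JCtx \<Gamma> \<in> Jdg X | JTm a B \<Gamma> \<Rightarrow> JCtx \<Gamma> \<in> Jdg X)"
  by (induction rule: Jdg.induct) auto

lemma JTy_JCtx: "JTy B \<Gamma> \<in> Jdg X \<Longrightarrow> JCtx \<Gamma> \<in> Jdg X"
  using Jdg_presupposition by fastforce

lemma JTm_JCtx: "JTm a B \<Gamma> \<in> Jdg X \<Longrightarrow> JCtx \<Gamma> \<in> Jdg X"
  using Jdg_presupposition by fastforce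

lemma JCtx_snoc_cases: "JCtx \<Gamma>' \<in> Jdg X \<Longrightarrow> \<Gamma>' = [] \<or> (\<exists>\<Gamma> B. \<Gamma>' = \<Gamma> @ [(fresh \<Gamma>, B)] \<and> JCtx \<Gamma> \<in> Jdg X \<and> JTy B \<Gamma> \<in> Jdg X)"
  by (erule Jdg.cases) auto

lemma Jdg_weaken: "j \<in> Jdg X \<Longrightarrow> (case j of JCtx \<Gamma> \<Rightarrow> True
   | JTy B \<Gamma> \<Rightarrow> (\<forall>y C. JCtx (\<Gamma> @ [(y, C)]) \<in> Jdg X \<longrightarrow> JTy B (\<Gamma> @ [(y, C)]) \<in> Jdg X)
   | JTm a B \<Gamma> \<Rightarrow> (\<forall>y C. JCtx (\<Gamma> @ [(y, C)]) \<in> Jdg X \<longrightarrow> JTm a B (\<Gamma> @ [(y, C)]) \<in> Jdg X))"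
proof (induction rule: Jdg.induct)
  case (R3 \<Gamma> i)
  show ?case
  proof (simp, intro allI impI)
    fix y C assume h: "JCtx (\<Gamma> @ [(y, C)]) \<in> Jdg X"
    have "JTm (Var (fst ((\<Gamma> @ [(y, C)]) ! i))) (snd ((\<Gamma> @ [(y, C)]) ! i)) (\<Gamma> @ [(y, C)]) \<in> Jdg X"
      by (rule Jdg.R3[OF h]) (use R3 in simp)
    then show "JTm (Var (fst (\<Gamma> ! i))) (snd (\<Gamma> ! i)) (\<Gamma> @ [(y, C)]) \<in> Jdg X"
      using R3 by (simp add: nth_append)
  qed
next
  case (R4 \<Gamma> S \<Delta> as)
  then show ?case by (auto intro!: Jdg.R4)
next
  case (R5 \<Gamma> f U \<Delta> as)
  then show ?case by (auto intro!: Jdg.R5)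
qed auto

lemma JTy_weaken: "JTy B \<Gamma> \<in> Jdg X \<Longrightarrow> JCtx (\<Gamma> @ [(y, C)]) \<in> Jdg X \<Longrightarrow> JTy B (\<Gamma> @ [(y, C)]) \<in> Jdg X"
  using Jdg_weaken by fastforce

lemma Jdg_prefix: "j \<in> Jdg X \<Longrightarrow> (case j of JCtx \<Gamma> \<Rightarrow>
    (\<forall>k \<le> length \<Gamma>. JCtx (take k \<Gamma>) \<in> Jdg X \<and> (k < length \<Gamma> \<longrightarrow> JTy (snd (\<Gamma>!k)) (take k \<Gamma>) \<in> Jdg X)
      \<and> (k < length \<Gamma> \<longrightarrow> JTy (snd (\<Gamma>!k)) \<Gamma> \<in> Jdg X)) | _ \<Rightarrow> True)"
proof (induction rule: Jdg.induct)
  case R1 then show ?case by (auto intro: Jdg.R1)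
next
  case (R2 \<Gamma> A)
  have c: "JCtx (\<Gamma> @ [(fresh \<Gamma>, A)]) \<in> Jdg X" using R2 by (auto intro: Jdg.R2)
  define \<Gamma>' where "\<Gamma>' = \<Gamma> @ [(fresh \<Gamma>, A)]"
  have "\<forall>k \<le> length \<Gamma>'. JCtx (take k \<Gamma>') \<in> Jdg X \<and> (k < length \<Gamma>' \<longrightarrow> JTy (snd (\<Gamma>'!k)) (take k \<Gamma>') \<in> Jdg X)
      \<and> (k < length \<Gamma>' \<longrightarrow> JTy (snd (\<Gamma>'!k)) \<Gamma>' \<in> Jdg X)"
  proof (intro allI impI conjI)
    fix k assume k: "k \<le> length \<Gamma>'"
    show "JCtx (take k \<Gamma>') \<in> Jdg X"
      using R2 k c unfolding \<Gamma>'_def by (cases "k \<le> length \<Gamma>") (auto simp: le_Suc_eq)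
    show "k < length \<Gamma>' \<Longrightarrow> JTy (snd (\<Gamma>'!k)) (take k \<Gamma>') \<in> Jdg X"
      using R2 k unfolding \<Gamma>'_def by (auto simp: nth_append less_Suc_eq)
    show "k < length \<Gamma>' \<Longrightarrow> JTy (snd (\<Gamma>'!k)) \<Gamma>' \<in> Jdg X"
      using R2 k c unfolding \<Gamma>'_def by (auto simp: nth_append less_Suc_eq intro: JTy_weaken)
  qed
  then show ?case unfolding \<Gamma>'_def by simp
qed auto

lemma JCtx_take: "JCtx \<Gamma> \<in> Jdg X \<Longrightarrow> JCtx (take k \<Gamma>) \<in> Jdg X"
  using Jdg_prefix[of "JCtx \<Gamma>" X] by (cases "k \<le> length \<Gamma>") auto

lemma JCtx_JTy_prefix: "JCtx \<Gamma> \<in> Jdg X \<Longrightarrow> k < length \<Gamma> \<Longrightarrow> JTy (snd (\<Gamma>!k)) (take k \<Gamma>) \<in> Jdg X"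
  using Jdg_prefix[of "JCtx \<Gamma>" X] by auto

lemma JCtx_JTy: "JCtx \<Gamma> \<in> Jdg X \<Longrightarrow> k < length \<Gamma> \<Longrightarrow> JTy (snd (\<Gamma>!k)) \<Gamma> \<in> Jdg X"
  using Jdg_prefix[of "JCtx \<Gamma>" X] by auto

lemma JTm_JTy: "JTm a B \<Gamma> \<in> Jdg X \<Longrightarrow> JTy B \<Gamma> \<in> Jdg X"
  by (erule Jdg.cases) (auto intro: JCtx_JTy)

lemma Jdg_mono: "j \<in> Jdg X \<Longrightarrow> X \<subseteq> Y \<Longrightarrow> j \<in> Jdg Y"
  by (induction rule: Jdg.induct) (auto intro: Jdg.intros)

lemma cmap_weakening:
  assumes "JCtx (\<Gamma>1 @ R) \<in> Jdg X" "JCtx \<Gamma>1 \<in> Jdg X"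
  shows "cmap (Jdg X) (map Var (OV \<Gamma>1)) (\<Gamma>1 @ R) \<Gamma>1"
  unfolding cmap_def
proof (intro conjI allI impI assms)
  show "length (map Var (OV \<Gamma>1)) = length \<Gamma>1" by (simp add: OV_def)
  fix k assume k: "k < length \<Gamma>1"
  have e: "take k (map Var (OV \<Gamma>1)) = map Var (map fst (take k \<Gamma>1))" by (simp add: OV_def take_map)
  have "JTm (Var (fst ((\<Gamma>1 @ R) ! k))) (snd ((\<Gamma>1 @ R) ! k)) (\<Gamma>1 @ R) \<in> Jdg X"
    using Jdg.R3[OF assms(1)] k by simp
  then show "JTm (map Var (OV \<Gamma>1) ! k) (substT (smap (map fst (take k \<Gamma>1)) (take k (map Var (OV \<Gamma>1)))) (snd (\<Gamma>1 ! k))) (\<Gamma>1 @ R) \<in> Jdg X"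
    using k by (simp only: e substT_smap_Var) (simp add: nth_append OV_def)
qed

lemma map_substP_smap_Var: "distinct xs \<Longrightarrow> length as = length xs \<Longrightarrow> map (substP (smap xs as)) (map Var xs) = as"
  by (rule nth_equalityI) (auto simp: smap_nth)

lemma JTy_generic: "TDecl \<Gamma> T \<in> X \<Longrightarrow> JCtx \<Gamma> \<in> Jdg X \<Longrightarrow> JTy (PTy T (map Var (OV \<Gamma>))) \<Gamma> \<in> Jdg X"
  using cmap_weakening[of \<Gamma> "[]" X] by (auto simp: cmap_def intro!: Jdg.R4)

lemma JTm_generic: "FDecl \<Gamma> f U \<in> X \<Longrightarrow> JCtx \<Gamma> \<in> Jdg X \<Longrightarrow> JTy U \<Gamma> \<in> Jdg X \<Longrightarrow> JTm (App f (map Var (OV \<Gamma>))) U \<Gamma> \<in> Jdg X"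
  using cmap_weakening[of \<Gamma> "[]" X] Jdg.R5[of \<Gamma> f U X \<Gamma> "map Var (OV \<Gamma>)"] by (auto simp: cmap_def)

section \<open>Telescopes in a category with families\<close>

definition trm_mor :: "('o, 'm, 't, 'e, 'z) cwf_scheme \<Rightarrow> 'o \<Rightarrow> 'm" where
  "trm_mor C D = (THE f. f \<in> Hom C D (trm C))"

fun tel_ob :: "('o, 'm, 't, 'e, 'z) cwf_scheme \<Rightarrow> (nat \<Rightarrow> 't) \<Rightarrow> nat \<Rightarrow> 'o" where
  "tel_ob C Ts 0 = trm C"
| "tel_ob C Ts (Suc k) = ext C (tel_ob C Ts k) (Ts k)"

fun tel_mor :: "('o, 'm, 't, 'e, 'z) cwf_scheme \<Rightarrow> 'o \<Rightarrow> (nat \<Rightarrow> 't) \<Rightarrow> (nat \<Rightarrow> 'e) \<Rightarrow> nat \<Rightarrow> 'm" where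
  "tel_mor C D Ts es 0 = trm_mor C D"
| "tel_mor C D Ts es (Suc k) = pair C (Ts k) (tel_mor C D Ts es k) (es k)"

definition tel_wf :: "('o, 'm, 't, 'e, 'z) cwf_scheme \<Rightarrow> 'o \<Rightarrow> (nat \<Rightarrow> 't) \<Rightarrow> (nat \<Rightarrow> 'e) \<Rightarrow> nat \<Rightarrow> bool" where
  "tel_wf C D Ts es n \<longleftrightarrow> (\<forall>k<n. Ts k \<in> cTy C (tel_ob C Ts k) \<and> es k \<in> cTm C D (tsub C (Ts k) (tel_mor C D Ts es k)))"

lemma tel_mor_cong: "(\<And>k. k < n \<Longrightarrow> Ts k = Ts' k) \<Longrightarrow> (\<And>k. k < n \<Longrightarrow> es k = es' k) \<Longrightarrow>
   tel_mor C D Ts es n = tel_mor C D Ts' es' n"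
  by (induction n) auto

lemma tel_wf_Suc: "tel_wf C D Ts es (Suc n) \<longleftrightarrow> tel_wf C D Ts es n \<and> Ts n \<in> cTy C (tel_ob C Ts n) \<and> es n \<in> cTm C D (tsub C (Ts n) (tel_mor C D Ts es n))"
  unfolding tel_wf_def by (auto simp: less_Suc_eq)

locale category_with_families =
  fixes C :: "('o, 'm, 't, 'e, 'z) cwf_scheme"
  assumes cwf: "is_cwf C"
begin

lemma Hom_Ob: "f \<in> Hom C \<Delta> \<Gamma> \<Longrightarrow> \<Delta> \<in> Ob C \<and> \<Gamma> \<in> Ob C"
  using cwf unfolding is_cwf_def by (elim conjE) (auto simp: Hom_def)

lemma idm_Hom: "\<Gamma> \<in> Ob C \<Longrightarrow> idm C \<Gamma> \<in> Hom C \<Gamma> \<Gamma>"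
  using cwf unfolding is_cwf_def by (elim conjE) simp

lemma cmp_Hom: "f \<in> Hom C \<Delta> \<Gamma> \<Longrightarrow> g \<in> Hom C \<Gamma> \<Theta> \<Longrightarrow> cmp C g f \<in> Hom C \<Delta> \<Theta>"
  using cwf unfolding is_cwf_def by (elim conjE) simp

lemma trm_Ob: "trm C \<in> Ob C"
  using cwf unfolding is_cwf_def by (elim conjE) simp

lemma ex1_Hom_trm: "\<Gamma> \<in> Ob C \<Longrightarrow> \<exists>!f. f \<in> Hom C \<Gamma> (trm C)"
  using cwf unfolding is_cwf_def by (elim conjE) simp

lemma Hom_trm_unique: "f \<in> Hom C \<Gamma> (trm C) \<Longrightarrow> g \<in> Hom C \<Gamma> (trm C) \<Longrightarrow> f = g"
  using ex1_Hom_trm Hom_Ob by blast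

lemma tsub_ty: "f \<in> Hom C \<Delta> \<Gamma> \<Longrightarrow> A \<in> cTy C \<Gamma> \<Longrightarrow> tsub C A f \<in> cTy C \<Delta>"
  using cwf unfolding is_cwf_def by (elim conjE) simp

lemma tsub_id: "\<Gamma> \<in> Ob C \<Longrightarrow> A \<in> cTy C \<Gamma> \<Longrightarrow> tsub C A (idm C \<Gamma>) = A"
  using cwf unfolding is_cwf_def by (elim conjE) simp

lemma tsub_cmp: "f \<in> Hom C \<Delta> \<Gamma> \<Longrightarrow> g \<in> Hom C \<Theta> \<Delta> \<Longrightarrow> A \<in> cTy C \<Gamma> \<Longrightarrow>
   tsub C A (cmp C f g) = tsub C (tsub C A f) g"
  using cwf unfolding is_cwf_def by (elim conjE) simp

lemma ext_Ob: "\<Gamma> \<in> Ob C \<Longrightarrow> A \<in> cTy C \<Gamma> \<Longrightarrow> ext C \<Gamma> A \<in> Ob C"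
  using cwf unfolding is_cwf_def by (elim conjE) simp

lemma pr_Hom: "\<Gamma> \<in> Ob C \<Longrightarrow> A \<in> cTy C \<Gamma> \<Longrightarrow> pr C \<Gamma> A \<in> Hom C (ext C \<Gamma> A) \<Gamma>"
  using cwf unfolding is_cwf_def by (elim conjE) simp

lemma esub_tm: "f \<in> Hom C \<Delta> \<Gamma> \<Longrightarrow> A \<in> cTy C \<Gamma> \<Longrightarrow> a \<in> cTm C \<Gamma> A \<Longrightarrow> esub C A a f \<in> cTm C \<Delta> (tsub C A f)"
  using cwf unfolding is_cwf_def by (elim conjE) simp

lemma esub_id: "\<Gamma> \<in> Ob C \<Longrightarrow> A \<in> cTy C \<Gamma> \<Longrightarrow> a \<in> cTm C \<Gamma> A \<Longrightarrow> esub C A a (idm C \<Gamma>) = a"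
  using cwf unfolding is_cwf_def by (elim conjE) simp

lemma esub_cmp: "f \<in> Hom C \<Delta> \<Gamma> \<Longrightarrow> g \<in> Hom C \<Theta> \<Delta> \<Longrightarrow> A \<in> cTy C \<Gamma> \<Longrightarrow> a \<in> cTm C \<Gamma> A \<Longrightarrow>
   esub C A a (cmp C f g) = esub C (tsub C A f) (esub C A a f) g"
  using cwf unfolding is_cwf_def by (elim conjE) simp

lemma var_tm: "\<Gamma> \<in> Ob C \<Longrightarrow> A \<in> cTy C \<Gamma> \<Longrightarrow> var C \<Gamma> A \<in> cTm C (ext C \<Gamma> A) (tsub C A (pr C \<Gamma> A))"
  using cwf unfolding is_cwf_def by (elim conjE) simp

lemma pair_Hom:
  "f \<in> Hom C \<Delta> \<Gamma> \<Longrightarrow> A \<in> cTy C \<Gamma> \<Longrightarrow> a \<in> cTm C \<Delta> (tsub C A f) \<Longrightarrow>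
   pair C A f a \<in> Hom C \<Delta> (ext C \<Gamma> A)"
  using cwf unfolding is_cwf_def by (elim conjE) simp

lemma pr_pair:
  "f \<in> Hom C \<Delta> \<Gamma> \<Longrightarrow> A \<in> cTy C \<Gamma> \<Longrightarrow> a \<in> cTm C \<Delta> (tsub C A f) \<Longrightarrow>
   cmp C (pr C \<Gamma> A) (pair C A f a) = f"
  using cwf unfolding is_cwf_def by (elim conjE) simp

lemma var_pair:
  "f \<in> Hom C \<Delta> \<Gamma> \<Longrightarrow> A \<in> cTy C \<Gamma> \<Longrightarrow> a \<in> cTm C \<Delta> (tsub C A f) \<Longrightarrow>
   esub C (tsub C A (pr C \<Gamma> A)) (var C \<Gamma> A) (pair C A f a) = a"
  using cwf unfolding is_cwf_def by (elim conjE) simp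

lemma pair_cmp:
  "f \<in> Hom C \<Delta> \<Gamma> \<Longrightarrow> A \<in> cTy C \<Gamma> \<Longrightarrow> a \<in> cTm C \<Delta> (tsub C A f) \<Longrightarrow> g \<in> Hom C \<Theta> \<Delta> \<Longrightarrow>
   cmp C (pair C A f a) g = pair C A (cmp C f g) (esub C (tsub C A f) a g)"
  using cwf unfolding is_cwf_def by (elim conjE) simp

lemmas pair_laws = pair_Hom pr_pair var_pair pair_cmp

lemma pair_eta: "\<Gamma> \<in> Ob C \<Longrightarrow> A \<in> cTy C \<Gamma> \<Longrightarrow> h \<in> Hom C \<Delta> (ext C \<Gamma> A) \<Longrightarrow>
        pair C A (cmp C (pr C \<Gamma> A) h) (esub C (tsub C A (pr C \<Gamma> A)) (var C \<Gamma> A) h) = h"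
  using cwf unfolding is_cwf_def by (elim conjE) simp

lemma trm_mor_Hom: "\<Gamma> \<in> Ob C \<Longrightarrow> trm_mor C \<Gamma> \<in> Hom C \<Gamma> (trm C)"
  unfolding trm_mor_def by (rule theI') (rule ex1_Hom_trm)

lemma tel_mor_Hom: "D \<in> Ob C \<Longrightarrow> tel_wf C D Ts es n \<Longrightarrow> tel_mor C D Ts es n \<in> Hom C D (tel_ob C Ts n)"
proof (induction n)
  case 0 then show ?case by (simp add: trm_mor_Hom)
next
  case (Suc n) then show ?case by (auto simp: tel_wf_Suc dest: pair_laws)
qed

lemma tel_mor_cmp:
  assumes "D' \<in> Ob C" "m \<in> Hom C D' D" "tel_wf C D Ts es n"
  shows "cmp C (tel_mor C D Ts es n) m = tel_mor C D' Ts (\<lambda>k. esub C (tsub C (Ts k) (tel_mor C D Ts es k)) (es k) m) n"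
  using assms(3)
proof (induction n)
  case 0
  have D: "D \<in> Ob C" using assms Hom_Ob by blast
  show ?case using 0 Hom_trm_unique cmp_Hom[OF assms(2) trm_mor_Hom[OF D]] trm_mor_Hom[OF assms(1)] by simp
next
  case (Suc n)
  have D: "D \<in> Ob C" using assms Hom_Ob by blast
  have h: "tel_wf C D Ts es n" "Ts n \<in> cTy C (tel_ob C Ts n)" "es n \<in> cTm C D (tsub C (Ts n) (tel_mor C D Ts es n))"
    using Suc.prems by (auto simp: tel_wf_Suc)
  have "cmp C (pair C (Ts n) (tel_mor C D Ts es n) (es n)) m
     = pair C (Ts n) (cmp C (tel_mor C D Ts es n) m) (esub C (tsub C (Ts n) (tel_mor C D Ts es n)) (es n) m)"
    using pair_laws[OF tel_mor_Hom[OF D h(1)] h(2) h(3)] assms(2) by blast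
  then show ?case using Suc.IH[OF h(1)] by simp
qed

end

section \<open>The term model and cwf morphisms out of it\<close>

lemma FSig_simps[simp]:
  "Ob (FSig X) = FOb X"
  "Arr (FSig X) = {(\<Delta>, \<Gamma>, as). \<Delta> \<in> FOb X \<and> \<Gamma> \<in> FOb X \<and> cmap (Jdg X) as \<Delta> \<Gamma>}"
  "dm (FSig X) (\<Delta>, \<Gamma>, as) = \<Delta>"
  "cd (FSig X) (\<Delta>, \<Gamma>, as) = \<Gamma>"
  "cmp (FSig X) (\<Gamma>, \<Theta>, ts) (\<Delta>, \<Gamma>', ss) = (\<Delta>, \<Theta>, map (\<lambda>t. substPC t ss \<Gamma>') ts)"
  "idm (FSig X) \<Gamma> = (\<Gamma>, \<Gamma>, map Var (OV \<Gamma>))"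
  "trm (FSig X) = []"
  "cTy (FSig X) \<Gamma> = {(\<Gamma>', A). \<Gamma>' = \<Gamma> \<and> JTy A \<Gamma> \<in> Jdg X}"
  "tsub (FSig X) (\<Gamma>, A) (\<Delta>, \<Gamma>', as) = (\<Delta>, substTC A as \<Gamma>)"
  "ext (FSig X) \<Gamma> (\<Gamma>', A) = \<Gamma> @ [(fresh \<Gamma>, A)]"
  "pr (FSig X) \<Gamma> (\<Gamma>', A) = (\<Gamma> @ [(fresh \<Gamma>, A)], \<Gamma>, map Var (OV \<Gamma>))"
  "cTm (FSig X) \<Gamma> (\<Gamma>', A) = {((\<Gamma>'', A'), a). \<Gamma>'' = \<Gamma> \<and> A' = A \<and> \<Gamma>' = \<Gamma> \<and> JTm a A \<Gamma> \<in> Jdg X}"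
  "esub (FSig X) (\<Gamma>, A) (Y, a) (\<Delta>, \<Gamma>', as) = ((\<Delta>, substTC A as \<Gamma>), substPC a as \<Gamma>)"
  "var (FSig X) \<Gamma> (\<Gamma>', A) = ((\<Gamma> @ [(fresh \<Gamma>, A)], A), Var (fresh \<Gamma>))"
  "pair (FSig X) (\<Gamma>, A) (\<Delta>, \<Gamma>', ss) (Y, b) = (\<Delta>, \<Gamma> @ [(fresh \<Gamma>, A)], ss @ [b])"
  by (simp_all add: FSig_def)

lemma FSig_Hom_iff: "(\<Delta>', \<Gamma>', as) \<in> Hom (FSig X) \<Delta> \<Gamma> \<longleftrightarrow> \<Delta>' = \<Delta> \<and> \<Gamma>' = \<Gamma> \<and> \<Delta> \<in> FOb X \<and> \<Gamma> \<in> FOb X \<and> cmap (Jdg X) as \<Delta> \<Gamma>"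
  by (auto simp: Hom_def)

lemma FSig_Hom_triple: "f \<in> Hom (FSig X) \<Delta> \<Gamma> \<Longrightarrow> \<exists>as. f = (\<Delta>, \<Gamma>, as)"
  by (auto simp: Hom_def)

lemma FOb_iff: "\<Gamma> \<in> FOb X \<longleftrightarrow> precontext \<Gamma> \<and> JCtx \<Gamma> \<in> Jdg X"
  by (simp add: FOb_def)

lemma FOb_take: "\<Gamma> \<in> FOb X \<Longrightarrow> take k \<Gamma> \<in> FOb X"
  by (auto simp: FOb_iff precontext_take JCtx_take)

lemma JCtx_FOb: "JCtx \<Gamma> \<in> Jdg X \<Longrightarrow> \<Gamma> \<in> FOb X"
  by (auto simp: FOb_iff JCtx_precontext)

lemma FSig_Hom_cmap: "cmap (Jdg X) as \<Delta> \<Gamma> \<Longrightarrow> (\<Delta>, \<Gamma>, as) \<in> Hom (FSig X) \<Delta> \<Gamma>"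
  by (simp add: FSig_Hom_iff cmap_def JCtx_FOb)

definition arg_ty :: "('s, 'f) ctx \<Rightarrow> 'f pre list \<Rightarrow> nat \<Rightarrow> ('s, 'f) pty" where
  "arg_ty \<Gamma> as k = substT (smap (map fst (take k \<Gamma>)) (take k as)) (snd (\<Gamma> ! k))"

lemma cmap_take:
  assumes "cmap (Jdg X) as \<Delta> \<Gamma>" "\<Gamma> \<in> FOb X"
  shows "cmap (Jdg X) (take k as) \<Delta> (take k \<Gamma>)"
  using assms unfolding cmap_def by (auto simp: FOb_iff JCtx_take min_def)

lemma cmap_JTm: "cmap (Jdg X) as \<Delta> \<Gamma> \<Longrightarrow> k < length \<Gamma> \<Longrightarrow> JTm (as!k) (arg_ty \<Gamma> as k) \<Delta> \<in> Jdg X"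
  unfolding cmap_def arg_ty_def by blast

definition sem_tel :: "(('s, 'f) ctx, ('s, 'f) fmor, ('s, 'f) fty, ('s, 'f) ftm, 'o, 'm, 't, 'e) cwf_mor \<Rightarrow> ('s, 'f) ctx \<Rightarrow> nat \<Rightarrow> 't" where
  "sem_tel F \<Gamma> = (\<lambda>k. sg F (take k \<Gamma>) (take k \<Gamma>, snd (\<Gamma> ! k)))"

lemma OV_take: "OV (take k \<Gamma>) = map fst (take k \<Gamma>)" by (simp add: OV_def)

lemma Nil_FOb: "[] \<in> FOb X"
  by (simp add: FOb_iff precontext_def Jdg.R1)

lemma arg_ty_OV: "arg_ty \<Gamma> (map Var (OV \<Gamma>)) k = snd (\<Gamma> ! k)"
proof -
  have e: "take k (map Var (OV \<Gamma>)) = map Var (map fst (take k \<Gamma>))" by (simp add: OV_def take_map)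
  show ?thesis unfolding arg_ty_def by (simp only: e substT_smap_Var)
qed

locale term_model_mor = category_with_families C for C :: "('o, 'm, 't, 'e) cwf" +
  fixes X :: "('s, 'f) decl set" and F :: "(('s, 'f) ctx, ('s, 'f) fmor, ('s, 'f) fty, ('s, 'f) ftm, 'o, 'm, 't, 'e) cwf_mor"
  assumes morF: "cwf_morphism (FSig X) C F"
begin

lemma Fo_Ob: "\<Gamma> \<in> FOb X \<Longrightarrow> Fo F \<Gamma> \<in> Ob C"
  using morF unfolding cwf_morphism_def by (elim conjE) simp

lemma Fa_Hom: "f \<in> Hom (FSig X) \<Delta> \<Gamma> \<Longrightarrow> Fa F f \<in> Hom C (Fo F \<Delta>) (Fo F \<Gamma>)"
  using morF unfolding cwf_morphism_def by (elim conjE) blast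

lemma Fo_trm: "Fo F [] = trm C"
  using morF unfolding cwf_morphism_def by (elim conjE) simp

lemma sg_ty: "\<Gamma> \<in> FOb X \<Longrightarrow> JTy B \<Gamma> \<in> Jdg X \<Longrightarrow> sg F \<Gamma> (\<Gamma>, B) \<in> cTy C (Fo F \<Gamma>)"
  using morF unfolding cwf_morphism_def by (elim conjE) simp

lemma sg_tsub:
  assumes "f \<in> Hom (FSig X) \<Delta> \<Gamma>" and "JTy B \<Gamma> \<in> Jdg X"
  shows "sg F \<Delta> (tsub (FSig X) (\<Gamma>, B) f) = tsub C (sg F \<Gamma> (\<Gamma>, B)) (Fa F f)"
proof -
  obtain as where "f = (\<Delta>, \<Gamma>, as)" using FSig_Hom_triple assms(1) by blast
  then show ?thesis using morF assms unfolding cwf_morphism_def by (elim conjE) simp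
qed

lemma Fo_ext: "\<Gamma> \<in> FOb X \<Longrightarrow> JTy B \<Gamma> \<in> Jdg X \<Longrightarrow> Fo F (\<Gamma> @ [(fresh \<Gamma>, B)]) = ext C (Fo F \<Gamma>) (sg F \<Gamma> (\<Gamma>, B))"
  using morF unfolding cwf_morphism_def by (elim conjE) simp

lemma Fa_pr: "\<Gamma> \<in> FOb X \<Longrightarrow> JTy B \<Gamma> \<in> Jdg X \<Longrightarrow> Fa F (\<Gamma> @ [(fresh \<Gamma>, B)], \<Gamma>, map Var (OV \<Gamma>)) = pr C (Fo F \<Gamma>) (sg F \<Gamma> (\<Gamma>, B))"
  using morF unfolding cwf_morphism_def by (elim conjE) simp

lemma th_tm: "\<Gamma> \<in> FOb X \<Longrightarrow> JTy B \<Gamma> \<in> Jdg X \<Longrightarrow> JTm a B \<Gamma> \<in> Jdg X \<Longrightarrow> th F \<Gamma> (\<Gamma>, B) ((\<Gamma>, B), a) \<in> cTm C (Fo F \<Gamma>) (sg F \<Gamma> (\<Gamma>, B))"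
  using morF unfolding cwf_morphism_def by (elim conjE) simp

lemma th_esub: "(\<Delta>, \<Gamma>, as) \<in> Hom (FSig X) \<Delta> \<Gamma> \<Longrightarrow> JTy B \<Gamma> \<in> Jdg X \<Longrightarrow> JTm a B \<Gamma> \<in> Jdg X \<Longrightarrow>
   th F \<Delta> (\<Delta>, substTC B as \<Gamma>) ((\<Delta>, substTC B as \<Gamma>), substPC a as \<Gamma>) = esub C (sg F \<Gamma> (\<Gamma>, B)) (th F \<Gamma> (\<Gamma>, B) ((\<Gamma>, B), a)) (Fa F (\<Delta>, \<Gamma>, as))"
  using morF unfolding cwf_morphism_def by (elim conjE) simp

lemma th_var: "\<Gamma> \<in> FOb X \<Longrightarrow> JTy B \<Gamma> \<in> Jdg X \<Longrightarrow>
   th F (\<Gamma> @ [(fresh \<Gamma>, B)]) (\<Gamma> @ [(fresh \<Gamma>, B)], B) ((\<Gamma> @ [(fresh \<Gamma>, B)], B), Var (fresh \<Gamma>)) = var C (Fo F \<Gamma>) (sg F \<Gamma> (\<Gamma>, B))"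
  using morF unfolding cwf_morphism_def by (elim conjE) simp

lemma Fa_pair: "(\<Delta>, \<Gamma>, ss) \<in> Hom (FSig X) \<Delta> \<Gamma> \<Longrightarrow> JTy B \<Gamma> \<in> Jdg X \<Longrightarrow> JTm b (substTC B ss \<Gamma>) \<Delta> \<in> Jdg X \<Longrightarrow>
   Fa F (\<Delta>, \<Gamma> @ [(fresh \<Gamma>, B)], ss @ [b]) = pair C (sg F \<Gamma> (\<Gamma>, B)) (Fa F (\<Delta>, \<Gamma>, ss)) (th F \<Delta> (\<Delta>, substTC B ss \<Gamma>) ((\<Delta>, substTC B ss \<Gamma>), b))"
  using morF unfolding cwf_morphism_def by (elim conjE) simp

lemma Fa_idm: "\<Gamma> \<in> FOb X \<Longrightarrow> Fa F (\<Gamma>, \<Gamma>, map Var (OV \<Gamma>)) = idm C (Fo F \<Gamma>)"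
  using morF unfolding cwf_morphism_def by (elim conjE) simp

lemma tel_ob_sem_tel: "\<Gamma> \<in> FOb X \<Longrightarrow> k \<le> length \<Gamma> \<Longrightarrow> tel_ob C (sem_tel F \<Gamma>) k = Fo F (take k \<Gamma>)"
proof (induction k)
  case 0 then show ?case by (simp add: Fo_trm)
next
  case (Suc k)
  have k: "k < length \<Gamma>" using Suc by simp
  have pc: "precontext \<Gamma>" "JCtx \<Gamma> \<in> Jdg X" using Suc by (auto simp: FOb_iff)
  have "tel_ob C (sem_tel F \<Gamma>) (Suc k) = ext C (Fo F (take k \<Gamma>)) (sg F (take k \<Gamma>) (take k \<Gamma>, snd (\<Gamma> ! k)))"
    using Suc by (simp add: sem_tel_def)
  also have "\<dots> = Fo F (take k \<Gamma> @ [(fresh (take k \<Gamma>), snd (\<Gamma> ! k))])"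
    using Fo_ext[OF FOb_take[OF Suc.prems(1)] JCtx_JTy_prefix[OF pc(2) k]] by simp
  also have "\<dots> = Fo F (take (Suc k) \<Gamma>)" using take_Suc_precontext[OF pc(1) k] by simp
  finally show ?case .
qed

lemma sem_tel_ty: "\<Gamma> \<in> FOb X \<Longrightarrow> k < length \<Gamma> \<Longrightarrow> sem_tel F \<Gamma> k \<in> cTy C (tel_ob C (sem_tel F \<Gamma>) k)"
  using tel_ob_sem_tel[of \<Gamma> k] sg_ty[OF FOb_take JCtx_JTy_prefix] by (auto simp: sem_tel_def FOb_iff)

definition sem_args :: "('s, 'f) ctx \<Rightarrow> ('s, 'f) ctx \<Rightarrow> 'f pre list \<Rightarrow> nat \<Rightarrow> 'e" where
  "sem_args \<Delta> \<Gamma> as = (\<lambda>k. th F \<Delta> (\<Delta>, arg_ty \<Gamma> as k) ((\<Delta>, arg_ty \<Gamma> as k), as!k))"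

lemma Fa_eq_tel_mor_take:
  assumes h: "(\<Delta>, \<Gamma>, as) \<in> Hom (FSig X) \<Delta> \<Gamma>"
  shows "k \<le> length \<Gamma> \<Longrightarrow> Fa F (\<Delta>, take k \<Gamma>, take k as) = tel_mor C (Fo F \<Delta>) (sem_tel F \<Gamma>) (sem_args \<Delta> \<Gamma> as) k
     \<and> tel_wf C (Fo F \<Delta>) (sem_tel F \<Gamma>) (sem_args \<Delta> \<Gamma> as) k"
proof (induction k)
  have D: "\<Delta> \<in> FOb X" "\<Gamma> \<in> FOb X" "cmap (Jdg X) as \<Delta> \<Gamma>" using h by (auto simp: FSig_Hom_iff)
  case 0
  have "(\<Delta>, [], []) \<in> Hom (FSig X) \<Delta> []"
    using D by (simp add: FSig_Hom_iff Nil_FOb cmap_def Jdg.R1 FOb_iff precontext_def)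
  then have "Fa F (\<Delta>, [], []) \<in> Hom C (Fo F \<Delta>) (trm C)" using Fa_Hom Fo_trm by fastforce
  then show ?case using Hom_trm_unique trm_mor_Hom[OF Fo_Ob[OF D(1)]] by (simp add: tel_wf_def)
next
  case (Suc k)
  have D: "\<Delta> \<in> FOb X" "\<Gamma> \<in> FOb X" "cmap (Jdg X) as \<Delta> \<Gamma>" using h by (auto simp: FSig_Hom_iff)
  have k: "k < length \<Gamma>" using Suc by simp
  have pc: "precontext \<Gamma>" "JCtx \<Gamma> \<in> Jdg X" using D by (auto simp: FOb_iff)
  have len: "length as = length \<Gamma>" using D by (simp add: cmap_def)
  have IH: "Fa F (\<Delta>, take k \<Gamma>, take k as) = tel_mor C (Fo F \<Delta>) (sem_tel F \<Gamma>) (sem_args \<Delta> \<Gamma> as) k"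
       "tel_wf C (Fo F \<Delta>) (sem_tel F \<Gamma>) (sem_args \<Delta> \<Gamma> as) k" using Suc by auto
  have hk: "(\<Delta>, take k \<Gamma>, take k as) \<in> Hom (FSig X) \<Delta> (take k \<Gamma>)"
    using D by (simp add: FSig_Hom_iff FOb_take cmap_take)
  have ty: "JTy (snd (\<Gamma> ! k)) (take k \<Gamma>) \<in> Jdg X" using JCtx_JTy_prefix[OF pc(2) k] .
  have sB: "substTC (snd (\<Gamma> ! k)) (take k as) (take k \<Gamma>) = arg_ty \<Gamma> as k"
    by (simp add: arg_ty_def OV_take)
  have tm: "JTm (as ! k) (arg_ty \<Gamma> as k) \<Delta> \<in> Jdg X" using cmap_JTm[OF D(3) k] .
  have "Fa F (\<Delta>, take (Suc k) \<Gamma>, take (Suc k) as) = Fa F (\<Delta>, take k \<Gamma> @ [(fresh (take k \<Gamma>), snd (\<Gamma> ! k))], take k as @ [as ! k])"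
    using take_Suc_precontext[OF pc(1) k] k len by (simp add: take_Suc_conv_app_nth)
  also have "\<dots> = pair C (sem_tel F \<Gamma> k) (Fa F (\<Delta>, take k \<Gamma>, take k as)) (sem_args \<Delta> \<Gamma> as k)"
    using Fa_pair[OF hk ty] tm sB by (simp add: sem_tel_def sem_args_def)
  finally have e1: "Fa F (\<Delta>, take (Suc k) \<Gamma>, take (Suc k) as) = tel_mor C (Fo F \<Delta>) (sem_tel F \<Gamma>) (sem_args \<Delta> \<Gamma> as) (Suc k)"
    using IH by simp
  have sgB: "sg F \<Delta> (\<Delta>, arg_ty \<Gamma> as k) = tsub C (sem_tel F \<Gamma> k) (tel_mor C (Fo F \<Delta>) (sem_tel F \<Gamma>) (sem_args \<Delta> \<Gamma> as) k)"
    using sg_tsub[OF hk ty] sB IH by (simp add: sem_tel_def)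
  have "sem_args \<Delta> \<Gamma> as k \<in> cTm C (Fo F \<Delta>) (sg F \<Delta> (\<Delta>, arg_ty \<Gamma> as k))"
    unfolding sem_args_def by (rule th_tm[OF D(1) JTm_JTy[OF tm] tm])
  then have "tel_wf C (Fo F \<Delta>) (sem_tel F \<Gamma>) (sem_args \<Delta> \<Gamma> as) (Suc k)"
    using IH(2) sem_tel_ty[OF D(2) k] sgB by (simp add: tel_wf_Suc)
  then show ?case using e1 by simp
qed

text \<open>Every context map is an iterated pairing in the term model, hence its image under any
  cwf morphism is determined by the images of its components.\<close>

lemma Fa_eq_tel_mor:
  assumes h: "(\<Delta>, \<Gamma>, as) \<in> Hom (FSig X) \<Delta> \<Gamma>"
  shows "Fa F (\<Delta>, \<Gamma>, as) = tel_mor C (Fo F \<Delta>) (sem_tel F \<Gamma>) (sem_args \<Delta> \<Gamma> as) (length \<Gamma>)"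
    "tel_wf C (Fo F \<Delta>) (sem_tel F \<Gamma>) (sem_args \<Delta> \<Gamma> as) (length \<Gamma>)"
proof -
  have len: "length as = length \<Gamma>" using h by (simp add: FSig_Hom_iff cmap_def)
  show "Fa F (\<Delta>, \<Gamma>, as) = tel_mor C (Fo F \<Delta>) (sem_tel F \<Gamma>) (sem_args \<Delta> \<Gamma> as) (length \<Gamma>)"
    using Fa_eq_tel_mor_take[OF h, of "length \<Gamma>"] len by simp
  show "tel_wf C (Fo F \<Delta>) (sem_tel F \<Gamma>) (sem_args \<Delta> \<Gamma> as) (length \<Gamma>)"
    using Fa_eq_tel_mor_take[OF h, of "length \<Gamma>"] by simp
qed

definition sem_var_tm :: "('s, 'f) ctx \<Rightarrow> nat \<Rightarrow> 'e" where
  "sem_var_tm \<Gamma> j = th F \<Gamma> (\<Gamma>, snd (\<Gamma> ! j)) ((\<Gamma>, snd (\<Gamma> ! j)), Var (fst (\<Gamma> ! j)))"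

definition sem_var_ty :: "('s, 'f) ctx \<Rightarrow> nat \<Rightarrow> 't" where
  "sem_var_ty \<Gamma> j = sg F \<Gamma> (\<Gamma>, snd (\<Gamma> ! j))"

lemma esub_sem_var_idm:
  assumes "\<Gamma> \<in> FOb X" and "k < length \<Gamma>"
  shows "esub C (sem_var_ty \<Gamma> k) (sem_var_tm \<Gamma> k) (idm C (Fo F \<Gamma>)) = sem_var_tm \<Gamma> k"
proof -
  have c: "JCtx \<Gamma> \<in> Jdg X" using assms(1) by (simp add: FOb_iff)
  show ?thesis unfolding sem_var_tm_def sem_var_ty_def
    by (rule esub_id[OF Fo_Ob[OF assms(1)] sg_ty[OF assms(1) JCtx_JTy[OF c assms(2)]] th_tm[OF assms(1) JCtx_JTy[OF c assms(2)] Jdg.R3[OF c assms(2)]]])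
qed

lemma pr_FSig_Hom: "\<Gamma>1 \<in> FOb X \<Longrightarrow> JTy B \<Gamma>1 \<in> Jdg X \<Longrightarrow>
   (\<Gamma>1 @ [(fresh \<Gamma>1, B)], \<Gamma>1, map Var (OV \<Gamma>1)) \<in> Hom (FSig X) (\<Gamma>1 @ [(fresh \<Gamma>1, B)]) \<Gamma>1"
proof -
  assume G1: "\<Gamma>1 \<in> FOb X" and B: "JTy B \<Gamma>1 \<in> Jdg X"
  have c1: "JCtx \<Gamma>1 \<in> Jdg X" using G1 by (simp add: FOb_iff)
  have c': "JCtx (\<Gamma>1 @ [(fresh \<Gamma>1, B)]) \<in> Jdg X" using c1 B by (rule Jdg.R2)
  show ?thesis
    using cmap_weakening[of \<Gamma>1 "[(fresh \<Gamma>1, B)]" X] c' c1 JCtx_FOb[OF c'] G1 by (simp add: FSig_Hom_iff)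
qed

lemma sem_var_weaken:
  assumes G1: "\<Gamma>1 \<in> FOb X" and B: "JTy B \<Gamma>1 \<in> Jdg X" and j: "j < length \<Gamma>1"
  defines "\<Gamma>' \<equiv> \<Gamma>1 @ [(fresh \<Gamma>1, B)]"
  shows "sg F \<Gamma>' (\<Gamma>', snd (\<Gamma>1 ! j)) = tsub C (sem_var_ty \<Gamma>1 j) (pr C (Fo F \<Gamma>1) (sg F \<Gamma>1 (\<Gamma>1, B)))"
    "th F \<Gamma>' (\<Gamma>', snd (\<Gamma>1 ! j)) ((\<Gamma>', snd (\<Gamma>1 ! j)), Var (fst (\<Gamma>1 ! j)))
       = esub C (sem_var_ty \<Gamma>1 j) (sem_var_tm \<Gamma>1 j) (pr C (Fo F \<Gamma>1) (sg F \<Gamma>1 (\<Gamma>1, B)))"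
proof -
  have c1: "JCtx \<Gamma>1 \<in> Jdg X" using G1 by (simp add: FOb_iff)
  have hp: "(\<Gamma>', \<Gamma>1, map Var (OV \<Gamma>1)) \<in> Hom (FSig X) \<Gamma>' \<Gamma>1"
    unfolding \<Gamma>'_def using pr_FSig_Hom[OF G1 B] .
  have tyj: "JTy (snd (\<Gamma>1 ! j)) \<Gamma>1 \<in> Jdg X" using JCtx_JTy[OF c1 j] .
  have tmj: "JTm (Var (fst (\<Gamma>1 ! j))) (snd (\<Gamma>1 ! j)) \<Gamma>1 \<in> Jdg X" using Jdg.R3[OF c1 j] .
  have pr: "Fa F (\<Gamma>', \<Gamma>1, map Var (OV \<Gamma>1)) = pr C (Fo F \<Gamma>1) (sg F \<Gamma>1 (\<Gamma>1, B))"
    unfolding \<Gamma>'_def by (rule Fa_pr[OF G1 B])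
  show "sg F \<Gamma>' (\<Gamma>', snd (\<Gamma>1 ! j)) = tsub C (sem_var_ty \<Gamma>1 j) (pr C (Fo F \<Gamma>1) (sg F \<Gamma>1 (\<Gamma>1, B)))"
    using sg_tsub[OF hp tyj] pr by (simp add: sem_var_ty_def)
  show "th F \<Gamma>' (\<Gamma>', snd (\<Gamma>1 ! j)) ((\<Gamma>', snd (\<Gamma>1 ! j)), Var (fst (\<Gamma>1 ! j)))
       = esub C (sem_var_ty \<Gamma>1 j) (sem_var_tm \<Gamma>1 j) (pr C (Fo F \<Gamma>1) (sg F \<Gamma>1 (\<Gamma>1, B)))"
    using th_esub[OF hp tyj tmj] pr by (simp add: sem_var_ty_def sem_var_tm_def smap_Var)
qed

lemma sg_fresh_var: "\<Gamma>1 \<in> FOb X \<Longrightarrow> JTy B \<Gamma>1 \<in> Jdg X \<Longrightarrow>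
  sg F (\<Gamma>1 @ [(fresh \<Gamma>1, B)]) (\<Gamma>1 @ [(fresh \<Gamma>1, B)], B) = tsub C (sg F \<Gamma>1 (\<Gamma>1, B)) (pr C (Fo F \<Gamma>1) (sg F \<Gamma>1 (\<Gamma>1, B)))"
  using sg_tsub[OF pr_FSig_Hom, of \<Gamma>1 B B] Fa_pr[of \<Gamma>1 B] by simp

lemma esub_sem_var_weaken:
  assumes G1: "\<Gamma>1 \<in> FOb X" and B: "JTy B \<Gamma>1 \<in> Jdg X" and j: "j < length \<Gamma>1"
    and h: "h \<in> Hom C D' (ext C (Fo F \<Gamma>1) (sg F \<Gamma>1 (\<Gamma>1, B)))"
  shows "esub C (sem_var_ty (\<Gamma>1 @ [(fresh \<Gamma>1, B)]) j) (sem_var_tm (\<Gamma>1 @ [(fresh \<Gamma>1, B)]) j) h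
       = esub C (sem_var_ty \<Gamma>1 j) (sem_var_tm \<Gamma>1 j) (cmp C (pr C (Fo F \<Gamma>1) (sg F \<Gamma>1 (\<Gamma>1, B))) h)"
proof -
  have c1: "JCtx \<Gamma>1 \<in> Jdg X" using G1 by (simp add: FOb_iff)
  have U: "sem_var_ty \<Gamma>1 j \<in> cTy C (Fo F \<Gamma>1)" unfolding sem_var_ty_def by (rule sg_ty[OF G1 JCtx_JTy[OF c1 j]])
  have E: "sem_var_tm \<Gamma>1 j \<in> cTm C (Fo F \<Gamma>1) (sem_var_ty \<Gamma>1 j)" unfolding sem_var_tm_def sem_var_ty_def
    by (rule th_tm[OF G1 JCtx_JTy[OF c1 j] Jdg.R3[OF c1 j]])
  have p: "pr C (Fo F \<Gamma>1) (sg F \<Gamma>1 (\<Gamma>1, B)) \<in> Hom C (ext C (Fo F \<Gamma>1) (sg F \<Gamma>1 (\<Gamma>1, B))) (Fo F \<Gamma>1)"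
    using pr_Hom[OF Fo_Ob[OF G1] sg_ty[OF G1 B]] .
  note W = sem_var_weaken[OF G1 B j]
  have "sem_var_ty (\<Gamma>1 @ [(fresh \<Gamma>1, B)]) j = tsub C (sem_var_ty \<Gamma>1 j) (pr C (Fo F \<Gamma>1) (sg F \<Gamma>1 (\<Gamma>1, B)))"
    "sem_var_tm (\<Gamma>1 @ [(fresh \<Gamma>1, B)]) j = esub C (sem_var_ty \<Gamma>1 j) (sem_var_tm \<Gamma>1 j) (pr C (Fo F \<Gamma>1) (sg F \<Gamma>1 (\<Gamma>1, B)))"
    using W j by (simp_all add: sem_var_ty_def sem_var_tm_def nth_append)
  then show ?thesis using esub_cmp[OF p h U E] by simp
qed

lemma esub_sem_var_tel_mor:
  assumes G0: "\<Gamma>0 \<in> FOb X" and D': "D' \<in> Ob C"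
  shows "n \<le> length \<Gamma>0 \<Longrightarrow> tel_wf C D' (sem_tel F \<Gamma>0) es n \<Longrightarrow> j < n \<Longrightarrow>
    esub C (sem_var_ty (take n \<Gamma>0) j) (sem_var_tm (take n \<Gamma>0) j) (tel_mor C D' (sem_tel F \<Gamma>0) es n) = es j"
proof (induction n arbitrary: j)
  case 0 then show ?case by simp
next
  case (Suc n)
  have n: "n < length \<Gamma>0" using Suc by simp
  have pc: "precontext \<Gamma>0" "JCtx \<Gamma>0 \<in> Jdg X" using G0 by (auto simp: FOb_iff)
  define \<Gamma>1 where "\<Gamma>1 = take n \<Gamma>0"
  define B where "B = snd (\<Gamma>0 ! n)"
  have G1: "\<Gamma>1 \<in> FOb X" unfolding \<Gamma>1_def using G0 by (rule FOb_take)
  have TB: "JTy B \<Gamma>1 \<in> Jdg X" unfolding B_def \<Gamma>1_def using JCtx_JTy_prefix[OF pc(2) n] .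
  have tk: "take (Suc n) \<Gamma>0 = \<Gamma>1 @ [(fresh \<Gamma>1, B)]" unfolding \<Gamma>1_def B_def using take_Suc_precontext[OF pc(1) n] .
  have ok: "tel_wf C D' (sem_tel F \<Gamma>0) es n" "sem_tel F \<Gamma>0 n \<in> cTy C (tel_ob C (sem_tel F \<Gamma>0) n)"
     "es n \<in> cTm C D' (tsub C (sem_tel F \<Gamma>0 n) (tel_mor C D' (sem_tel F \<Gamma>0) es n))" using Suc.prems by (auto simp: tel_wf_Suc)
  have T: "sem_tel F \<Gamma>0 n = sg F \<Gamma>1 (\<Gamma>1, B)" by (simp add: sem_tel_def \<Gamma>1_def B_def)
  have tO: "tel_ob C (sem_tel F \<Gamma>0) n = Fo F \<Gamma>1" using tel_ob_sem_tel[OF G0] n unfolding \<Gamma>1_def by simp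
  have M: "tel_mor C D' (sem_tel F \<Gamma>0) es n \<in> Hom C D' (Fo F \<Gamma>1)" using tel_mor_Hom[OF D' ok(1)] tO by simp
  have Ty: "sg F \<Gamma>1 (\<Gamma>1, B) \<in> cTy C (Fo F \<Gamma>1)" using sg_ty[OF G1 TB] .
  have e: "es n \<in> cTm C D' (tsub C (sg F \<Gamma>1 (\<Gamma>1, B)) (tel_mor C D' (sem_tel F \<Gamma>0) es n))" using ok(3) T by simp
  note P = pair_laws[OF M Ty e]
  have SMs: "tel_mor C D' (sem_tel F \<Gamma>0) es (Suc n) = pair C (sg F \<Gamma>1 (\<Gamma>1, B)) (tel_mor C D' (sem_tel F \<Gamma>0) es n) (es n)"
    using T by simp
  show ?case
  proof (cases "j = n")
    case True
    have "sem_var_ty (take (Suc n) \<Gamma>0) j = tsub C (sg F \<Gamma>1 (\<Gamma>1, B)) (pr C (Fo F \<Gamma>1) (sg F \<Gamma>1 (\<Gamma>1, B)))"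
      using sg_fresh_var[OF G1 TB] True tk n by (simp add: sem_var_ty_def nth_append \<Gamma>1_def min_def)
    moreover have "sem_var_tm (take (Suc n) \<Gamma>0) j = var C (Fo F \<Gamma>1) (sg F \<Gamma>1 (\<Gamma>1, B))"
      using th_var[OF G1 TB] True tk n by (simp add: sem_var_tm_def nth_append \<Gamma>1_def min_def)
    ultimately show ?thesis using P SMs True by simp
  next
    case False
    then have j: "j < n" using Suc by simp
    have jl: "j < length \<Gamma>1" using j n by (simp add: \<Gamma>1_def)
    have "esub C (sem_var_ty (take (Suc n) \<Gamma>0) j) (sem_var_tm (take (Suc n) \<Gamma>0) j) (tel_mor C D' (sem_tel F \<Gamma>0) es (Suc n))
        = esub C (sem_var_ty \<Gamma>1 j) (sem_var_tm \<Gamma>1 j) (cmp C (pr C (Fo F \<Gamma>1) (sg F \<Gamma>1 (\<Gamma>1, B))) (tel_mor C D' (sem_tel F \<Gamma>0) es (Suc n)))"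
      using esub_sem_var_weaken[OF G1 TB jl] P SMs tk by simp
    also have "\<dots> = esub C (sem_var_ty \<Gamma>1 j) (sem_var_tm \<Gamma>1 j) (tel_mor C D' (sem_tel F \<Gamma>0) es n)" using P SMs by simp
    also have "\<dots> = es j" using Suc.IH[OF _ ok(1) j] n unfolding \<Gamma>1_def by simp
    finally show ?thesis .
  qed
qed

lemma sg_arg_ty:
  assumes h: "(\<Delta>, \<Gamma>, as) \<in> Hom (FSig X) \<Delta> \<Gamma>" and k: "k < length \<Gamma>"
  shows "sg F \<Delta> (\<Delta>, arg_ty \<Gamma> as k) = tsub C (sem_tel F \<Gamma> k) (tel_mor C (Fo F \<Delta>) (sem_tel F \<Gamma>) (sem_args \<Delta> \<Gamma> as) k)"
proof -
  have D: "\<Delta> \<in> FOb X" "\<Gamma> \<in> FOb X" "cmap (Jdg X) as \<Delta> \<Gamma>" using h by (auto simp: FSig_Hom_iff)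
  have pc: "JCtx \<Gamma> \<in> Jdg X" using D by (auto simp: FOb_iff)
  have hk: "(\<Delta>, take k \<Gamma>, take k as) \<in> Hom (FSig X) \<Delta> (take k \<Gamma>)"
    using D by (simp add: FSig_Hom_iff FOb_take cmap_take)
  have sB: "substTC (snd (\<Gamma> ! k)) (take k as) (take k \<Gamma>) = arg_ty \<Gamma> as k"
    by (simp add: arg_ty_def OV_take)
  show ?thesis using sg_tsub[OF hk JCtx_JTy_prefix[OF pc k]] sB Fa_eq_tel_mor_take[OF h, of k] k by (simp add: sem_tel_def)
qed

end

section \<open>Interpretation of the extended syntax\<close>

locale sig_extension =
  fixes Sig :: "('s, 'f) decl set"
    and C :: "('o, 'm, 't, 'e) cwf"
    and G :: "(('s, 'f) ctx, ('s, 'f) fmor, ('s, 'f) fty, ('s, 'f) ftm, 'o, 'm, 't, 'e) cwf_mor"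
    and S :: 's
    and GS :: "('s, 'f) ctx"
    and A :: 't
  assumes sig: "is_signature Sig"
    and cwfC: "is_cwf C"
    and morG: "cwf_morphism (FSig Sig) C G"
    and notS: "\<forall>\<Gamma>. TDecl \<Gamma> S \<notin> Sig"
    and pcS: "precontext GS"
    and jS: "JCtx GS \<in> Jdg Sig"
    and AT: "A \<in> cTy C (Fo G GS)"
begin

sublocale G: term_model_mor C Sig G
  by unfold_locales (rule cwfC, rule morG)

abbreviation "Sig' \<equiv> insert (TDecl GS S) Sig"

lemma is_presig_Sig: "is_presig Sig" using sig by (simp add: is_signature_def)

text \<open>The semantic generic instance of each symbol.  For a symbol without declaration the
  descriptions below are junk; they are only used for declared symbols.\<close>

definition ty_ctx :: "'s \<Rightarrow> ('s, 'f) ctx" where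
  "ty_ctx T = (if T = S then GS else (THE \<Gamma>. TDecl \<Gamma> T \<in> Sig))"

definition ty_sem :: "'s \<Rightarrow> 't" where
  "ty_sem T = (if T = S then A else sg G (ty_ctx T) (ty_ctx T, PTy T (map Var (OV (ty_ctx T)))))"

definition fun_decl :: "'f \<Rightarrow> ('s, 'f) ctx \<times> ('s, 'f) pty" where
  "fun_decl f = (THE p. FDecl (fst p) f (snd p) \<in> Sig)"

definition fun_ty_sem :: "'f \<Rightarrow> 't" where
  "fun_ty_sem f = sg G (fst (fun_decl f)) (fun_decl f)"

definition fun_tm_sem :: "'f \<Rightarrow> 'e" where
  "fun_tm_sem f = th G (fst (fun_decl f)) (fun_decl f) (fun_decl f, App f (map Var (OV (fst (fun_decl f)))))"

fun interp_tm :: "(nat \<Rightarrow> 'e) \<Rightarrow> 'o \<Rightarrow> 'f pre \<Rightarrow> 'e" where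
  "interp_tm \<rho> D (Var x) = \<rho> x"
| "interp_tm \<rho> D (App f as) = esub C (fun_ty_sem f) (fun_tm_sem f)
     (tel_mor C D (sem_tel G (fst (fun_decl f))) (nth (map (interp_tm \<rho> D) as)) (length (fst (fun_decl f))))"

fun interp_ty :: "(nat \<Rightarrow> 'e) \<Rightarrow> 'o \<Rightarrow> ('s, 'f) pty \<Rightarrow> 't" where
  "interp_ty \<rho> D (PTy T as) = tsub C (ty_sem T) (tel_mor C D (sem_tel G (ty_ctx T)) (nth (map (interp_tm \<rho> D) as)) (length (ty_ctx T)))"

lemma interp_tm_subst: "interp_tm \<rho> D (substP \<sigma> t) = interp_tm (\<lambda>x. interp_tm \<rho> D (\<sigma> x)) D t"
proof (induction t)
  case (App f as)
  then have "map (interp_tm \<rho> D) (map (substP \<sigma>) as) = map (interp_tm (\<lambda>x. interp_tm \<rho> D (\<sigma> x)) D) as" by auto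
  then show ?case by (simp only: substP.simps interp_tm.simps)
qed simp

lemma interp_ty_subst: "interp_ty \<rho> D (substT \<sigma> B) = interp_ty (\<lambda>x. interp_tm \<rho> D (\<sigma> x)) D B"
  by (cases B) (simp add: interp_tm_subst comp_def)

lemma TDecl_not_S: "TDecl \<Gamma> T \<in> Sig \<Longrightarrow> T \<noteq> S" using notS by auto

lemma TDecl_ty_ctx_sem: "TDecl \<Gamma> T \<in> Sig \<Longrightarrow> ty_ctx T = \<Gamma> \<and> ty_sem T = sg G \<Gamma> (\<Gamma>, PTy T (map Var (OV \<Gamma>)))"
proof -
  assume a: "TDecl \<Gamma> T \<in> Sig"
  have "(THE \<Gamma>. TDecl \<Gamma> T \<in> Sig) = \<Gamma>"
    by (rule the_equality[of "\<lambda>\<Gamma>. TDecl \<Gamma> T \<in> Sig", OF a]) (use is_presig_Sig a in \<open>auto simp: is_presig_def\<close>)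
  then show ?thesis using TDecl_not_S[OF a] by (simp add: ty_ctx_def ty_sem_def)
qed

lemma FDecl_fun_decl: "FDecl \<Gamma> f U \<in> Sig \<Longrightarrow> fun_decl f = (\<Gamma>, U)"
  unfolding fun_decl_def by (rule the_equality) (use is_presig_Sig in \<open>auto simp: is_presig_def\<close>)

lemma TDecl_FOb: "TDecl \<Gamma> T \<in> Sig \<Longrightarrow> \<Gamma> \<in> FOb Sig"
  using sig is_presig_Sig by (auto simp: is_signature_def is_presig_def FOb_iff)

lemma FDecl_wf: "FDecl \<Gamma> f U \<in> Sig \<Longrightarrow> \<Gamma> \<in> FOb Sig \<and> JTy U \<Gamma> \<in> Jdg Sig"
proof -
  assume a: "FDecl \<Gamma> f U \<in> Sig"
  have t: "JTy U \<Gamma> \<in> Jdg Sig" using sig a by (auto simp: is_signature_def)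
  have "precontext \<Gamma>" using is_presig_Sig a by (auto simp: is_presig_def)
  then show ?thesis using t JTy_JCtx[OF t] by (simp add: FOb_iff)
qed

lemma GS_FOb: "GS \<in> FOb Sig" using pcS jS by (simp add: FOb_iff)

abbreviation sem_env :: "('s, 'f) ctx \<Rightarrow> (nat \<Rightarrow> 'e) \<Rightarrow> 'm \<Rightarrow> bool" where
  "sem_env \<Gamma> \<rho> m \<equiv> \<forall>k<length \<Gamma>. \<rho> (fst (\<Gamma> ! k)) = esub C (G.sem_var_ty \<Gamma> k) (G.sem_var_tm \<Gamma> k) m"

lemma interp_args_Sig:
  assumes h: "(\<Delta>, \<Gamma>, as) \<in> Hom (FSig Sig) \<Delta> \<Gamma>" and D': "D' \<in> Ob C" and m: "m \<in> Hom C D' (Fo G \<Delta>)"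
    and args: "\<And>k. k < length \<Gamma> \<Longrightarrow> interp_tm \<rho> D' (as ! k)
       = esub C (sg G \<Delta> (\<Delta>, arg_ty \<Gamma> as k)) (th G \<Delta> (\<Delta>, arg_ty \<Gamma> as k) ((\<Delta>, arg_ty \<Gamma> as k), as ! k)) m"
  shows "tel_mor C D' (sem_tel G \<Gamma>) (nth (map (interp_tm \<rho> D') as)) (length \<Gamma>) = cmp C (Fa G (\<Delta>, \<Gamma>, as)) m"
proof -
  note dec = G.Fa_eq_tel_mor[OF h]
  have len: "length as = length \<Gamma>" using h by (simp add: FSig_Hom_iff cmap_def)
  have "\<And>k. k < length \<Gamma> \<Longrightarrow> interp_tm \<rho> D' (as ! k) = esub C (tsub C (sem_tel G \<Gamma> k)
      (tel_mor C (Fo G \<Delta>) (sem_tel G \<Gamma>) (G.sem_args \<Delta> \<Gamma> as) k)) (G.sem_args \<Delta> \<Gamma> as k) m"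
    using args G.sg_arg_ty[OF h] by (simp add: G.sem_args_def)
  then show ?thesis
    using G.tel_mor_cmp[OF D' m dec(2)] dec(1) len by (auto intro!: tel_mor_cong)
qed

lemma interp_ty_PTy_Sig:
  assumes T: "TDecl \<Gamma>T T \<in> Sig" and h: "(\<Delta>, \<Gamma>T, as) \<in> Hom (FSig Sig) \<Delta> \<Gamma>T" and m: "m \<in> Hom C D' (Fo G \<Delta>)"
    and args: "tel_mor C D' (sem_tel G \<Gamma>T) (nth (map (interp_tm \<rho> D') as)) (length \<Gamma>T) = cmp C (Fa G (\<Delta>, \<Gamma>T, as)) m"
  shows "interp_ty \<rho> D' (PTy T as) = tsub C (sg G \<Delta> (\<Delta>, PTy T as)) m"
proof -
  have td: "ty_ctx T = \<Gamma>T" "ty_sem T = sg G \<Gamma>T (\<Gamma>T, PTy T (map Var (OV \<Gamma>T)))"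
    using TDecl_ty_ctx_sem[OF T] by auto
  have GT: "\<Gamma>T \<in> FOb Sig" using TDecl_FOb[OF T] .
  have len: "length as = length \<Gamma>T" using h by (simp add: FSig_Hom_iff cmap_def)
  have gen: "JTy (PTy T (map Var (OV \<Gamma>T))) \<Gamma>T \<in> Jdg Sig" using JTy_generic[OF T] GT by (simp add: FOb_iff)
  have inst: "map (substP (smap (OV \<Gamma>T) as)) (map Var (OV \<Gamma>T)) = as"
    using map_substP_smap_Var[OF distinct_OV_precontext] GT len by (auto simp: FOb_iff OV_def)
  have "interp_ty \<rho> D' (PTy T as) = tsub C (ty_sem T) (cmp C (Fa G (\<Delta>, \<Gamma>T, as)) m)"
    using args td by simp
  also have "\<dots> = tsub C (tsub C (ty_sem T) (Fa G (\<Delta>, \<Gamma>T, as))) m"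
    using G.tsub_cmp[OF G.Fa_Hom[OF h] m] td G.sg_ty[OF GT gen] by simp
  also have "tsub C (ty_sem T) (Fa G (\<Delta>, \<Gamma>T, as)) = sg G \<Delta> (\<Delta>, PTy T as)"
    using G.sg_tsub[OF h gen] td inst by simp
  finally show ?thesis .
qed

lemma interp_tm_App_Sig:
  assumes f: "FDecl \<Gamma>F f U \<in> Sig" and h: "(\<Delta>, \<Gamma>F, as) \<in> Hom (FSig Sig) \<Delta> \<Gamma>F" and m: "m \<in> Hom C D' (Fo G \<Delta>)"
    and args: "tel_mor C D' (sem_tel G \<Gamma>F) (nth (map (interp_tm \<rho> D') as)) (length \<Gamma>F) = cmp C (Fa G (\<Delta>, \<Gamma>F, as)) m"
  shows "interp_tm \<rho> D' (App f as)
    = esub C (sg G \<Delta> (\<Delta>, substTC U as \<Gamma>F)) (th G \<Delta> (\<Delta>, substTC U as \<Gamma>F) ((\<Delta>, substTC U as \<Gamma>F), App f as)) m"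
proof -
  have fd: "fun_decl f = (\<Gamma>F, U)" using FDecl_fun_decl[OF f] .
  have GF: "\<Gamma>F \<in> FOb Sig" "JTy U \<Gamma>F \<in> Jdg Sig" using FDecl_wf[OF f] by auto
  have len: "length as = length \<Gamma>F" using h by (simp add: FSig_Hom_iff cmap_def)
  have gen: "JTm (App f (map Var (OV \<Gamma>F))) U \<Gamma>F \<in> Jdg Sig"
    using JTm_generic[OF f _ GF(2)] GF(1) by (simp add: FOb_iff)
  have inst: "map (substP (smap (OV \<Gamma>F) as)) (map Var (OV \<Gamma>F)) = as"
    using map_substP_smap_Var[OF distinct_OV_precontext] GF len by (auto simp: FOb_iff OV_def)
  have Uty: "fun_ty_sem f \<in> cTy C (Fo G \<Gamma>F)" using G.sg_ty[OF GF] fd by (simp add: fun_ty_sem_def)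
  have Ute: "fun_tm_sem f \<in> cTm C (Fo G \<Gamma>F) (fun_ty_sem f)"
    using G.th_tm[OF GF gen] fd by (simp add: fun_ty_sem_def fun_tm_sem_def)
  have "interp_tm \<rho> D' (App f as) = esub C (fun_ty_sem f) (fun_tm_sem f) (cmp C (Fa G (\<Delta>, \<Gamma>F, as)) m)"
    using args fd by simp
  also have "\<dots> = esub C (tsub C (fun_ty_sem f) (Fa G (\<Delta>, \<Gamma>F, as))) (esub C (fun_ty_sem f) (fun_tm_sem f) (Fa G (\<Delta>, \<Gamma>F, as))) m"
    using G.esub_cmp[OF G.Fa_Hom[OF h] m Uty Ute] .
  also have "tsub C (fun_ty_sem f) (Fa G (\<Delta>, \<Gamma>F, as)) = sg G \<Delta> (\<Delta>, substTC U as \<Gamma>F)"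
    using G.sg_tsub[OF h GF(2)] fd by (simp add: fun_ty_sem_def)
  also have "esub C (fun_ty_sem f) (fun_tm_sem f) (Fa G (\<Delta>, \<Gamma>F, as)) = th G \<Delta> (\<Delta>, substTC U as \<Gamma>F) ((\<Delta>, substTC U as \<Gamma>F), App f as)"
    using G.th_esub[OF h GF(2) gen] fd inst by (simp add: fun_ty_sem_def fun_tm_sem_def)
  finally show ?thesis .
qed

lemma interp_agrees_Sig: "j \<in> Jdg Sig \<Longrightarrow> (case j of JCtx \<Gamma> \<Rightarrow> True
  | JTy B \<Gamma> \<Rightarrow> (\<forall>D' \<rho> m. D' \<in> Ob C \<longrightarrow> m \<in> Hom C D' (Fo G \<Gamma>) \<longrightarrow> sem_env \<Gamma> \<rho> m \<longrightarrow>
        interp_ty \<rho> D' B = tsub C (sg G \<Gamma> (\<Gamma>, B)) m)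
  | JTm a B \<Gamma> \<Rightarrow> (\<forall>D' \<rho> m. D' \<in> Ob C \<longrightarrow> m \<in> Hom C D' (Fo G \<Gamma>) \<longrightarrow> sem_env \<Gamma> \<rho> m \<longrightarrow>
        interp_tm \<rho> D' a = esub C (sg G \<Gamma> (\<Gamma>, B)) (th G \<Gamma> (\<Gamma>, B) ((\<Gamma>, B), a)) m))"
proof (induction rule: Jdg.induct)
  case (R3 \<Gamma> i)
  then show ?case by (auto simp: G.sem_var_ty_def G.sem_var_tm_def)
next
  case (R4 \<Gamma>T T \<Delta> as)
  then have h: "(\<Delta>, \<Gamma>T, as) \<in> Hom (FSig Sig) \<Delta> \<Gamma>T" by (simp add: FSig_Hom_cmap cmap_def)
  show ?case
    using R4.IH interp_ty_PTy_Sig[OF R4.hyps(1) h] interp_args_Sig[OF h] by (auto simp: arg_ty_def)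
next
  case (R5 \<Gamma>F f U \<Delta> as)
  then have h: "(\<Delta>, \<Gamma>F, as) \<in> Hom (FSig Sig) \<Delta> \<Gamma>F" by (simp add: FSig_Hom_cmap cmap_def)
  show ?case
    using R5.IH interp_tm_App_Sig[OF R5.hyps(1) h] interp_args_Sig[OF h] by (auto simp: arg_ty_def)
qed auto

lemma interp_ty_Sig: "JTy B \<Gamma>0 \<in> Jdg Sig \<Longrightarrow> D' \<in> Ob C \<Longrightarrow> m \<in> Hom C D' (Fo G \<Gamma>0) \<Longrightarrow>
   (\<And>k. k < length \<Gamma>0 \<Longrightarrow> \<rho>' (fst (\<Gamma>0 ! k)) = esub C (G.sem_var_ty \<Gamma>0 k) (G.sem_var_tm \<Gamma>0 k) m) \<Longrightarrow>
   interp_ty \<rho>' D' B = tsub C (sg G \<Gamma>0 (\<Gamma>0, B)) m"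
  using interp_agrees_Sig[of "JTy B \<Gamma>0"] by auto

lemma interp_tm_Sig: "JTm a B \<Gamma>0 \<in> Jdg Sig \<Longrightarrow> D' \<in> Ob C \<Longrightarrow> m \<in> Hom C D' (Fo G \<Gamma>0) \<Longrightarrow>
   (\<And>k. k < length \<Gamma>0 \<Longrightarrow> \<rho>' (fst (\<Gamma>0 ! k)) = esub C (G.sem_var_ty \<Gamma>0 k) (G.sem_var_tm \<Gamma>0 k) m) \<Longrightarrow>
   interp_tm \<rho>' D' a = esub C (sg G \<Gamma>0 (\<Gamma>0, B)) (th G \<Gamma>0 (\<Gamma>0, B) ((\<Gamma>0, B), a)) m"
  using interp_agrees_Sig[of "JTm a B \<Gamma>0"] by auto

lemma interp_smap_sem_env:
  assumes GT: "\<Gamma>T \<in> FOb Sig" and D: "D \<in> Ob C" and len: "length as = length \<Gamma>T"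
    and ok: "tel_wf C D (sem_tel G \<Gamma>T) (nth (map (interp_tm \<rho> D) as)) (length \<Gamma>T)"
  shows "\<And>k. k < length \<Gamma>T \<Longrightarrow> interp_tm \<rho> D (smap (OV \<Gamma>T) as (fst (\<Gamma>T ! k)))
     = esub C (G.sem_var_ty \<Gamma>T k) (G.sem_var_tm \<Gamma>T k) (tel_mor C D (sem_tel G \<Gamma>T) (nth (map (interp_tm \<rho> D) as)) (length \<Gamma>T))"
proof -
  fix k assume k: "k < length \<Gamma>T"
  have di: "distinct (OV \<Gamma>T)" using GT by (simp add: FOb_iff distinct_OV_precontext)
  have "smap (OV \<Gamma>T) as (fst (\<Gamma>T ! k)) = as ! k"
    using smap_nth[OF di, of as k] len k by (simp add: OV_def)
  then show "interp_tm \<rho> D (smap (OV \<Gamma>T) as (fst (\<Gamma>T ! k)))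
     = esub C (G.sem_var_ty \<Gamma>T k) (G.sem_var_tm \<Gamma>T k) (tel_mor C D (sem_tel G \<Gamma>T) (nth (map (interp_tm \<rho> D) as)) (length \<Gamma>T))"
    using G.esub_sem_var_tel_mor[OF GT D _ ok k] len k by simp
qed

lemma tel_wf_interp_args:
  assumes GT: "\<Gamma>T \<in> FOb Sig" and D: "D \<in> Ob C" and len: "length as = length \<Gamma>T"
    and tm: "\<And>k. k < length \<Gamma>T \<Longrightarrow> interp_tm \<rho> D (as ! k) \<in> cTm C D (interp_ty \<rho> D (arg_ty \<Gamma>T as k))"
  shows "n \<le> length \<Gamma>T \<Longrightarrow> tel_wf C D (sem_tel G \<Gamma>T) (nth (map (interp_tm \<rho> D) as)) n \<and>
     (\<forall>k<n. interp_ty \<rho> D (arg_ty \<Gamma>T as k) = tsub C (sem_tel G \<Gamma>T k) (tel_mor C D (sem_tel G \<Gamma>T) (nth (map (interp_tm \<rho> D) as)) k))"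
proof (induction n)
  case 0 then show ?case by (simp add: tel_wf_def)
next
  case (Suc n)
  let ?es = "nth (map (interp_tm \<rho> D) as)"
  have n: "n < length \<Gamma>T" using Suc by simp
  have IH: "tel_wf C D (sem_tel G \<Gamma>T) ?es n"
     "\<forall>k<n. interp_ty \<rho> D (arg_ty \<Gamma>T as k) = tsub C (sem_tel G \<Gamma>T k) (tel_mor C D (sem_tel G \<Gamma>T) ?es k)" using Suc by auto
  have pc: "precontext \<Gamma>T" "JCtx \<Gamma>T \<in> Jdg Sig" using GT by (auto simp: FOb_iff)
  define \<Gamma>0 where "\<Gamma>0 = take n \<Gamma>T"
  have M: "tel_mor C D (sem_tel G \<Gamma>T) ?es n \<in> Hom C D (Fo G \<Gamma>0)"
    using G.tel_mor_Hom[OF D IH(1)] G.tel_ob_sem_tel[OF GT] n unfolding \<Gamma>0_def by simp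
  have rh: "\<And>k. k < length \<Gamma>0 \<Longrightarrow> interp_tm \<rho> D (smap (map fst \<Gamma>0) (take n as) (fst (\<Gamma>0 ! k)))
      = esub C (G.sem_var_ty \<Gamma>0 k) (G.sem_var_tm \<Gamma>0 k) (tel_mor C D (sem_tel G \<Gamma>T) ?es n)"
  proof -
    fix k assume k: "k < length \<Gamma>0"
    have di: "distinct (map fst \<Gamma>0)"
      using distinct_OV_precontext[OF precontext_take[OF pc(1)]] by (simp add: OV_def \<Gamma>0_def)
    have "smap (map fst \<Gamma>0) (take n as) (fst (\<Gamma>0 ! k)) = as ! k"
      using smap_nth[OF di, of "take n as" k] len n k by (simp add: \<Gamma>0_def)
    then show "?thesis k"
      using G.esub_sem_var_tel_mor[OF GT D _ IH(1), of k] n k len by (simp add: \<Gamma>0_def)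
  qed
  have "interp_ty \<rho> D (arg_ty \<Gamma>T as n) = interp_ty (\<lambda>x. interp_tm \<rho> D (smap (map fst \<Gamma>0) (take n as) x)) D (snd (\<Gamma>T ! n))"
    by (simp add: arg_ty_def interp_ty_subst \<Gamma>0_def)
  also have "\<dots> = tsub C (sg G \<Gamma>0 (\<Gamma>0, snd (\<Gamma>T ! n))) (tel_mor C D (sem_tel G \<Gamma>T) ?es n)"
    by (rule interp_ty_Sig[OF _ D M rh]) (use JCtx_JTy_prefix[OF pc(2) n] in \<open>simp add: \<Gamma>0_def\<close>)
  finally have eq: "interp_ty \<rho> D (arg_ty \<Gamma>T as n) = tsub C (sem_tel G \<Gamma>T n) (tel_mor C D (sem_tel G \<Gamma>T) ?es n)"
    by (simp add: sem_tel_def \<Gamma>0_def)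
  have "?es n \<in> cTm C D (tsub C (sem_tel G \<Gamma>T n) (tel_mor C D (sem_tel G \<Gamma>T) ?es n))"
    using tm[OF n] eq len n by simp
  then have "tel_wf C D (sem_tel G \<Gamma>T) ?es (Suc n)"
    using IH(1) G.sem_tel_ty[OF GT n] by (simp add: tel_wf_Suc)
  then show ?case using IH(2) eq by (auto simp: less_Suc_eq)
qed

text \<open>A context is interpreted by iterated comprehension; for each variable we record its type
  and its value (the weakened generic variable) over the whole context.  Contexts are extended at
  the end, so the recursion runs over the reversed list.\<close>

fun interp_ctx_rev :: "('s, 'f) ctx \<Rightarrow> 'o \<times> (nat \<Rightarrow> 't) \<times> (nat \<Rightarrow> 'e)" where
  "interp_ctx_rev [] = (trm C, \<lambda>_. undefined, \<lambda>_. undefined)"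
| "interp_ctx_rev ((y, B) # R) = (case interp_ctx_rev R of (D, \<tau>, \<rho>) \<Rightarrow>
     (ext C D (interp_ty \<rho> D B),
      \<lambda>x. if x = y then tsub C (interp_ty \<rho> D B) (pr C D (interp_ty \<rho> D B)) else tsub C (\<tau> x) (pr C D (interp_ty \<rho> D B)),
      \<lambda>x. if x = y then var C D (interp_ty \<rho> D B) else esub C (\<tau> x) (\<rho> x) (pr C D (interp_ty \<rho> D B))))"

definition ctx_ob :: "('s, 'f) ctx \<Rightarrow> 'o" where "ctx_ob \<Gamma> = fst (interp_ctx_rev (rev \<Gamma>))"

definition ctx_var_ty :: "('s, 'f) ctx \<Rightarrow> nat \<Rightarrow> 't" where "ctx_var_ty \<Gamma> = fst (snd (interp_ctx_rev (rev \<Gamma>)))"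

definition ctx_var_tm :: "('s, 'f) ctx \<Rightarrow> nat \<Rightarrow> 'e" where "ctx_var_tm \<Gamma> = snd (snd (interp_ctx_rev (rev \<Gamma>)))"

abbreviation "interp_ty_in \<Gamma> B \<equiv> interp_ty (ctx_var_tm \<Gamma>) (ctx_ob \<Gamma>) B"

abbreviation "interp_tm_in \<Gamma> a \<equiv> interp_tm (ctx_var_tm \<Gamma>) (ctx_ob \<Gamma>) a"

lemma ctx_ob_Nil[simp]: "ctx_ob [] = trm C" by (simp add: ctx_ob_def)

lemma ctx_interp_snoc[simp]:
  "ctx_ob (\<Gamma> @ [(y, B)]) = ext C (ctx_ob \<Gamma>) (interp_ty_in \<Gamma> B)"
  "ctx_var_ty (\<Gamma> @ [(y, B)]) = (\<lambda>x. if x = y then tsub C (interp_ty_in \<Gamma> B) (pr C (ctx_ob \<Gamma>) (interp_ty_in \<Gamma> B)) else tsub C (ctx_var_ty \<Gamma> x) (pr C (ctx_ob \<Gamma>) (interp_ty_in \<Gamma> B)))"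
  "ctx_var_tm (\<Gamma> @ [(y, B)]) = (\<lambda>x. if x = y then var C (ctx_ob \<Gamma>) (interp_ty_in \<Gamma> B) else esub C (ctx_var_ty \<Gamma> x) (ctx_var_tm \<Gamma> x) (pr C (ctx_ob \<Gamma>) (interp_ty_in \<Gamma> B)))"
proof -
  obtain D \<tau> \<rho> where e: "interp_ctx_rev (rev \<Gamma>) = (D, \<tau>, \<rho>)" by (cases "interp_ctx_rev (rev \<Gamma>)") auto
  have o: "ctx_ob \<Gamma> = D" "ctx_var_ty \<Gamma> = \<tau>" "ctx_var_tm \<Gamma> = \<rho>" using e by (simp_all add: ctx_ob_def ctx_var_ty_def ctx_var_tm_def)
  show "ctx_ob (\<Gamma> @ [(y, B)]) = ext C (ctx_ob \<Gamma>) (interp_ty_in \<Gamma> B)" unfolding o by (simp add: ctx_ob_def e)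
  show "ctx_var_ty (\<Gamma> @ [(y, B)]) = (\<lambda>x. if x = y then tsub C (interp_ty_in \<Gamma> B) (pr C (ctx_ob \<Gamma>) (interp_ty_in \<Gamma> B)) else tsub C (ctx_var_ty \<Gamma> x) (pr C (ctx_ob \<Gamma>) (interp_ty_in \<Gamma> B)))"
    unfolding o by (simp add: ctx_var_ty_def ctx_var_tm_def e)
  show "ctx_var_tm (\<Gamma> @ [(y, B)]) = (\<lambda>x. if x = y then var C (ctx_ob \<Gamma>) (interp_ty_in \<Gamma> B) else esub C (ctx_var_ty \<Gamma> x) (ctx_var_tm \<Gamma> x) (pr C (ctx_ob \<Gamma>) (interp_ty_in \<Gamma> B)))"
    unfolding o by (simp add: ctx_var_ty_def ctx_var_tm_def e)
qed

definition env_along :: "('s, 'f) ctx \<Rightarrow> 'o \<Rightarrow> (nat \<Rightarrow> 'e) \<Rightarrow> 'm \<Rightarrow> bool" where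
  "env_along \<Gamma> D' \<rho>' m \<longleftrightarrow> D' \<in> Ob C \<and> m \<in> Hom C D' (ctx_ob \<Gamma>) \<and>
     (\<forall>k<length \<Gamma>. \<rho>' (fst (\<Gamma> ! k)) = esub C (ctx_var_ty \<Gamma> (fst (\<Gamma> ! k))) (ctx_var_tm \<Gamma> (fst (\<Gamma> ! k))) m)"

definition ctx_sound :: "('s, 'f) ctx \<Rightarrow> bool" where
  "ctx_sound \<Gamma> \<longleftrightarrow> ctx_ob \<Gamma> \<in> Ob C \<and>
     (\<forall>k<length \<Gamma>. ctx_var_ty \<Gamma> (fst (\<Gamma> ! k)) \<in> cTy C (ctx_ob \<Gamma>) \<and> ctx_var_tm \<Gamma> (fst (\<Gamma> ! k)) \<in> cTm C (ctx_ob \<Gamma>) (ctx_var_ty \<Gamma> (fst (\<Gamma> ! k)))) \<and>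
     (\<forall>k<length \<Gamma>. \<forall>D' \<rho>' m. env_along \<Gamma> D' \<rho>' m \<longrightarrow> interp_ty \<rho>' D' (snd (\<Gamma> ! k)) = tsub C (ctx_var_ty \<Gamma> (fst (\<Gamma> ! k))) m)"

lemma TDecl_ext: "TDecl \<Gamma>T T \<in> Sig' \<Longrightarrow> ty_ctx T = \<Gamma>T \<and> \<Gamma>T \<in> FOb Sig \<and> ty_sem T \<in> cTy C (Fo G \<Gamma>T)"
proof -
  assume a: "TDecl \<Gamma>T T \<in> Sig'"
  show ?thesis
  proof (cases "T = S")
    case True
    then have "\<Gamma>T = GS" using a notS by auto
    then show ?thesis using True AT GS_FOb by (simp add: ty_ctx_def ty_sem_def)
  next
    case False
    then have b: "TDecl \<Gamma>T T \<in> Sig" using a by auto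
    have "JCtx \<Gamma>T \<in> Jdg Sig" using TDecl_FOb[OF b] by (simp add: FOb_iff)
    then show ?thesis using TDecl_ty_ctx_sem[OF b] TDecl_FOb[OF b] G.sg_ty[OF TDecl_FOb[OF b] JTy_generic[OF b]] by simp
  qed
qed

lemma env_along_idm: "ctx_sound \<Gamma> \<Longrightarrow> env_along \<Gamma> (ctx_ob \<Gamma>) (ctx_var_tm \<Gamma>) (idm C (ctx_ob \<Gamma>))"
  unfolding env_along_def ctx_sound_def using G.idm_Hom G.esub_id by simp

lemma interp_ty_in_var: "ctx_sound \<Gamma> \<Longrightarrow> k < length \<Gamma> \<Longrightarrow> interp_ty_in \<Gamma> (snd (\<Gamma> ! k)) = ctx_var_ty \<Gamma> (fst (\<Gamma> ! k))"
proof -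
  assume a: "ctx_sound \<Gamma>" "k < length \<Gamma>"
  have "interp_ty_in \<Gamma> (snd (\<Gamma> ! k)) = tsub C (ctx_var_ty \<Gamma> (fst (\<Gamma> ! k))) (idm C (ctx_ob \<Gamma>))"
    using env_along_idm[OF a(1)] a unfolding ctx_sound_def by blast
  then show ?thesis using G.tsub_id a unfolding ctx_sound_def by simp
qed

lemma interp_args_tel:
  assumes GT: "\<Gamma>T \<in> FOb Sig" and D: "ctx_ob \<Delta> \<in> Ob C" and len: "length as = length \<Gamma>T"
    and IH: "\<forall>k < length \<Gamma>T. interp_tm_in \<Delta> (as ! k) \<in> cTm C (ctx_ob \<Delta>) (interp_ty_in \<Delta> (arg_ty \<Gamma>T as k)) \<and>
       (\<forall>D' \<rho>' m. env_along \<Delta> D' \<rho>' m \<longrightarrow> interp_tm \<rho>' D' (as ! k) = esub C (interp_ty_in \<Delta> (arg_ty \<Gamma>T as k)) (interp_tm_in \<Delta> (as ! k)) m)"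
  shows "tel_wf C (ctx_ob \<Delta>) (sem_tel G \<Gamma>T) (nth (map (interp_tm_in \<Delta>) as)) (length \<Gamma>T)"
    and "tel_mor C (ctx_ob \<Delta>) (sem_tel G \<Gamma>T) (nth (map (interp_tm_in \<Delta>) as)) (length \<Gamma>T) \<in> Hom C (ctx_ob \<Delta>) (Fo G \<Gamma>T)"
    and "\<And>D' \<rho>' m. env_along \<Delta> D' \<rho>' m \<Longrightarrow> tel_mor C D' (sem_tel G \<Gamma>T) (nth (map (interp_tm \<rho>' D') as)) (length \<Gamma>T)
          = cmp C (tel_mor C (ctx_ob \<Delta>) (sem_tel G \<Gamma>T) (nth (map (interp_tm_in \<Delta>) as)) (length \<Gamma>T)) m"
proof -
  note cm = tel_wf_interp_args[OF GT D len, where n="length \<Gamma>T" and \<rho>="ctx_var_tm \<Delta>"]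
  have c: "tel_wf C (ctx_ob \<Delta>) (sem_tel G \<Gamma>T) (nth (map (interp_tm_in \<Delta>) as)) (length \<Gamma>T)"
     "\<And>k. k < length \<Gamma>T \<Longrightarrow> interp_ty_in \<Delta> (arg_ty \<Gamma>T as k) = tsub C (sem_tel G \<Gamma>T k) (tel_mor C (ctx_ob \<Delta>) (sem_tel G \<Gamma>T) (nth (map (interp_tm_in \<Delta>) as)) k)"
    using cm IH by auto
  show "tel_wf C (ctx_ob \<Delta>) (sem_tel G \<Gamma>T) (nth (map (interp_tm_in \<Delta>) as)) (length \<Gamma>T)" by (rule c(1))
  show "tel_mor C (ctx_ob \<Delta>) (sem_tel G \<Gamma>T) (nth (map (interp_tm_in \<Delta>) as)) (length \<Gamma>T) \<in> Hom C (ctx_ob \<Delta>) (Fo G \<Gamma>T)"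
    using G.tel_mor_Hom[OF D c(1)] G.tel_ob_sem_tel[OF GT, of "length \<Gamma>T"] by simp
  fix D' \<rho>' m assume E: "env_along \<Delta> D' \<rho>' m"
  have D': "D' \<in> Ob C" and m: "m \<in> Hom C D' (ctx_ob \<Delta>)" using E by (auto simp: env_along_def)
  show "tel_mor C D' (sem_tel G \<Gamma>T) (nth (map (interp_tm \<rho>' D') as)) (length \<Gamma>T)
          = cmp C (tel_mor C (ctx_ob \<Delta>) (sem_tel G \<Gamma>T) (nth (map (interp_tm_in \<Delta>) as)) (length \<Gamma>T)) m"
    using G.tel_mor_cmp[OF D' m c(1)] IH E c(2) len by (auto intro!: tel_mor_cong)
qed

lemma ctx_sound_Nil: "ctx_sound []"
  by (simp add: ctx_sound_def G.trm_Ob)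

lemma esub_ctx_var_snoc:
  assumes ok: "ctx_sound \<Gamma>" and TB: "interp_ty_in \<Gamma> B \<in> cTy C (ctx_ob \<Gamma>)" and k: "k < length \<Gamma>"
    and h: "h \<in> Hom C D' (ext C (ctx_ob \<Gamma>) (interp_ty_in \<Gamma> B))"
  shows "esub C (ctx_var_ty (\<Gamma> @ [(fresh \<Gamma>, B)]) (fst (\<Gamma> ! k))) (ctx_var_tm (\<Gamma> @ [(fresh \<Gamma>, B)]) (fst (\<Gamma> ! k))) h
    = esub C (ctx_var_ty \<Gamma> (fst (\<Gamma> ! k))) (ctx_var_tm \<Gamma> (fst (\<Gamma> ! k))) (cmp C (pr C (ctx_ob \<Gamma>) (interp_ty_in \<Gamma> B)) h)"
proof -
  have D: "ctx_ob \<Gamma> \<in> Ob C" using ok by (simp add: ctx_sound_def)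
  have p: "pr C (ctx_ob \<Gamma>) (interp_ty_in \<Gamma> B) \<in> Hom C (ext C (ctx_ob \<Gamma>) (interp_ty_in \<Gamma> B)) (ctx_ob \<Gamma>)"
    by (rule G.pr_Hom[OF D TB])
  have ny: "fst (\<Gamma> ! k) \<noteq> fresh \<Gamma>"
    using fresh_notin_OV[of \<Gamma>] k unfolding OV_def by (metis length_map nth_map nth_mem)
  have "ctx_var_ty \<Gamma> (fst (\<Gamma> ! k)) \<in> cTy C (ctx_ob \<Gamma>)"
    "ctx_var_tm \<Gamma> (fst (\<Gamma> ! k)) \<in> cTm C (ctx_ob \<Gamma>) (ctx_var_ty \<Gamma> (fst (\<Gamma> ! k)))"
    using ok k by (simp_all add: ctx_sound_def)
  then show ?thesis using G.esub_cmp[OF p h] ny by simp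
qed

lemma env_along_snoc:
  assumes ok: "ctx_sound \<Gamma>" and TB: "interp_ty_in \<Gamma> B \<in> cTy C (ctx_ob \<Gamma>)"
    and E: "env_along (\<Gamma> @ [(fresh \<Gamma>, B)]) D' \<rho>' m"
  shows "env_along \<Gamma> D' \<rho>' (cmp C (pr C (ctx_ob \<Gamma>) (interp_ty_in \<Gamma> B)) m)"
proof -
  have D: "ctx_ob \<Gamma> \<in> Ob C" using ok by (simp add: ctx_sound_def)
  have p: "pr C (ctx_ob \<Gamma>) (interp_ty_in \<Gamma> B) \<in> Hom C (ext C (ctx_ob \<Gamma>) (interp_ty_in \<Gamma> B)) (ctx_ob \<Gamma>)"
    by (rule G.pr_Hom[OF D TB])
  have m: "m \<in> Hom C D' (ext C (ctx_ob \<Gamma>) (interp_ty_in \<Gamma> B))" and D': "D' \<in> Ob C"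
    using E by (auto simp: env_along_def)
  have "\<rho>' (fst (\<Gamma> ! k)) = esub C (ctx_var_ty (\<Gamma> @ [(fresh \<Gamma>, B)]) (fst (\<Gamma> ! k))) (ctx_var_tm (\<Gamma> @ [(fresh \<Gamma>, B)]) (fst (\<Gamma> ! k))) m"
    if k: "k < length \<Gamma>" for k
    using E k nth_append[of \<Gamma> "[(fresh \<Gamma>, B)]" k] unfolding env_along_def by (metis length_append_singleton less_SucI)
  then show ?thesis
    using esub_ctx_var_snoc[OF ok TB _ m] D' G.cmp_Hom[OF m p] unfolding env_along_def by simp
qed

lemma ctx_sound_snoc:
  assumes ok: "ctx_sound \<Gamma>" and TB: "interp_ty_in \<Gamma> B \<in> cTy C (ctx_ob \<Gamma>)"
    and EB: "\<And>D' \<rho>' m. env_along \<Gamma> D' \<rho>' m \<Longrightarrow> interp_ty \<rho>' D' B = tsub C (interp_ty_in \<Gamma> B) m"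
  shows "ctx_sound (\<Gamma> @ [(fresh \<Gamma>, B)])"
proof -
  define y where "y = fresh \<Gamma>"
  define T where "T = interp_ty_in \<Gamma> B"
  define D where "D = ctx_ob \<Gamma>"
  define p where "p = pr C D T"
  let ?\<Gamma>' = "\<Gamma> @ [(y, B)]"
  have D: "D \<in> Ob C" using ok by (simp add: ctx_sound_def D_def)
  have T: "T \<in> cTy C D" using TB by (simp add: T_def D_def)
  have p: "p \<in> Hom C (ext C D T) D" unfolding p_def by (rule G.pr_Hom[OF D T])
  have ny: "\<And>k. k < length \<Gamma> \<Longrightarrow> fst (\<Gamma> ! k) \<noteq> y"
    using fresh_notin_OV[of \<Gamma>] unfolding y_def OV_def by (metis length_map nth_map nth_mem)
  have o: "ctx_ob ?\<Gamma>' = ext C D T"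
    "ctx_var_ty ?\<Gamma>' = (\<lambda>x. if x = y then tsub C T p else tsub C (ctx_var_ty \<Gamma> x) p)"
    "ctx_var_tm ?\<Gamma>' = (\<lambda>x. if x = y then var C D T else esub C (ctx_var_ty \<Gamma> x) (ctx_var_tm \<Gamma> x) p)"
    unfolding T_def D_def p_def by simp_all
  have okk: "\<And>k. k < length \<Gamma> \<Longrightarrow> ctx_var_ty \<Gamma> (fst (\<Gamma> ! k)) \<in> cTy C D \<and> ctx_var_tm \<Gamma> (fst (\<Gamma> ! k)) \<in> cTm C D (ctx_var_ty \<Gamma> (fst (\<Gamma> ! k)))"
    using ok by (simp add: ctx_sound_def D_def)
  have typed: "ctx_var_ty ?\<Gamma>' (fst (?\<Gamma>' ! k)) \<in> cTy C (ctx_ob ?\<Gamma>')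
      \<and> ctx_var_tm ?\<Gamma>' (fst (?\<Gamma>' ! k)) \<in> cTm C (ctx_ob ?\<Gamma>') (ctx_var_ty ?\<Gamma>' (fst (?\<Gamma>' ! k)))"
    if k: "k < length ?\<Gamma>'" for k
  proof (cases "k < length \<Gamma>")
    case True
    then show ?thesis using o ny[OF True] okk[OF True] G.tsub_ty[OF p] G.esub_tm[OF p] by (simp add: nth_append)
  next
    case False
    then have "?\<Gamma>' ! k = (y, B)" using k by (simp add: nth_append)
    then show ?thesis using o G.tsub_ty[OF p T] G.var_tm[OF D T] by (simp add: p_def)
  qed
  have along: "interp_ty \<rho>' D' (snd (?\<Gamma>' ! k)) = tsub C (ctx_var_ty ?\<Gamma>' (fst (?\<Gamma>' ! k))) m"
    if k: "k < length ?\<Gamma>'" and E: "env_along ?\<Gamma>' D' \<rho>' m" for k D' \<rho>' m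
  proof -
    have m: "m \<in> Hom C D' (ext C D T)" using E o by (simp add: env_along_def)
    have EG: "env_along \<Gamma> D' \<rho>' (cmp C p m)"
      using env_along_snoc[OF ok TB E[unfolded y_def]] by (simp add: p_def T_def D_def)
    show ?thesis
    proof (cases "k < length \<Gamma>")
      case True
      have "interp_ty \<rho>' D' (snd (\<Gamma> ! k)) = tsub C (ctx_var_ty \<Gamma> (fst (\<Gamma> ! k))) (cmp C p m)"
        using ok EG True unfolding ctx_sound_def by blast
      also have "\<dots> = tsub C (tsub C (ctx_var_ty \<Gamma> (fst (\<Gamma> ! k))) p) m"
        using G.tsub_cmp[OF p m] okk[OF True] by blast
      finally show ?thesis using o ny[OF True] True by (simp add: nth_append)
    next
      case False
      then have "?\<Gamma>' ! k = (y, B)" using k by (simp add: nth_append)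
      moreover have "interp_ty \<rho>' D' B = tsub C (tsub C T p) m"
        using EB[OF EG] G.tsub_cmp[OF p m T] by (simp add: T_def)
      ultimately show ?thesis using o by simp
    qed
  qed
  show ?thesis
    using o G.ext_Ob[OF D T] typed along unfolding ctx_sound_def y_def by auto
qed

lemma interp_sound_PTy:
  assumes T: "TDecl \<Gamma>T T \<in> Sig'" and ok: "ctx_sound \<Delta>" and len: "length as = length \<Gamma>T"
    and IH: "\<forall>k < length \<Gamma>T. interp_tm_in \<Delta> (as ! k) \<in> cTm C (ctx_ob \<Delta>) (interp_ty_in \<Delta> (arg_ty \<Gamma>T as k)) \<and>
       (\<forall>D' \<rho>' m. env_along \<Delta> D' \<rho>' m \<longrightarrow> interp_tm \<rho>' D' (as ! k) = esub C (interp_ty_in \<Delta> (arg_ty \<Gamma>T as k)) (interp_tm_in \<Delta> (as ! k)) m)"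
  shows "interp_ty_in \<Delta> (PTy T as) \<in> cTy C (ctx_ob \<Delta>) \<and>
    (\<forall>D' \<rho>' m. env_along \<Delta> D' \<rho>' m \<longrightarrow> interp_ty \<rho>' D' (PTy T as) = tsub C (interp_ty_in \<Delta> (PTy T as)) m)"
proof -
  have td: "ty_ctx T = \<Gamma>T" "\<Gamma>T \<in> FOb Sig" "ty_sem T \<in> cTy C (Fo G \<Gamma>T)" using TDecl_ext[OF T] by auto
  have D: "ctx_ob \<Delta> \<in> Ob C" using ok by (simp add: ctx_sound_def)
  note ao = interp_args_tel[OF td(2) D len IH]
  let ?M = "tel_mor C (ctx_ob \<Delta>) (sem_tel G \<Gamma>T) (nth (map (interp_tm_in \<Delta>) as)) (length \<Gamma>T)"
  have e: "interp_ty_in \<Delta> (PTy T as) = tsub C (ty_sem T) ?M" using td by simp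
  have ty: "interp_ty_in \<Delta> (PTy T as) \<in> cTy C (ctx_ob \<Delta>)" using e G.tsub_ty[OF ao(2) td(3)] by simp
  have env: "\<And>D' \<rho>' m. env_along \<Delta> D' \<rho>' m \<Longrightarrow> interp_ty \<rho>' D' (PTy T as) = tsub C (interp_ty_in \<Delta> (PTy T as)) m"
  proof -
    fix D' \<rho>' m assume E: "env_along \<Delta> D' \<rho>' m"
    have m: "m \<in> Hom C D' (ctx_ob \<Delta>)" using E by (simp add: env_along_def)
    have "interp_ty \<rho>' D' (PTy T as) = tsub C (ty_sem T) (cmp C ?M m)" using ao(3)[OF E] td by simp
    also have "\<dots> = tsub C (tsub C (ty_sem T) ?M) m" using G.tsub_cmp[OF ao(2) m td(3)] .
    finally show "interp_ty \<rho>' D' (PTy T as) = tsub C (interp_ty_in \<Delta> (PTy T as)) m" using e by simp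
  qed
  show ?thesis using ty env by simp
qed

lemma interp_sound_App:
  assumes F: "FDecl \<Gamma>F f U \<in> Sig'" and ok: "ctx_sound \<Delta>" and len: "length as = length \<Gamma>F"
    and IH: "\<forall>k < length \<Gamma>F. interp_tm_in \<Delta> (as ! k) \<in> cTm C (ctx_ob \<Delta>) (interp_ty_in \<Delta> (arg_ty \<Gamma>F as k)) \<and>
       (\<forall>D' \<rho>' m. env_along \<Delta> D' \<rho>' m \<longrightarrow> interp_tm \<rho>' D' (as ! k) = esub C (interp_ty_in \<Delta> (arg_ty \<Gamma>F as k)) (interp_tm_in \<Delta> (as ! k)) m)"
  shows "interp_tm_in \<Delta> (App f as) \<in> cTm C (ctx_ob \<Delta>) (interp_ty_in \<Delta> (substTC U as \<Gamma>F)) \<and>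
    (\<forall>D' \<rho>' m. env_along \<Delta> D' \<rho>' m \<longrightarrow> interp_tm \<rho>' D' (App f as) = esub C (interp_ty_in \<Delta> (substTC U as \<Gamma>F)) (interp_tm_in \<Delta> (App f as)) m)"
proof -
  have fS: "FDecl \<Gamma>F f U \<in> Sig" using F by auto
  have fd: "fun_decl f = (\<Gamma>F, U)" using FDecl_fun_decl[OF fS] .
  have GF: "\<Gamma>F \<in> FOb Sig" "JTy U \<Gamma>F \<in> Jdg Sig" using FDecl_wf[OF fS] by auto
  have D: "ctx_ob \<Delta> \<in> Ob C" using ok by (simp add: ctx_sound_def)
  note ao = interp_args_tel[OF GF(1) D len IH]
  let ?M = "tel_mor C (ctx_ob \<Delta>) (sem_tel G \<Gamma>F) (nth (map (interp_tm_in \<Delta>) as)) (length \<Gamma>F)"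
  have tmg: "JTm (App f (map Var (OV \<Gamma>F))) U \<Gamma>F \<in> Jdg Sig"
    using JTm_generic[OF fS _ GF(2)] GF(1) by (simp add: FOb_iff)
  have Uty: "fun_ty_sem f \<in> cTy C (Fo G \<Gamma>F)" using G.sg_ty[OF GF] fd by (simp add: fun_ty_sem_def)
  have Ute: "fun_tm_sem f \<in> cTm C (Fo G \<Gamma>F) (fun_ty_sem f)" using G.th_tm[OF GF(1) GF(2) tmg] fd by (simp add: fun_ty_sem_def fun_tm_sem_def)
  have eT: "interp_ty_in \<Delta> (substTC U as \<Gamma>F) = tsub C (fun_ty_sem f) ?M"
  proof -
    have "interp_ty_in \<Delta> (substTC U as \<Gamma>F) = interp_ty (\<lambda>x. interp_tm_in \<Delta> (smap (OV \<Gamma>F) as x)) (ctx_ob \<Delta>) U"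
      by (simp add: interp_ty_subst)
    also have "\<dots> = tsub C (sg G \<Gamma>F (\<Gamma>F, U)) ?M"
      by (rule interp_ty_Sig[OF GF(2) D ao(2) interp_smap_sem_env[OF GF(1) D len ao(1)]])
    finally show ?thesis using fd by (simp add: fun_ty_sem_def)
  qed
  have eE: "interp_tm_in \<Delta> (App f as) = esub C (fun_ty_sem f) (fun_tm_sem f) ?M" using fd by simp
  have tm: "interp_tm_in \<Delta> (App f as) \<in> cTm C (ctx_ob \<Delta>) (interp_ty_in \<Delta> (substTC U as \<Gamma>F))"
    using eT eE G.esub_tm[OF ao(2) Uty Ute] by simp
  have env: "\<And>D' \<rho>' m. env_along \<Delta> D' \<rho>' m \<Longrightarrow> interp_tm \<rho>' D' (App f as) = esub C (interp_ty_in \<Delta> (substTC U as \<Gamma>F)) (interp_tm_in \<Delta> (App f as)) m"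
  proof -
    fix D' \<rho>' m assume E: "env_along \<Delta> D' \<rho>' m"
    have m: "m \<in> Hom C D' (ctx_ob \<Delta>)" using E by (simp add: env_along_def)
    have "interp_tm \<rho>' D' (App f as) = esub C (fun_ty_sem f) (fun_tm_sem f) (cmp C ?M m)" using ao(3)[OF E] fd by simp
    also have "\<dots> = esub C (tsub C (fun_ty_sem f) ?M) (esub C (fun_ty_sem f) (fun_tm_sem f) ?M) m"
      using G.esub_cmp[OF ao(2) m Uty Ute] .
    finally show "interp_tm \<rho>' D' (App f as) = esub C (interp_ty_in \<Delta> (substTC U as \<Gamma>F)) (interp_tm_in \<Delta> (App f as)) m" using eT eE by simp
  qed
  show ?thesis using tm env by simp
qed

text \<open>Well-typedness alone is not an inductive invariant: rules R4 and R5 also need that the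
  interpretation of the arguments commutes with substitution along every environment.\<close>

lemma interp_sound: "j \<in> Jdg Sig' \<Longrightarrow> (case j of JCtx \<Gamma> \<Rightarrow> ctx_sound \<Gamma>
  | JTy B \<Gamma> \<Rightarrow> interp_ty_in \<Gamma> B \<in> cTy C (ctx_ob \<Gamma>) \<and> (\<forall>D' \<rho>' m. env_along \<Gamma> D' \<rho>' m \<longrightarrow> interp_ty \<rho>' D' B = tsub C (interp_ty_in \<Gamma> B) m)
  | JTm a B \<Gamma> \<Rightarrow> interp_tm_in \<Gamma> a \<in> cTm C (ctx_ob \<Gamma>) (interp_ty_in \<Gamma> B) \<and> (\<forall>D' \<rho>' m. env_along \<Gamma> D' \<rho>' m \<longrightarrow> interp_tm \<rho>' D' a = esub C (interp_ty_in \<Gamma> B) (interp_tm_in \<Gamma> a) m))"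
proof (induction rule: Jdg.induct)
  case R1 then show ?case by (simp add: ctx_sound_Nil)
next
  case (R2 \<Gamma> B) then show ?case by (simp add: ctx_sound_snoc)
next
  case (R3 \<Gamma> i)
  have ok: "ctx_sound \<Gamma>" using R3 by simp
  show ?case using interp_ty_in_var[OF ok R3.hyps(2)] ok R3.hyps(2) unfolding ctx_sound_def env_along_def by simp
next
  case (R4 \<Gamma>T T \<Delta> as)
  then show ?case using interp_sound_PTy[OF R4.hyps(1)] by (simp add: arg_ty_def)
next
  case (R5 \<Gamma>F f U \<Delta> as)
  then show ?case using interp_sound_App[OF R5.hyps(1)] by (simp add: arg_ty_def)
qed

lemma ctx_sound_JCtx: "JCtx \<Gamma> \<in> Jdg Sig' \<Longrightarrow> ctx_sound \<Gamma>" using interp_sound by fastforce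

lemma interp_ty_in_cTy: "JTy B \<Gamma> \<in> Jdg Sig' \<Longrightarrow> interp_ty_in \<Gamma> B \<in> cTy C (ctx_ob \<Gamma>)" using interp_sound by fastforce

lemma interp_ty_along: "JTy B \<Gamma> \<in> Jdg Sig' \<Longrightarrow> env_along \<Gamma> D' \<rho>' m \<Longrightarrow> interp_ty \<rho>' D' B = tsub C (interp_ty_in \<Gamma> B) m"
  using interp_sound[of "JTy B \<Gamma>"] by auto

lemma interp_tm_in_cTm: "JTm a B \<Gamma> \<in> Jdg Sig' \<Longrightarrow> interp_tm_in \<Gamma> a \<in> cTm C (ctx_ob \<Gamma>) (interp_ty_in \<Gamma> B)" using interp_sound by fastforce

lemma interp_tm_along: "JTm a B \<Gamma> \<in> Jdg Sig' \<Longrightarrow> env_along \<Gamma> D' \<rho>' m \<Longrightarrow> interp_tm \<rho>' D' a = esub C (interp_ty_in \<Gamma> B) (interp_tm_in \<Gamma> a) m"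
  using interp_sound[of "JTm a B \<Gamma>"] by auto

lemma ctx_interp_Sig: "JCtx \<Gamma> \<in> Jdg Sig \<Longrightarrow> ctx_ob \<Gamma> = Fo G \<Gamma> \<and>
   (\<forall>k<length \<Gamma>. ctx_var_ty \<Gamma> (fst (\<Gamma> ! k)) = G.sem_var_ty \<Gamma> k \<and> ctx_var_tm \<Gamma> (fst (\<Gamma> ! k)) = G.sem_var_tm \<Gamma> k)"
proof (induction "length \<Gamma>" arbitrary: \<Gamma>)
  case 0 then show ?case using G.Fo_trm by simp
next
  case (Suc n)
  obtain \<Gamma>1 B where e: "\<Gamma> = \<Gamma>1 @ [(fresh \<Gamma>1, B)]" and c1: "JCtx \<Gamma>1 \<in> Jdg Sig" and TB: "JTy B \<Gamma>1 \<in> Jdg Sig"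
    using JCtx_snoc_cases[OF Suc.prems] Suc.hyps(2) by auto
  have IH: "ctx_ob \<Gamma>1 = Fo G \<Gamma>1" "\<And>k. k < length \<Gamma>1 \<Longrightarrow> ctx_var_ty \<Gamma>1 (fst (\<Gamma>1 ! k)) = G.sem_var_ty \<Gamma>1 k \<and> ctx_var_tm \<Gamma>1 (fst (\<Gamma>1 ! k)) = G.sem_var_tm \<Gamma>1 k"
    using Suc.hyps(1)[of \<Gamma>1] Suc.hyps(2) e c1 by auto
  have G1: "\<Gamma>1 \<in> FOb Sig" using c1 by (rule JCtx_FOb)
  have Ob1: "Fo G \<Gamma>1 \<in> Ob C" using G.Fo_Ob[OF G1] .
  have env: "\<And>k. k < length \<Gamma>1 \<Longrightarrow> ctx_var_tm \<Gamma>1 (fst (\<Gamma>1 ! k)) = esub C (G.sem_var_ty \<Gamma>1 k) (G.sem_var_tm \<Gamma>1 k) (idm C (Fo G \<Gamma>1))"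
    using IH(2) G.esub_sem_var_idm[OF G1] by simp
  have T: "interp_ty_in \<Gamma>1 B = sg G \<Gamma>1 (\<Gamma>1, B)"
    using interp_ty_Sig[OF TB Ob1 G.idm_Hom[OF Ob1] env] IH(1) G.tsub_id[OF Ob1 G.sg_ty[OF G1 TB]] by simp
  have o: "ctx_ob \<Gamma> = Fo G \<Gamma>" using e IH(1) T G.Fo_ext[OF G1 TB] by simp
  have v: "\<forall>k<length \<Gamma>. ctx_var_ty \<Gamma> (fst (\<Gamma> ! k)) = G.sem_var_ty \<Gamma> k \<and> ctx_var_tm \<Gamma> (fst (\<Gamma> ! k)) = G.sem_var_tm \<Gamma> k"
  proof (intro allI impI)
    fix k assume k: "k < length \<Gamma>"
    show "ctx_var_ty \<Gamma> (fst (\<Gamma> ! k)) = G.sem_var_ty \<Gamma> k \<and> ctx_var_tm \<Gamma> (fst (\<Gamma> ! k)) = G.sem_var_tm \<Gamma> k"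
    proof (cases "k < length \<Gamma>1")
      case True
      have ny: "fst (\<Gamma>1 ! k) \<noteq> fresh \<Gamma>1"
        using fresh_notin_OV[of \<Gamma>1] True unfolding OV_def by (metis length_map nth_map nth_mem)
      have nth: "\<Gamma> ! k = \<Gamma>1 ! k" using e True by (simp add: nth_append)
      note W = G.sem_var_weaken[OF G1 TB True]
      show ?thesis using W IH(1) IH(2)[OF True] T ny nth e by (simp add: G.sem_var_ty_def G.sem_var_tm_def)
    next
      case False
      then have kk: "k = length \<Gamma>1" using k e by simp
      have nth: "\<Gamma> ! k = (fresh \<Gamma>1, B)" using e kk by simp
      show ?thesis using G.sg_fresh_var[OF G1 TB] G.th_var[OF G1 TB] IH(1) T nth e
        by (simp add: G.sem_var_ty_def G.sem_var_tm_def)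
    qed
  qed
  show ?case using o v by blast
qed

lemma ctx_var_tm_Sig: "JCtx \<Gamma> \<in> Jdg Sig \<Longrightarrow> k < length \<Gamma> \<Longrightarrow>
   ctx_var_tm \<Gamma> (fst (\<Gamma> ! k)) = esub C (G.sem_var_ty \<Gamma> k) (G.sem_var_tm \<Gamma> k) (idm C (Fo G \<Gamma>))"
  using ctx_interp_Sig G.esub_sem_var_idm[OF JCtx_FOb] by simp

lemma interp_ty_in_Sig: "JTy B \<Gamma> \<in> Jdg Sig \<Longrightarrow> interp_ty_in \<Gamma> B = sg G \<Gamma> (\<Gamma>, B)"
proof -
  assume TB: "JTy B \<Gamma> \<in> Jdg Sig"
  have c1: "JCtx \<Gamma> \<in> Jdg Sig" using JTy_JCtx[OF TB] .
  have G1: "\<Gamma> \<in> FOb Sig" using c1 by (rule JCtx_FOb)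
  have Ob1: "Fo G \<Gamma> \<in> Ob C" using G.Fo_Ob[OF G1] .
  show ?thesis using interp_ty_Sig[OF TB Ob1 G.idm_Hom[OF Ob1] ctx_var_tm_Sig[OF c1]] ctx_interp_Sig[OF c1] G.tsub_id[OF Ob1 G.sg_ty[OF G1 TB]] by simp
qed

lemma interp_tm_in_Sig: "JTm a B \<Gamma> \<in> Jdg Sig \<Longrightarrow> interp_tm_in \<Gamma> a = th G \<Gamma> (\<Gamma>, B) ((\<Gamma>, B), a)"
proof -
  assume Ta: "JTm a B \<Gamma> \<in> Jdg Sig"
  have TB: "JTy B \<Gamma> \<in> Jdg Sig" using JTm_JTy[OF Ta] .
  have c1: "JCtx \<Gamma> \<in> Jdg Sig" using JTy_JCtx[OF TB] .
  have G1: "\<Gamma> \<in> FOb Sig" using c1 by (rule JCtx_FOb)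
  have Ob1: "Fo G \<Gamma> \<in> Ob C" using G.Fo_Ob[OF G1] .
  show ?thesis using interp_tm_Sig[OF Ta Ob1 G.idm_Hom[OF Ob1] ctx_var_tm_Sig[OF c1]] ctx_interp_Sig[OF c1] G.esub_id[OF Ob1 G.sg_ty[OF G1 TB] G.th_tm[OF G1 TB Ta]] by simp
qed

section \<open>The extension is a cwf morphism\<close>

definition interp_tel :: "('s, 'f) ctx \<Rightarrow> nat \<Rightarrow> 't" where
  "interp_tel \<Gamma> = (\<lambda>k. interp_ty_in (take k \<Gamma>) (snd (\<Gamma> ! k)))"

definition ext_mor :: "(('s, 'f) ctx, ('s, 'f) fmor, ('s, 'f) fty, ('s, 'f) ftm, 'o, 'm, 't, 'e) cwf_mor" where
  "ext_mor = \<lparr> Fo = ctx_ob,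
          Fa = (\<lambda>(\<Delta>, \<Gamma>, as). tel_mor C (ctx_ob \<Delta>) (interp_tel \<Gamma>) (nth (map (interp_tm_in \<Delta>) as)) (length \<Gamma>)),
          sg = (\<lambda>\<Gamma> A. interp_ty_in \<Gamma> (snd A)),
          th = (\<lambda>\<Gamma> A e. interp_tm_in \<Gamma> (snd e)) \<rparr>"

lemma ext_mor_simps[simp]: "Fo ext_mor = ctx_ob" "Fa ext_mor (\<Delta>, \<Gamma>, as) = tel_mor C (ctx_ob \<Delta>) (interp_tel \<Gamma>) (nth (map (interp_tm_in \<Delta>) as)) (length \<Gamma>)"
  "sg ext_mor \<Gamma> (\<Gamma>', B) = interp_ty_in \<Gamma> B" "th ext_mor \<Gamma> X (Y, a) = interp_tm_in \<Gamma> a"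
  by (simp_all add: ext_mor_def)

lemma tel_ob_interp_tel: "k \<le> length \<Gamma> \<Longrightarrow> tel_ob C (interp_tel \<Gamma>) k = ctx_ob (take k \<Gamma>)"
proof (induction k)
  case 0 then show ?case by simp
next
  case (Suc k)
  then have k: "k < length \<Gamma>" by simp
  obtain x B where xb: "\<Gamma> ! k = (x, B)" by (cases "\<Gamma> ! k")
  have "take (Suc k) \<Gamma> = take k \<Gamma> @ [(x, B)]" using k xb by (simp add: take_Suc_conv_app_nth)
  then show ?case using Suc xb by (simp add: interp_tel_def)
qed

lemma interp_tel_snoc: "j \<le> length \<Gamma> \<Longrightarrow> interp_tel (\<Gamma> @ [(y, B)]) j = (if j = length \<Gamma> then interp_ty_in \<Gamma> B else interp_tel \<Gamma> j)"
  unfolding interp_tel_def by (auto simp: nth_append)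

lemma interp_tel_ty: "\<Gamma> \<in> FOb Sig' \<Longrightarrow> k < length \<Gamma> \<Longrightarrow> interp_tel \<Gamma> k \<in> cTy C (tel_ob C (interp_tel \<Gamma>) k)"
  using tel_ob_interp_tel[of k \<Gamma>] interp_ty_in_cTy[OF JCtx_JTy_prefix] by (auto simp: interp_tel_def FOb_iff)

lemma FOb_take_Suc_facts:
  assumes GG: "\<Gamma> \<in> FOb Sig'" and n: "n < length \<Gamma>"
  shows "take (Suc n) \<Gamma> = take n \<Gamma> @ [(fresh (take n \<Gamma>), snd (\<Gamma> ! n))]"
    and "ctx_sound (take n \<Gamma>)"
    and "JTy (snd (\<Gamma> ! n)) (take n \<Gamma>) \<in> Jdg Sig'"
    and "\<And>j. j < n \<Longrightarrow> fst (\<Gamma> ! j) \<noteq> fresh (take n \<Gamma>)"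
    and "fst (\<Gamma> ! n) = fresh (take n \<Gamma>)"
proof -
  have pc: "precontext \<Gamma>" "JCtx \<Gamma> \<in> Jdg Sig'" using GG by (auto simp: FOb_iff)
  show "take (Suc n) \<Gamma> = take n \<Gamma> @ [(fresh (take n \<Gamma>), snd (\<Gamma> ! n))]" using take_Suc_precontext[OF pc(1) n] .
  show "ctx_sound (take n \<Gamma>)" using ctx_sound_JCtx[OF JCtx_take[OF pc(2)]] .
  show "JTy (snd (\<Gamma> ! n)) (take n \<Gamma>) \<in> Jdg Sig'" using JCtx_JTy_prefix[OF pc(2) n] .
  show "fst (\<Gamma> ! n) = fresh (take n \<Gamma>)" using precontext_nth_fst[OF pc(1) n] .
  fix j assume j: "j < n"
  have "fst (\<Gamma> ! j) \<in> set (OV (take n \<Gamma>))" using j n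
    by (auto simp: OV_def in_set_conv_nth intro!: image_eqI[of _ fst "\<Gamma>!j"] exI[of _ j])
  then show "fst (\<Gamma> ! j) \<noteq> fresh (take n \<Gamma>)" using fresh_notin_OV by metis
qed

lemma esub_ctx_var_tel_mor:
  assumes GG: "\<Gamma> \<in> FOb Sig'" and D': "D' \<in> Ob C"
  shows "n \<le> length \<Gamma> \<Longrightarrow> tel_wf C D' (interp_tel \<Gamma>) es n \<Longrightarrow> j < n \<Longrightarrow>
    esub C (ctx_var_ty (take n \<Gamma>) (fst (\<Gamma> ! j))) (ctx_var_tm (take n \<Gamma>) (fst (\<Gamma> ! j))) (tel_mor C D' (interp_tel \<Gamma>) es n) = es j"
proof (induction n arbitrary: j)
  case 0 then show ?case by simp
next
  case (Suc n)
  have n: "n < length \<Gamma>" using Suc by simp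
  note sf = FOb_take_Suc_facts[OF GG n]
  define \<Gamma>1 where "\<Gamma>1 = take n \<Gamma>"
  define B where "B = snd (\<Gamma> ! n)"
  define T where "T = interp_ty_in \<Gamma>1 B"
  define p where "p = pr C (ctx_ob \<Gamma>1) T"
  have ok1: "ctx_sound \<Gamma>1" using sf(2) by (simp add: \<Gamma>1_def)
  have T: "T \<in> cTy C (ctx_ob \<Gamma>1)" using interp_ty_in_cTy[OF sf(3)] by (simp add: T_def \<Gamma>1_def B_def)
  have tk: "take (Suc n) \<Gamma> = \<Gamma>1 @ [(fresh \<Gamma>1, B)]" using sf(1) by (simp add: \<Gamma>1_def B_def)
  have ok: "tel_wf C D' (interp_tel \<Gamma>) es n" "es n \<in> cTm C D' (tsub C (interp_tel \<Gamma> n) (tel_mor C D' (interp_tel \<Gamma>) es n))"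
    using Suc.prems by (auto simp: tel_wf_Suc)
  have Tn: "interp_tel \<Gamma> n = T" by (simp add: interp_tel_def T_def \<Gamma>1_def B_def)
  have M: "tel_mor C D' (interp_tel \<Gamma>) es n \<in> Hom C D' (ctx_ob \<Gamma>1)" using G.tel_mor_Hom[OF D' ok(1)] tel_ob_interp_tel[of n \<Gamma>] n by (simp add: \<Gamma>1_def)
  note P = G.pair_laws[OF M T ok(2)[unfolded Tn]]
  have SMs: "tel_mor C D' (interp_tel \<Gamma>) es (Suc n) = pair C T (tel_mor C D' (interp_tel \<Gamma>) es n) (es n)" using Tn by simp
  show ?case
  proof (cases "j = n")
    case True
    then show ?thesis using P SMs tk sf(5) by (simp add: T_def p_def \<Gamma>1_def)
  next
    case False
    then have j: "j < n" using Suc by simp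
    have jl: "j < length \<Gamma>1" and nth: "fst (\<Gamma> ! j) = fst (\<Gamma>1 ! j)" using j n by (simp_all add: \<Gamma>1_def)
    have "esub C (ctx_var_ty (take (Suc n) \<Gamma>) (fst (\<Gamma> ! j))) (ctx_var_tm (take (Suc n) \<Gamma>) (fst (\<Gamma> ! j))) (tel_mor C D' (interp_tel \<Gamma>) es (Suc n))
        = esub C (ctx_var_ty \<Gamma>1 (fst (\<Gamma> ! j))) (ctx_var_tm \<Gamma>1 (fst (\<Gamma> ! j))) (cmp C p (tel_mor C D' (interp_tel \<Gamma>) es (Suc n)))"
      using esub_ctx_var_snoc[OF ok1 T[unfolded T_def] jl] P SMs tk nth by (simp add: T_def p_def)
    also have "\<dots> = esub C (ctx_var_ty \<Gamma>1 (fst (\<Gamma> ! j))) (ctx_var_tm \<Gamma>1 (fst (\<Gamma> ! j))) (tel_mor C D' (interp_tel \<Gamma>) es n)"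
      using P SMs by (simp add: p_def)
    also have "\<dots> = es j" using Suc.IH[OF _ ok(1) j] n by (simp add: \<Gamma>1_def)
    finally show ?thesis .
  qed
qed

lemma tel_mor_eta:
  assumes GG: "\<Gamma> \<in> FOb Sig'"
  shows "n \<le> length \<Gamma> \<Longrightarrow> h \<in> Hom C D' (ctx_ob (take n \<Gamma>)) \<Longrightarrow>
    tel_mor C D' (interp_tel \<Gamma>) (\<lambda>k. esub C (ctx_var_ty (take n \<Gamma>) (fst (\<Gamma> ! k))) (ctx_var_tm (take n \<Gamma>) (fst (\<Gamma> ! k))) h) n = h"
proof (induction n arbitrary: h)
  case 0
  then show ?case using G.Hom_trm_unique G.trm_mor_Hom G.Hom_Ob by simp (metis G.Hom_Ob)
next
  case (Suc n)
  have n: "n < length \<Gamma>" using Suc by simp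
  note sf = FOb_take_Suc_facts[OF GG n]
  define \<Gamma>1 where "\<Gamma>1 = take n \<Gamma>"
  define B where "B = snd (\<Gamma> ! n)"
  define T where "T = interp_ty_in \<Gamma>1 B"
  define p where "p = pr C (ctx_ob \<Gamma>1) T"
  have ok1: "ctx_sound \<Gamma>1" using sf(2) by (simp add: \<Gamma>1_def)
  have D1: "ctx_ob \<Gamma>1 \<in> Ob C" using ok1 by (simp add: ctx_sound_def)
  have T: "T \<in> cTy C (ctx_ob \<Gamma>1)" using interp_ty_in_cTy[OF sf(3)] by (simp add: T_def \<Gamma>1_def B_def)
  have tk: "take (Suc n) \<Gamma> = \<Gamma>1 @ [(fresh \<Gamma>1, B)]" using sf(1) by (simp add: \<Gamma>1_def B_def)
  have Tn: "interp_tel \<Gamma> n = T" by (simp add: interp_tel_def T_def \<Gamma>1_def B_def)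
  have pH: "p \<in> Hom C (ext C (ctx_ob \<Gamma>1) T) (ctx_ob \<Gamma>1)" unfolding p_def by (rule G.pr_Hom[OF D1 T])
  have h: "h \<in> Hom C D' (ext C (ctx_ob \<Gamma>1) T)" using Suc.prems tk by (simp add: T_def)
  have ph: "cmp C p h \<in> Hom C D' (ctx_ob \<Gamma>1)" using G.cmp_Hom[OF h pH] .
  have es: "\<And>k. k < n \<Longrightarrow> esub C (ctx_var_ty (take (Suc n) \<Gamma>) (fst (\<Gamma> ! k))) (ctx_var_tm (take (Suc n) \<Gamma>) (fst (\<Gamma> ! k))) h
       = esub C (ctx_var_ty \<Gamma>1 (fst (\<Gamma> ! k))) (ctx_var_tm \<Gamma>1 (fst (\<Gamma> ! k))) (cmp C p h)"
    using esub_ctx_var_snoc[OF ok1 T[unfolded T_def] _ h[unfolded T_def]] tk n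
    by (simp add: T_def p_def \<Gamma>1_def)
  have "tel_mor C D' (interp_tel \<Gamma>) (\<lambda>k. esub C (ctx_var_ty (take (Suc n) \<Gamma>) (fst (\<Gamma> ! k))) (ctx_var_tm (take (Suc n) \<Gamma>) (fst (\<Gamma> ! k))) h) n
      = tel_mor C D' (interp_tel \<Gamma>) (\<lambda>k. esub C (ctx_var_ty \<Gamma>1 (fst (\<Gamma> ! k))) (ctx_var_tm \<Gamma>1 (fst (\<Gamma> ! k))) (cmp C p h)) n"
    by (rule tel_mor_cong) (use es in auto)
  also have "\<dots> = cmp C p h" using Suc.IH[of "cmp C p h"] ph n by (simp add: \<Gamma>1_def)
  finally have e1: "tel_mor C D' (interp_tel \<Gamma>) (\<lambda>k. esub C (ctx_var_ty (take (Suc n) \<Gamma>) (fst (\<Gamma> ! k))) (ctx_var_tm (take (Suc n) \<Gamma>) (fst (\<Gamma> ! k))) h) n = cmp C p h" .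
  have e2: "esub C (ctx_var_ty (take (Suc n) \<Gamma>) (fst (\<Gamma> ! n))) (ctx_var_tm (take (Suc n) \<Gamma>) (fst (\<Gamma> ! n))) h
      = esub C (tsub C T p) (var C (ctx_ob \<Gamma>1) T) h"
    using tk sf(5) by (simp add: T_def p_def \<Gamma>1_def)
  show ?case using e1 e2 Tn G.pair_eta[OF D1 T h] by (simp add: p_def)
qed

lemma tel_wf_interp_args_ext:
  assumes GT: "\<Gamma> \<in> FOb Sig'" and D: "D \<in> Ob C" and len: "length as = length \<Gamma>"
    and tm: "\<forall>k<length \<Gamma>. interp_tm \<rho> D (as ! k) \<in> cTm C D (interp_ty \<rho> D (arg_ty \<Gamma> as k))"
  shows "n \<le> length \<Gamma> \<Longrightarrow> tel_wf C D (interp_tel \<Gamma>) (nth (map (interp_tm \<rho> D) as)) n \<and>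
     (\<forall>k<n. interp_ty \<rho> D (arg_ty \<Gamma> as k) = tsub C (interp_tel \<Gamma> k) (tel_mor C D (interp_tel \<Gamma>) (nth (map (interp_tm \<rho> D) as)) k))"
proof (induction n)
  case 0 then show ?case by (simp add: tel_wf_def)
next
  case (Suc n)
  let ?es = "nth (map (interp_tm \<rho> D) as)"
  have n: "n < length \<Gamma>" using Suc by simp
  have IH: "tel_wf C D (interp_tel \<Gamma>) ?es n"
     "\<forall>k<n. interp_ty \<rho> D (arg_ty \<Gamma> as k) = tsub C (interp_tel \<Gamma> k) (tel_mor C D (interp_tel \<Gamma>) ?es k)" using Suc by auto
  note sf = FOb_take_Suc_facts[OF GT n]
  define \<Gamma>0 where "\<Gamma>0 = take n \<Gamma>"
  have pc0: "precontext \<Gamma>0" using GT by (simp add: FOb_iff precontext_take \<Gamma>0_def)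
  have M: "tel_mor C D (interp_tel \<Gamma>) ?es n \<in> Hom C D (ctx_ob \<Gamma>0)"
    using G.tel_mor_Hom[OF D IH(1)] tel_ob_interp_tel[of n \<Gamma>] n unfolding \<Gamma>0_def by simp
  let ?\<rho>' = "\<lambda>x. interp_tm \<rho> D (smap (map fst \<Gamma>0) (take n as) x)"
  have E: "env_along \<Gamma>0 D ?\<rho>' (tel_mor C D (interp_tel \<Gamma>) ?es n)"
    unfolding env_along_def
  proof (intro conjI D M allI impI)
    fix k assume k: "k < length \<Gamma>0"
    have kn: "k < n" using k by (simp add: \<Gamma>0_def)
    have di: "distinct (map fst \<Gamma>0)" using distinct_OV_precontext[OF pc0] by (simp add: OV_def)
    have "smap (map fst \<Gamma>0) (take n as) (fst (\<Gamma>0 ! k)) = take n as ! k"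
      using smap_nth[OF di, of "take n as" k] len n k by (simp add: \<Gamma>0_def)
    then have "?\<rho>' (fst (\<Gamma>0 ! k)) = ?es k" using kn len n by simp
    also have "\<dots> = esub C (ctx_var_ty (take n \<Gamma>) (fst (\<Gamma> ! k))) (ctx_var_tm (take n \<Gamma>) (fst (\<Gamma> ! k))) (tel_mor C D (interp_tel \<Gamma>) ?es n)"
      using esub_ctx_var_tel_mor[OF GT D _ IH(1) kn] n by simp
    finally show "?\<rho>' (fst (\<Gamma>0 ! k)) = esub C (ctx_var_ty \<Gamma>0 (fst (\<Gamma>0 ! k))) (ctx_var_tm \<Gamma>0 (fst (\<Gamma>0 ! k))) (tel_mor C D (interp_tel \<Gamma>) ?es n)"
      using kn by (simp add: \<Gamma>0_def)
  qed
  have "interp_ty \<rho> D (arg_ty \<Gamma> as n) = interp_ty ?\<rho>' D (snd (\<Gamma> ! n))"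
    by (simp add: arg_ty_def interp_ty_subst \<Gamma>0_def)
  also have "\<dots> = tsub C (interp_ty_in \<Gamma>0 (snd (\<Gamma> ! n))) (tel_mor C D (interp_tel \<Gamma>) ?es n)"
    using interp_ty_along[OF sf(3) E[unfolded \<Gamma>0_def]] by (simp add: \<Gamma>0_def)
  finally have eq: "interp_ty \<rho> D (arg_ty \<Gamma> as n) = tsub C (interp_tel \<Gamma> n) (tel_mor C D (interp_tel \<Gamma>) ?es n)"
    by (simp add: interp_tel_def \<Gamma>0_def)
  have "?es n \<in> cTm C D (tsub C (interp_tel \<Gamma> n) (tel_mor C D (interp_tel \<Gamma>) ?es n))"
    using tm n eq len by (metis nth_map)
  then have "tel_wf C D (interp_tel \<Gamma>) ?es (Suc n)"
    using IH(1) interp_tel_ty[OF GT n] by (simp add: tel_wf_Suc)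
  then show ?case using IH(2) eq by (auto simp: less_Suc_eq)
qed

lemma env_along_Fa:
  assumes h: "(\<Delta>, \<Gamma>, as) \<in> Hom (FSig Sig') \<Delta> \<Gamma>"
  shows "env_along \<Gamma> (ctx_ob \<Delta>) (\<lambda>x. interp_tm_in \<Delta> (smap (OV \<Gamma>) as x)) (Fa ext_mor (\<Delta>, \<Gamma>, as))"
    and "tel_wf C (ctx_ob \<Delta>) (interp_tel \<Gamma>) (nth (map (interp_tm_in \<Delta>) as)) (length \<Gamma>)"
    and "\<forall>k<length \<Gamma>. interp_ty_in \<Delta> (arg_ty \<Gamma> as k) = tsub C (interp_tel \<Gamma> k) (tel_mor C (ctx_ob \<Delta>) (interp_tel \<Gamma>) (nth (map (interp_tm_in \<Delta>) as)) k)"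
    and "\<forall>k<length \<Gamma>. JTm (as ! k) (arg_ty \<Gamma> as k) \<Delta> \<in> Jdg Sig'"
proof -
  have DD: "\<Delta> \<in> FOb Sig'" "\<Gamma> \<in> FOb Sig'" "cmap (Jdg Sig') as \<Delta> \<Gamma>" using h by (auto simp: FSig_Hom_iff)
  have len: "length as = length \<Gamma>" using DD by (simp add: cmap_def)
  have D: "ctx_ob \<Delta> \<in> Ob C" using ctx_sound_JCtx[of \<Delta>] DD by (simp add: FOb_iff ctx_sound_def)
  show tms: "\<forall>k<length \<Gamma>. JTm (as ! k) (arg_ty \<Gamma> as k) \<Delta> \<in> Jdg Sig'" using cmap_JTm[OF DD(3)] by blast
  have tm: "\<forall>k<length \<Gamma>. interp_tm_in \<Delta> (as ! k) \<in> cTm C (ctx_ob \<Delta>) (interp_ty_in \<Delta> (arg_ty \<Gamma> as k))" using tms interp_tm_in_cTm by blast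
  note c = tel_wf_interp_args_ext[OF DD(2) D len tm, of "length \<Gamma>"]
  show ok: "tel_wf C (ctx_ob \<Delta>) (interp_tel \<Gamma>) (nth (map (interp_tm_in \<Delta>) as)) (length \<Gamma>)" using c by simp
  show "\<forall>k<length \<Gamma>. interp_ty_in \<Delta> (arg_ty \<Gamma> as k) = tsub C (interp_tel \<Gamma> k) (tel_mor C (ctx_ob \<Delta>) (interp_tel \<Gamma>) (nth (map (interp_tm_in \<Delta>) as)) k)"
    using c by simp
  have M: "Fa ext_mor (\<Delta>, \<Gamma>, as) \<in> Hom C (ctx_ob \<Delta>) (ctx_ob \<Gamma>)" using G.tel_mor_Hom[OF D ok] tel_ob_interp_tel[of "length \<Gamma>" \<Gamma>] by simp
  show "env_along \<Gamma> (ctx_ob \<Delta>) (\<lambda>x. interp_tm_in \<Delta> (smap (OV \<Gamma>) as x)) (Fa ext_mor (\<Delta>, \<Gamma>, as))"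
    unfolding env_along_def
  proof (intro conjI D M allI impI)
    fix k assume k: "k < length \<Gamma>"
    have di: "distinct (OV \<Gamma>)" using DD by (simp add: FOb_iff distinct_OV_precontext)
    have "smap (OV \<Gamma>) as (fst (\<Gamma> ! k)) = as ! k" using smap_nth[OF di, of as k] len k by (simp add: OV_def)
    then show "interp_tm_in \<Delta> (smap (OV \<Gamma>) as (fst (\<Gamma> ! k))) = esub C (ctx_var_ty \<Gamma> (fst (\<Gamma> ! k))) (ctx_var_tm \<Gamma> (fst (\<Gamma> ! k))) (Fa ext_mor (\<Delta>, \<Gamma>, as))"
      using esub_ctx_var_tel_mor[OF DD(2) D _ ok k] len k by simp
  qed
qed

lemma ext_mor_Hom:
  "(\<Delta>, \<Gamma>, as) \<in> Hom (FSig Sig') \<Delta> \<Gamma> \<Longrightarrow> Fa ext_mor (\<Delta>, \<Gamma>, as) \<in> Hom C (ctx_ob \<Delta>) (ctx_ob \<Gamma>)"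
  using env_along_Fa(1) unfolding env_along_def by blast

lemma ext_mor_tsub:
  assumes "(\<Delta>, \<Gamma>, as) \<in> Hom (FSig Sig') \<Delta> \<Gamma>" and "JTy B \<Gamma> \<in> Jdg Sig'"
  shows "interp_ty_in \<Delta> (substTC B as \<Gamma>) = tsub C (interp_ty_in \<Gamma> B) (Fa ext_mor (\<Delta>, \<Gamma>, as))"
proof -
  have "interp_ty_in \<Delta> (substTC B as \<Gamma>) = interp_ty (\<lambda>x. interp_tm_in \<Delta> (smap (OV \<Gamma>) as x)) (ctx_ob \<Delta>) B"
    by (simp add: interp_ty_subst)
  also have "\<dots> = tsub C (interp_ty_in \<Gamma> B) (Fa ext_mor (\<Delta>, \<Gamma>, as))"
    using interp_ty_along[OF assms(2) env_along_Fa(1)[OF assms(1)]] .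
  finally show ?thesis .
qed

lemma ext_mor_esub:
  assumes "(\<Delta>, \<Gamma>, as) \<in> Hom (FSig Sig') \<Delta> \<Gamma>" and "JTm t B \<Gamma> \<in> Jdg Sig'"
  shows "interp_tm_in \<Delta> (substPC t as \<Gamma>) = esub C (interp_ty_in \<Gamma> B) (interp_tm_in \<Gamma> t) (Fa ext_mor (\<Delta>, \<Gamma>, as))"
proof -
  have "interp_tm_in \<Delta> (substPC t as \<Gamma>) = interp_tm (\<lambda>x. interp_tm_in \<Delta> (smap (OV \<Gamma>) as x)) (ctx_ob \<Delta>) t"
    by (simp add: interp_tm_subst)
  also have "\<dots> = esub C (interp_ty_in \<Gamma> B) (interp_tm_in \<Gamma> t) (Fa ext_mor (\<Delta>, \<Gamma>, as))"
    using interp_tm_along[OF assms(2) env_along_Fa(1)[OF assms(1)]] .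
  finally show ?thesis .
qed

lemma ext_mor_cmp:
  assumes hf: "(\<Delta>, \<Gamma>, ss) \<in> Hom (FSig Sig') \<Delta> \<Gamma>" and hg: "(\<Gamma>, \<Theta>, ts) \<in> Hom (FSig Sig') \<Gamma> \<Theta>"
  shows "Fa ext_mor (\<Delta>, \<Theta>, map (\<lambda>t. substPC t ss \<Gamma>) ts) = cmp C (Fa ext_mor (\<Gamma>, \<Theta>, ts)) (Fa ext_mor (\<Delta>, \<Gamma>, ss))"
proof -
  have lt: "length ts = length \<Theta>" using hg by (simp add: FSig_Hom_iff cmap_def)
  note Eg = env_along_Fa[OF hg]
  have m: "Fa ext_mor (\<Delta>, \<Gamma>, ss) \<in> Hom C (ctx_ob \<Delta>) (ctx_ob \<Gamma>)" using ext_mor_Hom[OF hf] .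
  have D: "ctx_ob \<Delta> \<in> Ob C" using G.Hom_Ob[OF m] by blast
  let ?es = "nth (map (interp_tm_in \<Gamma>) ts)"
  have "cmp C (Fa ext_mor (\<Gamma>, \<Theta>, ts)) (Fa ext_mor (\<Delta>, \<Gamma>, ss)) = tel_mor C (ctx_ob \<Delta>) (interp_tel \<Theta>)
     (\<lambda>k. esub C (tsub C (interp_tel \<Theta> k) (tel_mor C (ctx_ob \<Gamma>) (interp_tel \<Theta>) ?es k)) (?es k) (Fa ext_mor (\<Delta>, \<Gamma>, ss))) (length \<Theta>)"
    using G.tel_mor_cmp[OF D m Eg(2)] by simp
  also have "\<dots> = tel_mor C (ctx_ob \<Delta>) (interp_tel \<Theta>) (nth (map (interp_tm_in \<Delta>) (map (\<lambda>t. substPC t ss \<Gamma>) ts))) (length \<Theta>)"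
  proof (rule tel_mor_cong)
    fix k assume k: "k < length \<Theta>"
    have "interp_tm_in \<Delta> (substPC (ts ! k) ss \<Gamma>) = esub C (interp_ty_in \<Gamma> (arg_ty \<Theta> ts k)) (?es k) (Fa ext_mor (\<Delta>, \<Gamma>, ss))"
      using ext_mor_esub[OF hf] Eg(4) k lt by simp
    then show "esub C (tsub C (interp_tel \<Theta> k) (tel_mor C (ctx_ob \<Gamma>) (interp_tel \<Theta>) ?es k)) (?es k) (Fa ext_mor (\<Delta>, \<Gamma>, ss))
        = nth (map (interp_tm_in \<Delta>) (map (\<lambda>t. substPC t ss \<Gamma>) ts)) k"
      using Eg(3) k lt by simp
  qed simp
  finally show ?thesis by simp
qed

lemma ext_mor_idm: "\<Gamma> \<in> FOb Sig' \<Longrightarrow> Fa ext_mor (\<Gamma>, \<Gamma>, map Var (OV \<Gamma>)) = idm C (ctx_ob \<Gamma>)"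
proof -
  assume GG: "\<Gamma> \<in> FOb Sig'"
  have ok: "ctx_sound \<Gamma>" using ctx_sound_JCtx GG by (simp add: FOb_iff)
  have D: "ctx_ob \<Gamma> \<in> Ob C" using ok by (simp add: ctx_sound_def)
  have "tel_mor C (ctx_ob \<Gamma>) (interp_tel \<Gamma>) (nth (map (interp_tm_in \<Gamma>) (map Var (OV \<Gamma>)))) (length \<Gamma>)
     = tel_mor C (ctx_ob \<Gamma>) (interp_tel \<Gamma>) (\<lambda>k. esub C (ctx_var_ty (take (length \<Gamma>) \<Gamma>) (fst (\<Gamma> ! k))) (ctx_var_tm (take (length \<Gamma>) \<Gamma>) (fst (\<Gamma> ! k))) (idm C (ctx_ob \<Gamma>))) (length \<Gamma>)"
    by (rule tel_mor_cong) (use ok G.esub_id[OF D] in \<open>auto simp: ctx_sound_def OV_def\<close>)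
  also have "\<dots> = idm C (ctx_ob \<Gamma>)"
    using tel_mor_eta[OF GG, of "length \<Gamma>" "idm C (ctx_ob \<Gamma>)"] G.idm_Hom[OF D] by simp
  finally show ?thesis by simp
qed

lemma ext_mor_pr:
  assumes GG: "\<Gamma> \<in> FOb Sig'" and TB: "JTy B \<Gamma> \<in> Jdg Sig'"
  shows "Fa ext_mor (\<Gamma> @ [(fresh \<Gamma>, B)], \<Gamma>, map Var (OV \<Gamma>)) = pr C (ctx_ob \<Gamma>) (interp_ty_in \<Gamma> B)"
proof -
  have ok: "ctx_sound \<Gamma>" using ctx_sound_JCtx GG by (simp add: FOb_iff)
  have D: "ctx_ob \<Gamma> \<in> Ob C" using ok by (simp add: ctx_sound_def)
  have T: "interp_ty_in \<Gamma> B \<in> cTy C (ctx_ob \<Gamma>)" using interp_ty_in_cTy[OF TB] .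
  have ny: "\<And>k. k < length \<Gamma> \<Longrightarrow> fst (\<Gamma> ! k) \<noteq> fresh \<Gamma>"
    using fresh_notin_OV[of \<Gamma>] unfolding OV_def by (metis length_map nth_map nth_mem)
  have "tel_mor C (ctx_ob (\<Gamma> @ [(fresh \<Gamma>, B)])) (interp_tel \<Gamma>) (nth (map (interp_tm_in (\<Gamma> @ [(fresh \<Gamma>, B)])) (map Var (OV \<Gamma>)))) (length \<Gamma>)
     = tel_mor C (ctx_ob (\<Gamma> @ [(fresh \<Gamma>, B)])) (interp_tel \<Gamma>) (\<lambda>k. esub C (ctx_var_ty (take (length \<Gamma>) \<Gamma>) (fst (\<Gamma> ! k))) (ctx_var_tm (take (length \<Gamma>) \<Gamma>) (fst (\<Gamma> ! k))) (pr C (ctx_ob \<Gamma>) (interp_ty_in \<Gamma> B))) (length \<Gamma>)"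
    by (rule tel_mor_cong) (use ny in \<open>auto simp: OV_def\<close>)
  also have "\<dots> = pr C (ctx_ob \<Gamma>) (interp_ty_in \<Gamma> B)"
    using tel_mor_eta[OF GG, of "length \<Gamma>" "pr C (ctx_ob \<Gamma>) (interp_ty_in \<Gamma> B)"] G.pr_Hom[OF D T] by simp
  finally show ?thesis by simp
qed

lemma ext_mor_pair:
  "length ss = length \<Gamma> \<Longrightarrow>
   Fa ext_mor (\<Delta>, \<Gamma> @ [(fresh \<Gamma>, B)], ss @ [b]) = pair C (interp_ty_in \<Gamma> B) (Fa ext_mor (\<Delta>, \<Gamma>, ss)) (interp_tm_in \<Delta> b)"
proof -
  assume len: "length ss = length \<Gamma>"
  have "tel_mor C (ctx_ob \<Delta>) (interp_tel (\<Gamma> @ [(fresh \<Gamma>, B)])) (nth (map (interp_tm_in \<Delta>) (ss @ [b]))) (length \<Gamma>)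
      = tel_mor C (ctx_ob \<Delta>) (interp_tel \<Gamma>) (nth (map (interp_tm_in \<Delta>) ss)) (length \<Gamma>)"
    by (rule tel_mor_cong) (use len in \<open>auto simp: interp_tel_snoc nth_append\<close>)
  then show ?thesis using len by (simp add: interp_tel_snoc nth_append)
qed

lemma cwf_morphism_ext_mor: "cwf_morphism (FSig Sig') C ext_mor"
  unfolding cwf_morphism_def
proof (intro conjI)
  show "\<forall>\<Gamma> \<in> Ob (FSig Sig'). Fo ext_mor \<Gamma> \<in> Ob C"
    using ctx_sound_JCtx by (auto simp: FOb_iff ctx_sound_def)
  show "\<forall>\<Delta> \<Gamma> f. f \<in> Hom (FSig Sig') \<Delta> \<Gamma> \<longrightarrow> Fa ext_mor f \<in> Hom C (Fo ext_mor \<Delta>) (Fo ext_mor \<Gamma>)"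
    by (metis FSig_Hom_triple ext_mor_Hom ext_mor_simps(1))
  show "\<forall>\<Gamma> \<in> Ob (FSig Sig'). Fa ext_mor (idm (FSig Sig') \<Gamma>) = idm C (Fo ext_mor \<Gamma>)"
    using ext_mor_idm by simp
  show "\<forall>f g. f \<in> Arr (FSig Sig') \<longrightarrow> g \<in> Arr (FSig Sig') \<longrightarrow> cd (FSig Sig') f = dm (FSig Sig') g \<longrightarrow>
        Fa ext_mor (cmp (FSig Sig') g f) = cmp C (Fa ext_mor g) (Fa ext_mor f)"
    using ext_mor_cmp by (auto simp: Hom_def)
  show "Fo ext_mor (trm (FSig Sig')) = trm C" by simp
  show "\<forall>\<Gamma> \<in> Ob (FSig Sig'). \<forall>A \<in> cTy (FSig Sig') \<Gamma>. sg ext_mor \<Gamma> A \<in> cTy C (Fo ext_mor \<Gamma>)"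
    using interp_ty_in_cTy by auto
  show "\<forall>\<Delta> \<Gamma> f A. f \<in> Hom (FSig Sig') \<Delta> \<Gamma> \<longrightarrow> A \<in> cTy (FSig Sig') \<Gamma> \<longrightarrow>
        sg ext_mor \<Delta> (tsub (FSig Sig') A f) = tsub C (sg ext_mor \<Gamma> A) (Fa ext_mor f)"
    using ext_mor_tsub by (auto simp: FSig_Hom_iff)
  show "\<forall>\<Gamma> \<in> Ob (FSig Sig'). \<forall>A \<in> cTy (FSig Sig') \<Gamma>.
        Fo ext_mor (ext (FSig Sig') \<Gamma> A) = ext C (Fo ext_mor \<Gamma>) (sg ext_mor \<Gamma> A)
      \<and> Fa ext_mor (pr (FSig Sig') \<Gamma> A) = pr C (Fo ext_mor \<Gamma>) (sg ext_mor \<Gamma> A)"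
    using ext_mor_pr by auto
  show "\<forall>\<Gamma> \<in> Ob (FSig Sig'). \<forall>A \<in> cTy (FSig Sig') \<Gamma>. \<forall>a \<in> cTm (FSig Sig') \<Gamma> A. th ext_mor \<Gamma> A a \<in> cTm C (Fo ext_mor \<Gamma>) (sg ext_mor \<Gamma> A)"
    using interp_tm_in_cTm by auto
  show "\<forall>\<Delta> \<Gamma> f A a. f \<in> Hom (FSig Sig') \<Delta> \<Gamma> \<longrightarrow> A \<in> cTy (FSig Sig') \<Gamma> \<longrightarrow> a \<in> cTm (FSig Sig') \<Gamma> A \<longrightarrow>
        th ext_mor \<Delta> (tsub (FSig Sig') A f) (esub (FSig Sig') A a f) = esub C (sg ext_mor \<Gamma> A) (th ext_mor \<Gamma> A a) (Fa ext_mor f)"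
    using ext_mor_esub by (auto simp: FSig_Hom_iff)
  show "\<forall>\<Gamma> \<in> Ob (FSig Sig'). \<forall>A \<in> cTy (FSig Sig') \<Gamma>.
        th ext_mor (ext (FSig Sig') \<Gamma> A) (tsub (FSig Sig') A (pr (FSig Sig') \<Gamma> A)) (var (FSig Sig') \<Gamma> A) = var C (Fo ext_mor \<Gamma>) (sg ext_mor \<Gamma> A)"
    by auto
  show "\<forall>\<Delta> \<Gamma> f A a. f \<in> Hom (FSig Sig') \<Delta> \<Gamma> \<longrightarrow> A \<in> cTy (FSig Sig') \<Gamma> \<longrightarrow> a \<in> cTm (FSig Sig') \<Delta> (tsub (FSig Sig') A f) \<longrightarrow>
        Fa ext_mor (pair (FSig Sig') A f a) = pair C (sg ext_mor \<Gamma> A) (Fa ext_mor f) (th ext_mor \<Delta> (tsub (FSig Sig') A f) a)"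
    using ext_mor_pair by (auto dest: FSig_Hom_triple simp: FSig_Hom_iff cmap_def)
qed

lemma ext_mor_restricts: "mor_eq (FSig Sig) (mor_comp ext_mor Emb) G"
  unfolding mor_eq_def
proof (intro conjI)
  show "\<forall>\<Gamma>\<in>Ob (FSig Sig). Fo (mor_comp ext_mor Emb) \<Gamma> = Fo G \<Gamma>"
    using ctx_interp_Sig by (auto simp: mor_comp_def Emb_def FOb_iff)
  show "\<forall>f\<in>Arr (FSig Sig). Fa (mor_comp ext_mor Emb) f = Fa G f"
  proof
    fix f assume f: "f \<in> Arr (FSig Sig)"
    obtain \<Delta> \<Gamma> as where fe: "f = (\<Delta>, \<Gamma>, as)" by (cases f) auto
    have h: "(\<Delta>, \<Gamma>, as) \<in> Hom (FSig Sig) \<Delta> \<Gamma>" using f fe by (simp add: Hom_def)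
    have DD: "\<Delta> \<in> FOb Sig" "\<Gamma> \<in> FOb Sig" "cmap (Jdg Sig) as \<Delta> \<Gamma>" using h by (auto simp: FSig_Hom_iff)
    have len: "length as = length \<Gamma>" using DD by (simp add: cmap_def)
    have cD: "JCtx \<Delta> \<in> Jdg Sig" "JCtx \<Gamma> \<in> Jdg Sig" using DD by (auto simp: FOb_iff)
    have "tel_mor C (ctx_ob \<Delta>) (interp_tel \<Gamma>) (nth (map (interp_tm_in \<Delta>) as)) (length \<Gamma>) = tel_mor C (Fo G \<Delta>) (sem_tel G \<Gamma>) (G.sem_args \<Delta> \<Gamma> as) (length \<Gamma>)"
    proof -
      have "tel_mor C (ctx_ob \<Delta>) (interp_tel \<Gamma>) (nth (map (interp_tm_in \<Delta>) as)) (length \<Gamma>) = tel_mor C (ctx_ob \<Delta>) (sem_tel G \<Gamma>) (G.sem_args \<Delta> \<Gamma> as) (length \<Gamma>)"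
      proof (rule tel_mor_cong)
        fix k assume k: "k < length \<Gamma>"
        show "interp_tel \<Gamma> k = sem_tel G \<Gamma> k" using interp_ty_in_Sig[OF JCtx_JTy_prefix[OF cD(2) k]] by (simp add: interp_tel_def sem_tel_def)
        show "nth (map (interp_tm_in \<Delta>) as) k = G.sem_args \<Delta> \<Gamma> as k"
          using interp_tm_in_Sig[OF cmap_JTm[OF DD(3) k]] k len by (simp add: G.sem_args_def)
      qed
      then show ?thesis using ctx_interp_Sig[OF cD(1)] by simp
    qed
    then show "Fa (mor_comp ext_mor Emb) f = Fa G f" using G.Fa_eq_tel_mor(1)[OF h] fe by (simp add: mor_comp_def Emb_def)
  qed
  show "\<forall>\<Gamma>\<in>Ob (FSig Sig). \<forall>A\<in>cTy (FSig Sig) \<Gamma>. sg (mor_comp ext_mor Emb) \<Gamma> A = sg G \<Gamma> A"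
    using interp_ty_in_Sig by (auto simp: mor_comp_def Emb_def)
  show "\<forall>\<Gamma>\<in>Ob (FSig Sig). \<forall>A\<in>cTy (FSig Sig) \<Gamma>. \<forall>a\<in>cTm (FSig Sig) \<Gamma> A. th (mor_comp ext_mor Emb) \<Gamma> A a = th G \<Gamma> A a"
    using interp_tm_in_Sig by (auto simp: mor_comp_def Emb_def)
qed

lemma ext_mor_new_type: "sg ext_mor GS (GS, PTy S (map Var (OV GS))) = A"
proof -
  have G1: "GS \<in> FOb Sig" by (rule GS_FOb)
  have Ob1: "Fo G GS \<in> Ob C" using G.Fo_Ob[OF G1] .
  have h: "(GS, GS, map Var (OV GS)) \<in> Hom (FSig Sig) GS GS"
    using cmap_weakening[of GS "[]" Sig] jS G1 by (simp add: FSig_Hom_iff)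
  have "tel_mor C (ctx_ob GS) (sem_tel G GS) (nth (map (interp_tm_in GS) (map Var (OV GS)))) (length GS)
      = tel_mor C (Fo G GS) (sem_tel G GS) (G.sem_args GS GS (map Var (OV GS))) (length GS)"
  proof -
    have "tel_mor C (ctx_ob GS) (sem_tel G GS) (nth (map (interp_tm_in GS) (map Var (OV GS)))) (length GS)
        = tel_mor C (ctx_ob GS) (sem_tel G GS) (G.sem_args GS GS (map Var (OV GS))) (length GS)"
    proof (rule tel_mor_cong)
      fix k assume k: "k < length GS"
      have v: "map Var (OV GS) ! k = Var (fst (GS ! k))" using k by (simp add: OV_def)
      have l: "length (map Var (OV GS)) = length GS" by (simp add: OV_def)
      show "nth (map (interp_tm_in GS) (map Var (OV GS))) k = G.sem_args GS GS (map Var (OV GS)) k"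
        unfolding G.sem_args_def arg_ty_OV using ctx_interp_Sig[OF jS] k v l by (simp add: G.sem_var_tm_def)
    qed simp
    then show ?thesis using ctx_interp_Sig[OF jS] by simp
  qed
  also have "\<dots> = idm C (Fo G GS)" using G.Fa_eq_tel_mor(1)[OF h] G.Fa_idm[OF G1] by simp
  finally show ?thesis using G.tsub_id[OF Ob1 AT] by (simp add: ty_ctx_def ty_sem_def)
qed

end

section \<open>Uniqueness\<close>

locale sig_extension_unique = sig_extension +
  fixes H
  assumes morH: "cwf_morphism (FSig (insert (TDecl GS S) Sig)) C H"
    and eqH: "mor_eq (FSig Sig) (mor_comp H Emb) G"
    and AH: "sg H GS (GS, PTy S (map Var (OV GS))) = A"
begin

sublocale H: term_model_mor C Sig' H
  by unfold_locales (rule cwfC, rule morH)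

lemma H_sg_Sig: "JTy B \<Gamma> \<in> Jdg Sig \<Longrightarrow> sg H \<Gamma> (\<Gamma>, B) = sg G \<Gamma> (\<Gamma>, B)"
proof -
  assume a: "JTy B \<Gamma> \<in> Jdg Sig"
  have "\<Gamma> \<in> FOb Sig" by (rule JCtx_FOb[OF JTy_JCtx[OF a]])
  then show ?thesis using eqH a unfolding mor_eq_def mor_comp_def Emb_def by simp
qed

lemma H_th_Sig: "JTm a B \<Gamma> \<in> Jdg Sig \<Longrightarrow> th H \<Gamma> (\<Gamma>, B) ((\<Gamma>, B), a) = th G \<Gamma> (\<Gamma>, B) ((\<Gamma>, B), a)"
proof -
  assume a: "JTm a B \<Gamma> \<in> Jdg Sig"
  have "\<Gamma> \<in> FOb Sig" by (rule JCtx_FOb[OF JTm_JCtx[OF a]])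
  then show ?thesis using eqH a JTm_JTy[OF a] unfolding mor_eq_def mor_comp_def Emb_def by simp
qed

lemma Sig_subset: "Sig \<subseteq> Sig'" by auto

lemma sem_tel_H: "\<Gamma> \<in> FOb Sig \<Longrightarrow> k < length \<Gamma> \<Longrightarrow> sem_tel H \<Gamma> k = sem_tel G \<Gamma> k"
  using H_sg_Sig[OF JCtx_JTy_prefix] by (auto simp: sem_tel_def FOb_iff)

abbreviation agrees_on_ctx where
  "agrees_on_ctx \<Gamma> \<equiv> Fo H \<Gamma> = ctx_ob \<Gamma> \<and>
     (\<forall>k<length \<Gamma>. H.sem_var_ty \<Gamma> k = ctx_var_ty \<Gamma> (fst (\<Gamma> ! k)) \<and> H.sem_var_tm \<Gamma> k = ctx_var_tm \<Gamma> (fst (\<Gamma> ! k)))"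

lemma agrees_on_ctx_snoc:
  assumes c1: "JCtx \<Gamma>1 \<in> Jdg Sig'" and TB: "JTy B \<Gamma>1 \<in> Jdg Sig'"
    and IH: "agrees_on_ctx \<Gamma>1" and IHB: "sg H \<Gamma>1 (\<Gamma>1, B) = interp_ty_in \<Gamma>1 B"
  shows "agrees_on_ctx (\<Gamma>1 @ [(fresh \<Gamma>1, B)])"
proof -
  have G1: "\<Gamma>1 \<in> FOb Sig'" using c1 by (rule JCtx_FOb)
  define \<Gamma> where "\<Gamma> = \<Gamma>1 @ [(fresh \<Gamma>1, B)]"
  have o: "Fo H \<Gamma> = ctx_ob \<Gamma>" using IH IHB H.Fo_ext[OF G1 TB] by (simp add: \<Gamma>_def)
  have "H.sem_var_ty \<Gamma> k = ctx_var_ty \<Gamma> (fst (\<Gamma> ! k)) \<and> H.sem_var_tm \<Gamma> k = ctx_var_tm \<Gamma> (fst (\<Gamma> ! k))"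
    if k: "k < length \<Gamma>" for k
  proof (cases "k < length \<Gamma>1")
    case True
    have ny: "fst (\<Gamma>1 ! k) \<noteq> fresh \<Gamma>1"
      using fresh_notin_OV[of \<Gamma>1] True unfolding OV_def by (metis length_map nth_map nth_mem)
    have nth: "\<Gamma> ! k = \<Gamma>1 ! k" using True by (simp add: nth_append \<Gamma>_def)
    show ?thesis using H.sem_var_weaken[OF G1 TB True] IH True IHB ny nth
      by (simp add: H.sem_var_ty_def H.sem_var_tm_def \<Gamma>_def)
  next
    case False
    then have nth: "\<Gamma> ! k = (fresh \<Gamma>1, B)" using k by (simp add: \<Gamma>_def nth_append)
    show ?thesis using H.sg_fresh_var[OF G1 TB] H.th_var[OF G1 TB] IH IHB nth
      by (simp add: H.sem_var_ty_def H.sem_var_tm_def \<Gamma>_def)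
  qed
  then show ?thesis using o unfolding \<Gamma>_def by blast
qed

lemma H_Fa_args:
  assumes h: "(\<Delta>, \<Gamma>, as) \<in> Hom (FSig Sig') \<Delta> \<Gamma>" and \<Gamma>: "\<Gamma> \<in> FOb Sig" and o: "Fo H \<Delta> = ctx_ob \<Delta>"
    and args: "\<And>k. k < length \<Gamma> \<Longrightarrow> th H \<Delta> (\<Delta>, arg_ty \<Gamma> as k) ((\<Delta>, arg_ty \<Gamma> as k), as ! k) = interp_tm_in \<Delta> (as ! k)"
  shows "Fa H (\<Delta>, \<Gamma>, as) = tel_mor C (ctx_ob \<Delta>) (sem_tel G \<Gamma>) (nth (map (interp_tm_in \<Delta>) as)) (length \<Gamma>)"
proof -
  have len: "length as = length \<Gamma>" using h by (simp add: FSig_Hom_iff cmap_def)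
  show ?thesis
    using H.Fa_eq_tel_mor(1)[OF h] o args len by (auto intro!: tel_mor_cong simp: sem_tel_H[OF \<Gamma>] H.sem_args_def)
qed

lemma H_sg_PTy:
  assumes T: "TDecl \<Gamma>T T \<in> Sig'" and h: "(\<Delta>, \<Gamma>T, as) \<in> Hom (FSig Sig') \<Delta> \<Gamma>T"
    and Fa: "Fa H (\<Delta>, \<Gamma>T, as) = tel_mor C (ctx_ob \<Delta>) (sem_tel G \<Gamma>T) (nth (map (interp_tm_in \<Delta>) as)) (length \<Gamma>T)"
  shows "sg H \<Delta> (\<Delta>, PTy T as) = interp_ty_in \<Delta> (PTy T as)"
proof -
  have td: "ty_ctx T = \<Gamma>T" "\<Gamma>T \<in> FOb Sig" using TDecl_ext[OF T] by auto
  have cT: "JCtx \<Gamma>T \<in> Jdg Sig" using td(2) by (simp add: FOb_iff)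
  have len: "length as = length \<Gamma>T" using h by (simp add: FSig_Hom_iff cmap_def)
  have tg: "JTy (PTy T (map Var (OV \<Gamma>T))) \<Gamma>T \<in> Jdg Sig'"
    using JTy_generic[OF T] Jdg_mono[OF cT Sig_subset] by blast
  have base: "sg H \<Gamma>T (\<Gamma>T, PTy T (map Var (OV \<Gamma>T))) = ty_sem T"
  proof (cases "T = S")
    case True
    then have "\<Gamma>T = GS" using T notS by auto
    then show ?thesis using True AH by (simp add: ty_sem_def)
  next
    case False
    then have b: "TDecl \<Gamma>T T \<in> Sig" using T by auto
    show ?thesis using H_sg_Sig[OF JTy_generic[OF b cT]] TDecl_ty_ctx_sem[OF b] by simp
  qed
  have inst: "map (substP (smap (OV \<Gamma>T) as)) (map Var (OV \<Gamma>T)) = as"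
    using map_substP_smap_Var[OF distinct_OV_precontext] td(2) len by (auto simp: FOb_iff OV_def)
  have "sg H \<Delta> (\<Delta>, PTy T as) = tsub C (ty_sem T) (Fa H (\<Delta>, \<Gamma>T, as))"
    using H.sg_tsub[OF h tg] base inst by simp
  then show ?thesis using Fa td(1) by simp
qed

lemma H_th_App:
  assumes F: "FDecl \<Gamma>F f U \<in> Sig'" and h: "(\<Delta>, \<Gamma>F, as) \<in> Hom (FSig Sig') \<Delta> \<Gamma>F"
    and Fa: "Fa H (\<Delta>, \<Gamma>F, as) = tel_mor C (ctx_ob \<Delta>) (sem_tel G \<Gamma>F) (nth (map (interp_tm_in \<Delta>) as)) (length \<Gamma>F)"
  shows "th H \<Delta> (\<Delta>, substTC U as \<Gamma>F) ((\<Delta>, substTC U as \<Gamma>F), App f as) = interp_tm_in \<Delta> (App f as)"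
proof -
  have fS: "FDecl \<Gamma>F f U \<in> Sig" using F by auto
  have fd: "fun_decl f = (\<Gamma>F, U)" using FDecl_fun_decl[OF fS] .
  have GF: "\<Gamma>F \<in> FOb Sig" "JTy U \<Gamma>F \<in> Jdg Sig" using FDecl_wf[OF fS] by auto
  have len: "length as = length \<Gamma>F" using h by (simp add: FSig_Hom_iff cmap_def)
  have tmg: "JTm (App f (map Var (OV \<Gamma>F))) U \<Gamma>F \<in> Jdg Sig"
    using JTm_generic[OF fS _ GF(2)] GF(1) by (simp add: FOb_iff)
  have inst: "map (substP (smap (OV \<Gamma>F) as)) (map Var (OV \<Gamma>F)) = as"
    using map_substP_smap_Var[OF distinct_OV_precontext] GF(1) len by (auto simp: FOb_iff OV_def)
  have "th H \<Delta> (\<Delta>, substTC U as \<Gamma>F) ((\<Delta>, substTC U as \<Gamma>F), App f as)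
      = esub C (sg H \<Gamma>F (\<Gamma>F, U)) (th H \<Gamma>F (\<Gamma>F, U) ((\<Gamma>F, U), App f (map Var (OV \<Gamma>F)))) (Fa H (\<Delta>, \<Gamma>F, as))"
    using H.th_esub[OF h Jdg_mono[OF GF(2) Sig_subset] Jdg_mono[OF tmg Sig_subset]] inst by simp
  also have "\<dots> = esub C (fun_ty_sem f) (fun_tm_sem f) (Fa H (\<Delta>, \<Gamma>F, as))"
    using H_sg_Sig[OF GF(2)] H_th_Sig[OF tmg] fd by (simp add: fun_ty_sem_def fun_tm_sem_def)
  finally show ?thesis using Fa fd by simp
qed

lemma H_agrees: "j \<in> Jdg Sig' \<Longrightarrow> (case j of
    JCtx \<Gamma> \<Rightarrow> agrees_on_ctx \<Gamma>
  | JTy B \<Gamma> \<Rightarrow> sg H \<Gamma> (\<Gamma>, B) = interp_ty_in \<Gamma> B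
  | JTm a B \<Gamma> \<Rightarrow> th H \<Gamma> (\<Gamma>, B) ((\<Gamma>, B), a) = interp_tm_in \<Gamma> a)"
proof (induction rule: Jdg.induct)
  case R1 then show ?case using H.Fo_trm by simp
next
  case (R2 \<Gamma> B) then show ?case using agrees_on_ctx_snoc by simp
next
  case (R3 \<Gamma> i) then show ?case by (simp add: H.sem_var_tm_def)
next
  case (R4 \<Gamma>T T \<Delta> as)
  then have h: "(\<Delta>, \<Gamma>T, as) \<in> Hom (FSig Sig') \<Delta> \<Gamma>T" by (simp add: FSig_Hom_cmap cmap_def)
  have "\<Gamma>T \<in> FOb Sig" using TDecl_ext[OF R4.hyps(1)] by blast
  then show ?case using R4 H_sg_PTy[OF R4.hyps(1) h] H_Fa_args[OF h] by (simp add: arg_ty_def)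
next
  case (R5 \<Gamma>F f U \<Delta> as)
  then have h: "(\<Delta>, \<Gamma>F, as) \<in> Hom (FSig Sig') \<Delta> \<Gamma>F" by (simp add: FSig_Hom_cmap cmap_def)
  have "\<Gamma>F \<in> FOb Sig" using FDecl_wf R5.hyps(1) by blast
  then show ?case using R5 H_th_App[OF R5.hyps(1) h] H_Fa_args[OF h] by (simp add: arg_ty_def)
qed

lemma H_eq_ext_mor: "mor_eq (FSig Sig') H ext_mor"
  unfolding mor_eq_def
proof (intro conjI)
  show "\<forall>\<Gamma>\<in>Ob (FSig Sig'). Fo H \<Gamma> = Fo ext_mor \<Gamma>"
    using H_agrees by (fastforce simp: FOb_iff)
  show "\<forall>f\<in>Arr (FSig Sig'). Fa H f = Fa ext_mor f"
  proof
    fix f assume f: "f \<in> Arr (FSig Sig')"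
    obtain \<Delta> \<Gamma> as where fe: "f = (\<Delta>, \<Gamma>, as)" by (cases f) auto
    have h: "(\<Delta>, \<Gamma>, as) \<in> Hom (FSig Sig') \<Delta> \<Gamma>" using f fe by (simp add: Hom_def)
    have DD: "\<Delta> \<in> FOb Sig'" "\<Gamma> \<in> FOb Sig'" "cmap (Jdg Sig') as \<Delta> \<Gamma>" using h by (auto simp: FSig_Hom_iff)
    have len: "length as = length \<Gamma>" using DD by (simp add: cmap_def)
    have cD: "JCtx \<Delta> \<in> Jdg Sig'" "JCtx \<Gamma> \<in> Jdg Sig'" using DD by (auto simp: FOb_iff)
    have o: "Fo H \<Delta> = ctx_ob \<Delta>" using H_agrees[OF cD(1)] by simp
    have "tel_mor C (Fo H \<Delta>) (sem_tel H \<Gamma>) (H.sem_args \<Delta> \<Gamma> as) (length \<Gamma>) = tel_mor C (ctx_ob \<Delta>) (interp_tel \<Gamma>) (nth (map (interp_tm_in \<Delta>) as)) (length \<Gamma>)"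
    proof (unfold o, rule tel_mor_cong)
      fix k assume k: "k < length \<Gamma>"
      show "sem_tel H \<Gamma> k = interp_tel \<Gamma> k" using H_agrees[OF JCtx_JTy_prefix[OF cD(2) k]] by (simp add: interp_tel_def sem_tel_def)
      show "H.sem_args \<Delta> \<Gamma> as k = nth (map (interp_tm_in \<Delta>) as) k"
        using H_agrees[OF cmap_JTm[OF DD(3) k]] k len by (simp add: H.sem_args_def)
    qed
    then show "Fa H f = Fa ext_mor f" using H.Fa_eq_tel_mor(1)[OF h] fe by simp
  qed
  show "\<forall>\<Gamma>\<in>Ob (FSig Sig'). \<forall>A\<in>cTy (FSig Sig') \<Gamma>. sg H \<Gamma> A = sg ext_mor \<Gamma> A"
    using H_agrees by fastforce
  show "\<forall>\<Gamma>\<in>Ob (FSig Sig'). \<forall>A\<in>cTy (FSig Sig') \<Gamma>. \<forall>a\<in>cTm (FSig Sig') \<Gamma> A. th H \<Gamma> A a = th ext_mor \<Gamma> A a"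
    using H_agrees by fastforce
qed

end

theorem mainTheorem14:
  fixes Sig :: "('s, 'f) decl set"
    and C :: "('o, 'm, 't, 'e) cwf"
    and G :: "(('s, 'f) ctx, ('s, 'f) fmor, ('s, 'f) fty, ('s, 'f) ftm, 'o, 'm, 't, 'e) cwf_mor"
    and S :: 's
    and \<Gamma>S :: "('s, 'f) ctx"
    and A :: 't
  assumes "is_signature Sig"
    and "is_cwf C"
    and "cwf_morphism (FSig Sig) C G"
    and "\<forall>\<Gamma>. TDecl \<Gamma> S \<notin> Sig"
    and "precontext \<Gamma>S"
    and "JCtx \<Gamma>S \<in> Jdg Sig"
    and "A \<in> cTy C (Fo G \<Gamma>S)"
  shows "\<exists>G'. cwf_morphism (FSig (insert (TDecl \<Gamma>S S) Sig)) C G'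
            \<and> mor_eq (FSig Sig) (mor_comp G' Emb) G
            \<and> sg G' \<Gamma>S (\<Gamma>S, PTy S (map Var (OV \<Gamma>S))) = A
            \<and> (\<forall>G''. cwf_morphism (FSig (insert (TDecl \<Gamma>S S) Sig)) C G''
                     \<and> mor_eq (FSig Sig) (mor_comp G'' Emb) G
                     \<and> sg G'' \<Gamma>S (\<Gamma>S, PTy S (map Var (OV \<Gamma>S))) = A
                     \<longrightarrow> mor_eq (FSig (insert (TDecl \<Gamma>S S) Sig)) G'' G')"
proof -
  interpret sig_extension Sig C G S \<Gamma>S A
    by unfold_locales (use assms in auto)
  show ?thesis
  proof (intro exI[of _ ext_mor] conjI allI impI)
    show "cwf_morphism (FSig (insert (TDecl \<Gamma>S S) Sig)) C ext_mor" by (rule cwf_morphism_ext_mor)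
    show "mor_eq (FSig Sig) (mor_comp ext_mor Emb) G" by (rule ext_mor_restricts)
    show "sg ext_mor \<Gamma>S (\<Gamma>S, PTy S (map Var (OV \<Gamma>S))) = A" by (rule ext_mor_new_type)
    fix G'' assume h: "cwf_morphism (FSig (insert (TDecl \<Gamma>S S) Sig)) C G''
                     \<and> mor_eq (FSig Sig) (mor_comp G'' Emb) G
                     \<and> sg G'' \<Gamma>S (\<Gamma>S, PTy S (map Var (OV \<Gamma>S))) = A"
    interpret sig_extension_unique Sig C G S \<Gamma>S A G''
      by unfold_locales (use h in auto)
    show "mor_eq (FSig (insert (TDecl \<Gamma>S S) Sig)) G'' ext_mor" by (rule H_eq_ext_mor)
  qed
qed

end
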